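(* Let $(P,H,V,\theta)$ be a frame resolution of $(M,\Omega^1M)$, $\omega$ a left strong connection on $P$, and $\nabla:\Omega^1M\to\Omega^1M\otimes_M\Omega^1M$ the induced covariant derivative, $\nabla(w)=1\otimes w-\sum_ip_i\otimes\theta(v_i)-\sum_ip_i{}^{(1)}\omega(p_i{}^{(2)})\theta(v_i)$ where $s_\theta^{-1}(w)=\sum_ip_i\otimes v_i$. Define the torsion tensor $T=d-\nabla:\Omega^1M\to\Omega^1M\otimes_M\Omega^1M$. For $v\in V$ with $\theta(v)=\sum_\alpha\theta_\alpha\otimes\theta^\alpha$ define \[\bar D\theta(v)=1\otimes\theta(v)-\sum_\alpha\theta_\alpha\otimes1\otimes\theta^\alpha+\theta(v)\otimes1+\omega(v^{\tilde{(1)}})\,\theta(v^{\tilde{(2)}}),\] where $v^{\tilde{(1)}}\otimes v^{\tilde{(2)}}=S^{-1}(v^{(2)})\otimes v^{(1)}$ and $\omega(\cdot)\theta(\cdot)$ multiplies the adjacent copies of $P$. Then $\bar D\theta:V\to P\Omega^2M$ is right strongly tensorial and $T$ corresponds to it under the correspondence $\theta'\mapsto s_{\theta'}$, i.e. $T\big(\sum_ip_i\theta(v_i)\big)=\sum_ip_i\,\bar D\theta(v_i)$ for all $\sum_ip_i\otimes v_i\in\mathcal{E}$.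
   Context: $k$ is a field. For a unital algebra $A$, $\Omega^1A=\ker(\mu:A\otimes A\to A)$ with $da=1\otimes a-a\otimes1$; $\Omega^nA=\Omega^1A\otimes_A\cdots\otimes_A\Omega^1A\subset A^{\otimes(n+1)}$; products by concatenation (multiplying adjacent factors); $d$ on $\Omega^1A$ is $d(a\otimes b)=1\otimes a\otimes b-a\otimes1\otimes b+a\otimes b\otimes1$. A quantum principal bundle: $H$ Hopf algebra ($\Delta h=h_{(1)}\otimes h_{(2)}$, counit $\epsilon$, invertible antipode $S$); $P$ a right $H$-comodule algebra, $\Delta_R(p)=p^{(1)}\otimes p^{(2)}$; $M=\{p:\Delta_Rp=p\otimes1\}$; $P$ flat over $M$; $P\otimes_MP\to P\otimes H$, $p\otimes p'\mapsto pp'^{(1)}\otimes p'^{(2)}$ bijective. For a right $H$-comodule $V$ ($v\mapsto v^{(1)}\otimes v^{(2)}$), $\mathcal{E}=(P\otimes V)^H$ (invariants of the tensor product coaction). $\theta:V\to\Omega^nP$ is right strongly tensorial if it is a comodule map (tensor product coaction on $P^{\otimes(n+1)}$) with image in $P\Omega^nM$. A frame resolution is such $(P,H,V,\theta)$ with $\theta:V\to P\Omega^1M$ right strongly tensorial and $s_\theta:\mathcal{E}\to\Omega^1M$, $\sum p_i\otimes v_i\mapsto\sum p_i\theta(v_i)$ bijective. A connection: linear $\omega:H\to\Omega^1P$ with $\omega(1)=0$, $\sum\omega_\alpha\omega^\alpha{}^{(1)}\otimes\omega^\alpha{}^{(2)}=1\otimes(h-\epsilon(h)1)$ (writing $\omega(h)=\sum\omega_\alpha\otimes\omega^\alpha$)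 and $\Delta_R\omega(h)=\omega(h_{(2)})\otimes S(h_{(1)})h_{(3)}$; left strong if $(\mathrm{id}-\Pi_\omega)(dp)\in(\Omega^1M)P$ for all $p$, where $\Pi_\omega(\sum p\otimes p')=\sum pp'^{(1)}\omega(p'^{(2)})$. *)

theory Defs
  imports Complex_Main
begin

text \<open>
An element of a tensor product U1 \<otimes> ... \<otimes> Un over k is represented by a finite list of
simple tensors (a list of tuples); two such representatives are identified iff every
k-multilinear form takes the same value on them (over a field the k-dual of a tensor
product is the space of multilinear forms, and functionals separate points).
\<close>

definition bilin :: "('k::field \<Rightarrow> 'a::ab_group_add \<Rightarrow> 'a) \<Rightarrow> ('k \<Rightarrow> 'b::ab_group_add \<Rightarrow> 'b) \<Rightarrow> ('a \<Rightarrow> 'b \<Rightarrow> 'k) \<Rightarrow> bool" where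
  "bilin s1 s2 f \<longleftrightarrow>
     (\<forall>y. Vector_Spaces.linear s1 (*) (\<lambda>x. f x y)) \<and> (\<forall>x. Vector_Spaces.linear s2 (*) (f x))"

definition trilin :: "('k::field \<Rightarrow> 'a::ab_group_add \<Rightarrow> 'a) \<Rightarrow> ('k \<Rightarrow> 'b::ab_group_add \<Rightarrow> 'b) \<Rightarrow> ('k \<Rightarrow> 'c::ab_group_add \<Rightarrow> 'c)
    \<Rightarrow> ('a \<Rightarrow> 'b \<Rightarrow> 'c \<Rightarrow> 'k) \<Rightarrow> bool" where
  "trilin s1 s2 s3 f \<longleftrightarrow>
     (\<forall>y z. Vector_Spaces.linear s1 (*) (\<lambda>x. f x y z)) \<and>
     (\<forall>x z. Vector_Spaces.linear s2 (*) (\<lambda>y. f x y z)) \<and>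
     (\<forall>x y. Vector_Spaces.linear s3 (*) (f x y))"

definition quadrilin :: "('k::field \<Rightarrow> 'a::ab_group_add \<Rightarrow> 'a) \<Rightarrow> ('k \<Rightarrow> 'b::ab_group_add \<Rightarrow> 'b) \<Rightarrow> ('k \<Rightarrow> 'c::ab_group_add \<Rightarrow> 'c)
    \<Rightarrow> ('k \<Rightarrow> 'd::ab_group_add \<Rightarrow> 'd) \<Rightarrow> ('a \<Rightarrow> 'b \<Rightarrow> 'c \<Rightarrow> 'd \<Rightarrow> 'k) \<Rightarrow> bool" where
  "quadrilin s1 s2 s3 s4 f \<longleftrightarrow>
     (\<forall>y z w. Vector_Spaces.linear s1 (*) (\<lambda>x. f x y z w)) \<and>
     (\<forall>x z w. Vector_Spaces.linear s2 (*) (\<lambda>y. f x y z w)) \<and>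
     (\<forall>x y w. Vector_Spaces.linear s3 (*) (\<lambda>z. f x y z w)) \<and>
     (\<forall>x y z. Vector_Spaces.linear s4 (*) (f x y z))"

definition teq2 :: "('k::field \<Rightarrow> 'a::ab_group_add \<Rightarrow> 'a) \<Rightarrow> ('k \<Rightarrow> 'b::ab_group_add \<Rightarrow> 'b)
    \<Rightarrow> ('a \<times> 'b) list \<Rightarrow> ('a \<times> 'b) list \<Rightarrow> bool" where
  "teq2 s1 s2 t u \<longleftrightarrow> (\<forall>f. bilin s1 s2 f \<longrightarrow>
     sum_list (map (\<lambda>(x,y). f x y) t) = sum_list (map (\<lambda>(x,y). f x y) u))"

definition teq3 :: "('k::field \<Rightarrow> 'a::ab_group_add \<Rightarrow> 'a) \<Rightarrow> ('k \<Rightarrow> 'b::ab_group_add \<Rightarrow> 'b) \<Rightarrow> ('k \<Rightarrow> 'c::ab_group_add \<Rightarrow> 'c)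
    \<Rightarrow> ('a \<times> 'b \<times> 'c) list \<Rightarrow> ('a \<times> 'b \<times> 'c) list \<Rightarrow> bool" where
  "teq3 s1 s2 s3 t u \<longleftrightarrow> (\<forall>f. trilin s1 s2 s3 f \<longrightarrow>
     sum_list (map (\<lambda>(x,y,z). f x y z) t) = sum_list (map (\<lambda>(x,y,z). f x y z) u))"

definition teq4 :: "('k::field \<Rightarrow> 'a::ab_group_add \<Rightarrow> 'a) \<Rightarrow> ('k \<Rightarrow> 'b::ab_group_add \<Rightarrow> 'b) \<Rightarrow> ('k \<Rightarrow> 'c::ab_group_add \<Rightarrow> 'c)
    \<Rightarrow> ('k \<Rightarrow> 'd::ab_group_add \<Rightarrow> 'd)
    \<Rightarrow> ('a \<times> 'b \<times> 'c \<times> 'd) list \<Rightarrow> ('a \<times> 'b \<times> 'c \<times> 'd) list \<Rightarrow> bool" where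
  "teq4 s1 s2 s3 s4 t u \<longleftrightarrow> (\<forall>f. quadrilin s1 s2 s3 s4 f \<longrightarrow>
     sum_list (map (\<lambda>(x,y,z,w). f x y z w) t) = sum_list (map (\<lambda>(x,y,z,w). f x y z w) u))"

definition tlin2 :: "('k::field \<Rightarrow> 'w::ab_group_add \<Rightarrow> 'w) \<Rightarrow> ('k \<Rightarrow> 'a::ab_group_add \<Rightarrow> 'a) \<Rightarrow> ('k \<Rightarrow> 'b::ab_group_add \<Rightarrow> 'b)
    \<Rightarrow> ('w \<Rightarrow> ('a \<times> 'b) list) \<Rightarrow> bool" where
  "tlin2 s s1 s2 F \<longleftrightarrow> (\<forall>c x y. teq2 s1 s2 (F (s c x + y))
      (map (\<lambda>(a,b). (s1 c a, b)) (F x) @ F y))"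

definition tlin3 :: "('k::field \<Rightarrow> 'w::ab_group_add \<Rightarrow> 'w) \<Rightarrow> ('k \<Rightarrow> 'a::ab_group_add \<Rightarrow> 'a) \<Rightarrow> ('k \<Rightarrow> 'b::ab_group_add \<Rightarrow> 'b)
    \<Rightarrow> ('k \<Rightarrow> 'c::ab_group_add \<Rightarrow> 'c) \<Rightarrow> ('w \<Rightarrow> ('a \<times> 'b \<times> 'c) list) \<Rightarrow> bool" where
  "tlin3 s s1 s2 s3 F \<longleftrightarrow> (\<forall>c x y. teq3 s1 s2 s3 (F (s c x + y))
      (map (\<lambda>(a,b,d). (s1 c a, b, d)) (F x) @ F y))"

definition k_algebra :: "('k::field \<Rightarrow> 'a::ring_1 \<Rightarrow> 'a) \<Rightarrow> bool" where
  "k_algebra s \<longleftrightarrow> Vector_Spaces.vector_space s \<and>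
     (\<forall>c a b. s c (a * b) = s c a * b \<and> s c (a * b) = a * s c b)"

definition mult2 :: "('a::times \<times> 'b::times) list \<Rightarrow> ('a \<times> 'b) list \<Rightarrow> ('a \<times> 'b) list" where
  "mult2 t u = [(a * c, b * d). (a, b) \<leftarrow> t, (c, d) \<leftarrow> u]"

definition Delta3 :: "('h \<Rightarrow> ('h \<times> 'h) list) \<Rightarrow> 'h \<Rightarrow> ('h \<times> 'h \<times> 'h) list" where
  "Delta3 \<Delta> h = [(a, b, c). (x, c) \<leftarrow> \<Delta> h, (a, b) \<leftarrow> \<Delta> x]"

definition hopf_algebra :: "('k::field \<Rightarrow> 'h::ring_1 \<Rightarrow> 'h) \<Rightarrow> ('h \<Rightarrow> ('h \<times> 'h) list)
    \<Rightarrow> ('h \<Rightarrow> 'k) \<Rightarrow> ('h \<Rightarrow> 'h) \<Rightarrow> bool" where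
  "hopf_algebra sH \<Delta> \<epsilon> S \<longleftrightarrow>
     k_algebra sH \<and>
     tlin2 sH sH sH \<Delta> \<and>
     (\<forall>g h. teq2 sH sH (\<Delta> (g * h)) (mult2 (\<Delta> g) (\<Delta> h))) \<and>
     teq2 sH sH (\<Delta> 1) [(1, 1)] \<and>
     (\<forall>h. teq3 sH sH sH (Delta3 \<Delta> h) [(a, b, c). (a, y) \<leftarrow> \<Delta> h, (b, c) \<leftarrow> \<Delta> y]) \<and>
     Vector_Spaces.linear sH (*) \<epsilon> \<and> \<epsilon> 1 = 1 \<and> (\<forall>g h. \<epsilon> (g * h) = \<epsilon> g * \<epsilon> h) \<and>
     (\<forall>h. sum_list (map (\<lambda>(a, b). sH (\<epsilon> a) b) (\<Delta> h)) = h) \<and>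
     (\<forall>h. sum_list (map (\<lambda>(a, b). sH (\<epsilon> b) a) (\<Delta> h)) = h) \<and>
     Vector_Spaces.linear sH sH S \<and> bij S \<and>
     (\<forall>h. sum_list (map (\<lambda>(a, b). S a * b) (\<Delta> h)) = sH (\<epsilon> h) 1) \<and>
     (\<forall>h. sum_list (map (\<lambda>(a, b). a * S b) (\<Delta> h)) = sH (\<epsilon> h) 1)"

definition right_comodule :: "('k::field \<Rightarrow> 'v::ab_group_add \<Rightarrow> 'v) \<Rightarrow> ('k \<Rightarrow> 'h::ring_1 \<Rightarrow> 'h)
    \<Rightarrow> ('h \<Rightarrow> ('h \<times> 'h) list) \<Rightarrow> ('h \<Rightarrow> 'k) \<Rightarrow> ('v \<Rightarrow> ('v \<times> 'h) list) \<Rightarrow> bool" where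
  "right_comodule sV sH \<Delta> \<epsilon> \<delta> \<longleftrightarrow>
     Vector_Spaces.vector_space sV \<and>
     tlin2 sV sV sH \<delta> \<and>
     (\<forall>v. teq3 sV sH sH [(a, b, c). (x, c) \<leftarrow> \<delta> v, (a, b) \<leftarrow> \<delta> x]
                         [(a, b, c). (a, y) \<leftarrow> \<delta> v, (b, c) \<leftarrow> \<Delta> y]) \<and>
     (\<forall>v. sum_list (map (\<lambda>(a, h). sV (\<epsilon> h) a) (\<delta> v)) = v)"

definition right_comodule_algebra :: "('k::field \<Rightarrow> 'p::ring_1 \<Rightarrow> 'p) \<Rightarrow> ('k \<Rightarrow> 'h::ring_1 \<Rightarrow> 'h)
    \<Rightarrow> ('h \<Rightarrow> ('h \<times> 'h) list) \<Rightarrow> ('h \<Rightarrow> 'k) \<Rightarrow> ('p \<Rightarrow> ('p \<times> 'h) list) \<Rightarrow> bool" where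
  "right_comodule_algebra sP sH \<Delta> \<epsilon> \<delta> \<longleftrightarrow>
     k_algebra sP \<and> right_comodule sP sH \<Delta> \<epsilon> \<delta> \<and>
     (\<forall>p q. teq2 sP sH (\<delta> (p * q)) (mult2 (\<delta> p) (\<delta> q))) \<and>
     teq2 sP sH (\<delta> 1) [(1, 1)]"

definition coinv :: "('k::field \<Rightarrow> 'p::ring_1 \<Rightarrow> 'p) \<Rightarrow> ('k \<Rightarrow> 'h::ring_1 \<Rightarrow> 'h)
    \<Rightarrow> ('p \<Rightarrow> ('p \<times> 'h) list) \<Rightarrow> 'p set" where
  "coinv sP sH \<delta> = {p. teq2 sP sH (\<delta> p) [(p, 1)]}"

text \<open>Flatness of P as a left and as a right M-module (equational criterion).\<close>

definition left_flat :: "'p::ring_1 set \<Rightarrow> bool" where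
  "left_flat M \<longleftrightarrow> (\<forall>n (a :: nat \<Rightarrow> 'p) x. (\<forall>i<n. a i \<in> M) \<and> (\<Sum>i<n. a i * x i) = 0 \<longrightarrow>
     (\<exists>(m::nat) b y. (\<forall>i<n. \<forall>j<m. b i j \<in> M) \<and> (\<forall>i<n. x i = (\<Sum>j<m. b i j * y j)) \<and>
              (\<forall>j<m. (\<Sum>i<n. a i * b i j) = 0)))"

definition right_flat :: "'p::ring_1 set \<Rightarrow> bool" where
  "right_flat M \<longleftrightarrow> (\<forall>n (a :: nat \<Rightarrow> 'p) x. (\<forall>i<n. a i \<in> M) \<and> (\<Sum>i<n. x i * a i) = 0 \<longrightarrow>
     (\<exists>(m::nat) b y. (\<forall>j<m. \<forall>i<n. b j i \<in> M) \<and> (\<forall>i<n. x i = (\<Sum>j<m. y j * b j i)) \<and>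
              (\<forall>j<m. (\<Sum>i<n. b j i * a i) = 0)))"

definition can_map :: "('p \<Rightarrow> ('p::ring_1 \<times> 'h) list) \<Rightarrow> ('p \<times> 'p) list \<Rightarrow> ('p \<times> 'h) list" where
  "can_map \<delta> t = [(p * q', h). (p, q) \<leftarrow> t, (q', h) \<leftarrow> \<delta> q]"

text \<open>Quantum principal bundle: the induced map P \<otimes>_M P \<rightarrow> P \<otimes> H is bijective, i.e.
  can is surjective and its kernel in P \<otimes> P is spanned by the balancing relators
  pm \<otimes> q - p \<otimes> mq (m \<in> M).\<close>

definition quantum_principal_bundle :: "('k::field \<Rightarrow> 'p::ring_1 \<Rightarrow> 'p) \<Rightarrow> ('k \<Rightarrow> 'h::ring_1 \<Rightarrow> 'h)
    \<Rightarrow> ('h \<Rightarrow> ('h \<times> 'h) list) \<Rightarrow> ('h \<Rightarrow> 'k) \<Rightarrow> ('h \<Rightarrow> 'h) \<Rightarrow> ('p \<Rightarrow> ('p \<times> 'h) list) \<Rightarrow> bool" where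
  "quantum_principal_bundle sP sH \<Delta> \<epsilon> S \<delta> \<longleftrightarrow>
     hopf_algebra sH \<Delta> \<epsilon> S \<and>
     right_comodule_algebra sP sH \<Delta> \<epsilon> \<delta> \<and>
     left_flat (coinv sP sH \<delta>) \<and> right_flat (coinv sP sH \<delta>) \<and>
     (\<forall>u. \<exists>t. teq2 sP sH (can_map \<delta> t) u) \<and>
     (\<forall>t. teq2 sP sH (can_map \<delta> t) [] \<longrightarrow>
        (\<exists>rs. (\<forall>(p, m, q) \<in> set rs. m \<in> coinv sP sH \<delta>) \<and>
              teq2 sP sP t (concat [[(p * m, q), (- p, m * q)]. (p, m, q) \<leftarrow> rs])))"

text \<open>Universal calculus.  \<Omega>^1 P \<subseteq> P \<otimes> P; \<Omega>^1 M \<subseteq> M \<otimes> M \<subseteq> P \<otimes> P;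
  \<Omega>^2 M = \<Omega>^1 M \<otimes>_M \<Omega>^1 M \<subseteq> M^{\<otimes>3} \<subseteq> P^{\<otimes>3} (image of concatenation).\<close>

definition in_Omega1 :: "('p::ring_1 \<times> 'p) list \<Rightarrow> bool" where
  "in_Omega1 t \<longleftrightarrow> sum_list (map (\<lambda>(a, b). a * b) t) = 0"

definition Omega1M :: "('k::field \<Rightarrow> 'p::ring_1 \<Rightarrow> 'p) \<Rightarrow> 'p set \<Rightarrow> ('p \<times> 'p) list set" where
  "Omega1M sP M = {t. in_Omega1 t \<and> (\<exists>u. teq2 sP sP t u \<and> (\<forall>(a, b) \<in> set u. a \<in> M \<and> b \<in> M))}"

definition mult11 :: "('p::times \<times> 'p) list \<Rightarrow> ('p \<times> 'p) list \<Rightarrow> ('p \<times> 'p \<times> 'p) list" where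
  "mult11 t u = [(a, b * c, d). (a, b) \<leftarrow> t, (c, d) \<leftarrow> u]"

definition Omega2M :: "('k::field \<Rightarrow> 'p::ring_1 \<Rightarrow> 'p) \<Rightarrow> 'p set \<Rightarrow> ('p \<times> 'p \<times> 'p) list set" where
  "Omega2M sP M = {t. \<exists>xs. (\<forall>(\<xi>, \<eta>) \<in> set xs. \<xi> \<in> Omega1M sP M \<and> \<eta> \<in> Omega1M sP M) \<and>
                          teq3 sP sP sP t (concat (map (\<lambda>(\<xi>, \<eta>). mult11 \<xi> \<eta>) xs))}"

definition lmul2 :: "'p::times \<Rightarrow> ('p \<times> 'p) list \<Rightarrow> ('p \<times> 'p) list" where
  "lmul2 p t = map (\<lambda>(a, b). (p * a, b)) t"

definition rmul2 :: "('p::times \<times> 'p) list \<Rightarrow> 'p \<Rightarrow> ('p \<times> 'p) list" where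
  "rmul2 t p = map (\<lambda>(a, b). (a, b * p)) t"

definition lmul3 :: "'p::times \<Rightarrow> ('p \<times> 'p \<times> 'p) list \<Rightarrow> ('p \<times> 'p \<times> 'p) list" where
  "lmul3 p t = map (\<lambda>(a, b, c). (p * a, b, c)) t"

definition P_Omega1M :: "('k::field \<Rightarrow> 'p::ring_1 \<Rightarrow> 'p) \<Rightarrow> 'p set \<Rightarrow> ('p \<times> 'p) list set" where
  "P_Omega1M sP M = {t. \<exists>xs. (\<forall>(p, \<xi>) \<in> set xs. \<xi> \<in> Omega1M sP M) \<and>
                            teq2 sP sP t (concat (map (\<lambda>(p, \<xi>). lmul2 p \<xi>) xs))}"

definition Omega1M_P :: "('k::field \<Rightarrow> 'p::ring_1 \<Rightarrow> 'p) \<Rightarrow> 'p set \<Rightarrow> ('p \<times> 'p) list set" where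
  "Omega1M_P sP M = {t. \<exists>xs. (\<forall>(\<xi>, p) \<in> set xs. \<xi> \<in> Omega1M sP M) \<and>
                            teq2 sP sP t (concat (map (\<lambda>(\<xi>, p). rmul2 \<xi> p) xs))}"

definition P_Omega2M :: "('k::field \<Rightarrow> 'p::ring_1 \<Rightarrow> 'p) \<Rightarrow> 'p set \<Rightarrow> ('p \<times> 'p \<times> 'p) list set" where
  "P_Omega2M sP M = {t. \<exists>xs. (\<forall>(p, \<xi>) \<in> set xs. \<xi> \<in> Omega2M sP M) \<and>
                            teq3 sP sP sP t (concat (map (\<lambda>(p, \<xi>). lmul3 p \<xi>) xs))}"

definition coact2 :: "('p \<Rightarrow> ('p \<times> 'h::times) list) \<Rightarrow> ('p \<times> 'p) list \<Rightarrow> ('p \<times> 'p \<times> 'h) list" where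
  "coact2 \<delta> t = [(a', b', h * g). (a, b) \<leftarrow> t, (a', h) \<leftarrow> \<delta> a, (b', g) \<leftarrow> \<delta> b]"

definition coact3 :: "('p \<Rightarrow> ('p \<times> 'h::times) list) \<Rightarrow> ('p \<times> 'p \<times> 'p) list \<Rightarrow> ('p \<times> 'p \<times> 'p \<times> 'h) list" where
  "coact3 \<delta> t = [(a', b', c', h * g * f). (a, b, c) \<leftarrow> t, (a', h) \<leftarrow> \<delta> a, (b', g) \<leftarrow> \<delta> b,
                                          (c', f) \<leftarrow> \<delta> c]"

definition rst1 :: "('k::field \<Rightarrow> 'p::ring_1 \<Rightarrow> 'p) \<Rightarrow> ('k \<Rightarrow> 'h::ring_1 \<Rightarrow> 'h) \<Rightarrow> ('k \<Rightarrow> 'v::ab_group_add \<Rightarrow> 'v)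
    \<Rightarrow> ('p \<Rightarrow> ('p \<times> 'h) list) \<Rightarrow> ('v \<Rightarrow> ('v \<times> 'h) list) \<Rightarrow> ('v \<Rightarrow> ('p \<times> 'p) list) \<Rightarrow> bool" where
  "rst1 sP sH sV \<delta>P \<delta>V \<theta> \<longleftrightarrow>
     tlin2 sV sP sP \<theta> \<and>
     (\<forall>v. teq3 sP sP sH (coact2 \<delta>P (\<theta> v)) [(a, b, h). (w, h) \<leftarrow> \<delta>V v, (a, b) \<leftarrow> \<theta> w]) \<and>
     (\<forall>v. \<theta> v \<in> P_Omega1M sP (coinv sP sH \<delta>P))"

definition rst2 :: "('k::field \<Rightarrow> 'p::ring_1 \<Rightarrow> 'p) \<Rightarrow> ('k \<Rightarrow> 'h::ring_1 \<Rightarrow> 'h) \<Rightarrow> ('k \<Rightarrow> 'v::ab_group_add \<Rightarrow> 'v)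
    \<Rightarrow> ('p \<Rightarrow> ('p \<times> 'h) list) \<Rightarrow> ('v \<Rightarrow> ('v \<times> 'h) list) \<Rightarrow> ('v \<Rightarrow> ('p \<times> 'p \<times> 'p) list) \<Rightarrow> bool" where
  "rst2 sP sH sV \<delta>P \<delta>V \<Theta> \<longleftrightarrow>
     tlin3 sV sP sP sP \<Theta> \<and>
     (\<forall>v. teq4 sP sP sP sH (coact3 \<delta>P (\<Theta> v)) [(a, b, c, h). (w, h) \<leftarrow> \<delta>V v, (a, b, c) \<leftarrow> \<Theta> w]) \<and>
     (\<forall>v. \<Theta> v \<in> P_Omega2M sP (coinv sP sH \<delta>P))"

definition Esec :: "('k::field \<Rightarrow> 'p::ring_1 \<Rightarrow> 'p) \<Rightarrow> ('k \<Rightarrow> 'h::ring_1 \<Rightarrow> 'h) \<Rightarrow> ('k \<Rightarrow> 'v::ab_group_add \<Rightarrow> 'v)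
    \<Rightarrow> ('p \<Rightarrow> ('p \<times> 'h) list) \<Rightarrow> ('v \<Rightarrow> ('v \<times> 'h) list) \<Rightarrow> ('p \<times> 'v) list set" where
  "Esec sP sH sV \<delta>P \<delta>V = {t. teq3 sP sV sH
      [(p', v', h * g). (p, v) \<leftarrow> t, (p', h) \<leftarrow> \<delta>P p, (v', g) \<leftarrow> \<delta>V v]
      [(p, v, 1). (p, v) \<leftarrow> t]}"

definition s_theta :: "('v \<Rightarrow> ('p::times \<times> 'p) list) \<Rightarrow> ('p \<times> 'v) list \<Rightarrow> ('p \<times> 'p) list" where
  "s_theta \<theta> t = concat (map (\<lambda>(p, v). lmul2 p (\<theta> v)) t)"

definition frame_resolution :: "('k::field \<Rightarrow> 'p::ring_1 \<Rightarrow> 'p) \<Rightarrow> ('k \<Rightarrow> 'h::ring_1 \<Rightarrow> 'h)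
    \<Rightarrow> ('k \<Rightarrow> 'v::ab_group_add \<Rightarrow> 'v) \<Rightarrow> ('h \<Rightarrow> ('h \<times> 'h) list) \<Rightarrow> ('h \<Rightarrow> 'k) \<Rightarrow> ('h \<Rightarrow> 'h)
    \<Rightarrow> ('p \<Rightarrow> ('p \<times> 'h) list) \<Rightarrow> ('v \<Rightarrow> ('v \<times> 'h) list) \<Rightarrow> ('v \<Rightarrow> ('p \<times> 'p) list) \<Rightarrow> bool" where
  "frame_resolution sP sH sV \<Delta> \<epsilon> S \<delta>P \<delta>V \<theta> \<longleftrightarrow>
     quantum_principal_bundle sP sH \<Delta> \<epsilon> S \<delta>P \<and>
     right_comodule sV sH \<Delta> \<epsilon> \<delta>V \<and>
     rst1 sP sH sV \<delta>P \<delta>V \<theta> \<and>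
     (\<forall>t \<in> Esec sP sH sV \<delta>P \<delta>V. s_theta \<theta> t \<in> Omega1M sP (coinv sP sH \<delta>P)) \<and>
     (\<forall>t \<in> Esec sP sH sV \<delta>P \<delta>V. \<forall>u \<in> Esec sP sH sV \<delta>P \<delta>V.
        teq2 sP sP (s_theta \<theta> t) (s_theta \<theta> u) \<longrightarrow> teq2 sP sV t u) \<and>
     (\<forall>w \<in> Omega1M sP (coinv sP sH \<delta>P). \<exists>t \<in> Esec sP sH sV \<delta>P \<delta>V. teq2 sP sP (s_theta \<theta> t) w)"

definition connection :: "('k::field \<Rightarrow> 'p::ring_1 \<Rightarrow> 'p) \<Rightarrow> ('k \<Rightarrow> 'h::ring_1 \<Rightarrow> 'h)
    \<Rightarrow> ('h \<Rightarrow> ('h \<times> 'h) list) \<Rightarrow> ('h \<Rightarrow> 'k) \<Rightarrow> ('h \<Rightarrow> 'h)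
    \<Rightarrow> ('p \<Rightarrow> ('p \<times> 'h) list) \<Rightarrow> ('h \<Rightarrow> ('p \<times> 'p) list) \<Rightarrow> bool" where
  "connection sP sH \<Delta> \<epsilon> S \<delta>P \<omega> \<longleftrightarrow>
     tlin2 sH sP sP \<omega> \<and>
     (\<forall>h. in_Omega1 (\<omega> h)) \<and>
     teq2 sP sP (\<omega> 1) [] \<and>
     (\<forall>h. teq2 sP sH [(a * b', h'). (a, b) \<leftarrow> \<omega> h, (b', h') \<leftarrow> \<delta>P b]
                     [(1, h - sH (\<epsilon> h) 1)]) \<and>
     (\<forall>h. teq3 sP sP sH (coact2 \<delta>P (\<omega> h))
                     [(a, b, S x * z). (x, y, z) \<leftarrow> Delta3 \<Delta> h, (a, b) \<leftarrow> \<omega> y])"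

definition dP :: "'p::ring_1 \<Rightarrow> ('p \<times> 'p) list" where
  "dP p = [(1, p), (- p, 1)]"

definition Pi_omega :: "('p \<Rightarrow> ('p::ring_1 \<times> 'h) list) \<Rightarrow> ('h \<Rightarrow> ('p \<times> 'p) list)
    \<Rightarrow> ('p \<times> 'p) list \<Rightarrow> ('p \<times> 'p) list" where
  "Pi_omega \<delta>P \<omega> t = concat [lmul2 (p * q') (\<omega> h). (p, q) \<leftarrow> t, (q', h) \<leftarrow> \<delta>P q]"

definition neg2 :: "('p::uminus \<times> 'q) list \<Rightarrow> ('p \<times> 'q) list" where
  "neg2 t = map (\<lambda>(a, b). (- a, b)) t"

definition neg3 :: "('p::uminus \<times> 'q \<times> 'r) list \<Rightarrow> ('p \<times> 'q \<times> 'r) list" where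
  "neg3 t = map (\<lambda>(a, b, c). (- a, b, c)) t"

definition left_strong :: "('k::field \<Rightarrow> 'p::ring_1 \<Rightarrow> 'p) \<Rightarrow> ('k \<Rightarrow> 'h::ring_1 \<Rightarrow> 'h)
    \<Rightarrow> ('p \<Rightarrow> ('p \<times> 'h) list) \<Rightarrow> ('h \<Rightarrow> ('p \<times> 'p) list) \<Rightarrow> bool" where
  "left_strong sP sH \<delta>P \<omega> \<longleftrightarrow>
     (\<forall>p. dP p @ neg2 (Pi_omega \<delta>P \<omega> (dP p)) \<in> Omega1M_P sP (coinv sP sH \<delta>P))"

definition d1 :: "('p::ring_1 \<times> 'p) list \<Rightarrow> ('p \<times> 'p \<times> 'p) list" where
  "d1 t = concat [[(1, a, b), (- a, 1, b), (a, b, 1)]. (a, b) \<leftarrow> t]"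

definition nabla :: "('k::field \<Rightarrow> 'p::ring_1 \<Rightarrow> 'p) \<Rightarrow> ('k \<Rightarrow> 'h::ring_1 \<Rightarrow> 'h) \<Rightarrow> ('k \<Rightarrow> 'v::ab_group_add \<Rightarrow> 'v)
    \<Rightarrow> ('p \<Rightarrow> ('p \<times> 'h) list) \<Rightarrow> ('v \<Rightarrow> ('v \<times> 'h) list) \<Rightarrow> ('v \<Rightarrow> ('p \<times> 'p) list)
    \<Rightarrow> ('h \<Rightarrow> ('p \<times> 'p) list) \<Rightarrow> ('p \<times> 'p) list \<Rightarrow> ('p \<times> 'p \<times> 'p) list" where
  "nabla sP sH sV \<delta>P \<delta>V \<theta> \<omega> w =
    (let t = (SOME t. t \<in> Esec sP sH sV \<delta>P \<delta>V \<and> teq2 sP sP (s_theta \<theta> t) w) in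
      [(1, a, b). (a, b) \<leftarrow> w]
      @ neg3 [(p, a, b). (p, v) \<leftarrow> t, (a, b) \<leftarrow> \<theta> v]
      @ neg3 (concat [lmul3 p' (mult11 (\<omega> h) (\<theta> v)). (p, v) \<leftarrow> t, (p', h) \<leftarrow> \<delta>P p]))"

definition torsion :: "('k::field \<Rightarrow> 'p::ring_1 \<Rightarrow> 'p) \<Rightarrow> ('k \<Rightarrow> 'h::ring_1 \<Rightarrow> 'h) \<Rightarrow> ('k \<Rightarrow> 'v::ab_group_add \<Rightarrow> 'v)
    \<Rightarrow> ('p \<Rightarrow> ('p \<times> 'h) list) \<Rightarrow> ('v \<Rightarrow> ('v \<times> 'h) list) \<Rightarrow> ('v \<Rightarrow> ('p \<times> 'p) list)
    \<Rightarrow> ('h \<Rightarrow> ('p \<times> 'p) list) \<Rightarrow> ('p \<times> 'p) list \<Rightarrow> ('p \<times> 'p \<times> 'p) list" where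
  "torsion sP sH sV \<delta>P \<delta>V \<theta> \<omega> w = d1 w @ neg3 (nabla sP sH sV \<delta>P \<delta>V \<theta> \<omega> w)"

definition Dbar_theta :: "('h \<Rightarrow> 'h) \<Rightarrow> ('v \<Rightarrow> ('v \<times> 'h) list) \<Rightarrow> ('v \<Rightarrow> ('p::ring_1 \<times> 'p) list)
    \<Rightarrow> ('h \<Rightarrow> ('p \<times> 'p) list) \<Rightarrow> 'v \<Rightarrow> ('p \<times> 'p \<times> 'p) list" where
  "Dbar_theta S \<delta>V \<theta> \<omega> v =
      [(1, a, b). (a, b) \<leftarrow> \<theta> v]
      @ [(- a, 1, b). (a, b) \<leftarrow> \<theta> v]
      @ [(a, b, 1). (a, b) \<leftarrow> \<theta> v]
      @ concat [mult11 (\<omega> (inv S h)) (\<theta> w). (w, h) \<leftarrow> \<delta>V v]"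

end

theory Submission
  imports Defs
begin

text \<open>
  Write \<open>w = \<Sum>\<^sub>i p\<^sub>i \<theta>(v\<^sub>i)\<close> with \<open>\<Sum>\<^sub>i p\<^sub>i \<otimes> v\<^sub>i\<close> invariant. Then \<open>\<nabla>w = \<Sum>\<^sub>i hor_d(p\<^sub>i) \<theta>(v\<^sub>i)\<close> with
  \<open>hor_d(p) = dp - \<Pi>\<^sub>\<omega>(dp)\<close>. Invariance allows the coaction of \<open>p\<^sub>i\<close> to be moved onto \<open>v\<^sub>i\<close>,
  and this turns \<open>dw - \<nabla>w\<close> into \<open>\<Sum>\<^sub>i p\<^sub>i D\<theta>(v\<^sub>i)\<close>.

  \<open>T(w)\<close> lies in \<open>\<Omega>\<^sup>2M\<close>: \<open>dw = \<Sum> da db\<close> for a representative \<open>\<Sum> a \<otimes> b\<close> of \<open>w\<close> in \<open>M \<otimes> M\<close>, and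
  by left strongness the first legs of \<open>hor_d(p)\<close> can be taken in \<open>M\<close>. Expanding them in a basis of
  \<open>M\<close> writes \<open>\<Sum>\<^sub>i hor_d(p\<^sub>i) \<otimes> v\<^sub>i\<close> as \<open>\<Sum>\<^sub>\<beta> \<beta> \<otimes> e\<^sub>\<beta>\<close> with invariant \<open>e\<^sub>\<beta>\<close>, hence
  \<open>\<nabla>w = -\<Sum>\<^sub>\<beta> d\<beta> s\<^sub>\<theta>(e\<^sub>\<beta>)\<close> up to a term that vanishes because \<open>hor_d(p) \<in> \<Omega>\<^sup>1P\<close>.

  Equivariance of \<open>D\<theta>\<close> follows from that of \<open>\<theta>\<close> and \<open>\<omega>\<close> and the anti-comultiplicativity of
  \<open>S\<^sup>-\<^sup>1\<close>. Finally \<open>1 \<otimes> v = \<Sum> lift(S\<^sup>-\<^sup>1 v\<^sup>(\<^sup>2\<^sup>)) v\<^sup>(\<^sup>1\<^sup>)\<close> with \<open>lift(h) = \<omega>(h) + \<epsilon>(h) 1 \<otimes> 1\<close>.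
  Since \<open>lift\<close> is colinear (by surjectivity of the canonical map and left strongness), the second leg
  of this element together with \<open>v\<^sup>(\<^sup>1\<^sup>)\<close> is invariant, and expanding the first leg in a basis gives
  \<open>D\<theta>(v) = \<Sum>\<^sub>\<beta> \<beta> T(s\<^sub>\<theta> e\<^sub>\<beta>) \<in> P\<Omega>\<^sup>2M\<close>.
\<close>

lemma sum_list_map_concat [simp]:
  "sum_list (map g (concat xss)) = sum_list (map (\<lambda>xs. sum_list (map g xs)) xss)"
  by (induct xss) auto

lemma sum_list_map_swap:
  "(\<Sum>x\<leftarrow>xs. \<Sum>y\<leftarrow>ys. f x y) = (\<Sum>y\<leftarrow>ys. \<Sum>x\<leftarrow>xs. (f x y :: 'a::comm_monoid_add))"
  by (induct xs) (simp_all add: sum_list_addf)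

lemma sum_list_map_uminus:
  "(\<Sum>x\<leftarrow>xs. - f x) = - (\<Sum>x\<leftarrow>xs. (f x :: 'a::ab_group_add))"
  by (induct xs) auto

lemma sum_list_map_cong: "(\<And>x. x \<in> set xs \<Longrightarrow> f x = g x) \<Longrightarrow> sum_list (map f xs) = sum_list (map g xs)"
  by (metis map_cong)

declare comp_def [simp] case_prod_beta' [simp]

text \<open>Linear forms with the field as codomain; unlike \<open>Vector_Spaces.linear\<close> the closure rules for
  this notion need no hypotheses.\<close>

definition lin_form :: "('k::field \<Rightarrow> 'a::ab_group_add \<Rightarrow> 'a) \<Rightarrow> ('a \<Rightarrow> 'k) \<Rightarrow> bool" where
  "lin_form s \<phi> \<longleftrightarrow> (\<forall>x y. \<phi> (x + y) = \<phi> x + \<phi> y) \<and> (\<forall>c x. \<phi> (s c x) = c * \<phi> x)"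

lemma vector_space_field: "vector_space ((*) :: 'k::field \<Rightarrow> 'k \<Rightarrow> 'k)"
  by unfold_locales (auto simp: algebra_simps)

lemma vector_space_simps:
  assumes "vector_space s"
  shows "s 1 x = x" "s 0 x = 0" "s c 0 = 0" "s c (x + y) = s c x + s c y"
    "s (a + b) x = s a x + s b x" "s a (s b x) = s (a * b) x"
    "s c (- x) = - s c x" "s (- c) x = - s c x" "s c (x - y) = s c x - s c y"
proof -
  interpret vector_space s by fact
  show "s 1 x = x" "s 0 x = 0" "s c 0 = 0" "s c (x + y) = s c x + s c y"
    "s (a + b) x = s a x + s b x" "s a (s b x) = s (a * b) x"
    "s c (- x) = - s c x" "s (- c) x = - s c x" "s c (x - y) = s c x - s c y"
    by (auto simp: scale_right_diff_distrib scale_left_distrib scale_right_distrib)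
qed

lemma linear_iff_lin_form: "vector_space s \<Longrightarrow> Vector_Spaces.linear s (*) \<phi> \<longleftrightarrow> lin_form s \<phi>"
  unfolding Vector_Spaces.linear_def lin_form_def module_hom_axioms_def module_hom_def
  by (auto simp: vector_space_field module_iff_vector_space)

lemma lin_form_simps:
  assumes "lin_form s \<phi>" "vector_space s"
  shows "\<phi> (x + y) = \<phi> x + \<phi> y" "\<phi> (s c x) = c * \<phi> x" "\<phi> 0 = 0" "\<phi> (- x) = - \<phi> x"
    "\<phi> (x - y) = \<phi> x - \<phi> y"
proof -
  show add: "\<phi> (x + y) = \<phi> x + \<phi> y" for x y using assms(1) by (simp add: lin_form_def)
  show "\<phi> (s c x) = c * \<phi> x" using assms(1) by (simp add: lin_form_def)
  show zero: "\<phi> 0 = 0"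
    using assms by (metis lin_form_def mult_zero_left vector_space_simps(2))
  show minus: "\<phi> (- x) = - \<phi> x" for x
    using add[of x "- x"] zero by (simp add: eq_neg_iff_add_eq_0 add.commute)
  show "\<phi> (x - y) = \<phi> x - \<phi> y"
    using add[of x "- y"] minus[of y] by simp
qed

lemma lin_form_sum_list:
  "lin_form s \<phi> \<Longrightarrow> vector_space s \<Longrightarrow> \<phi> (\<Sum>x\<leftarrow>xs. g x) = (\<Sum>x\<leftarrow>xs. \<phi> (g x))"
  by (induct xs) (auto simp: lin_form_simps)

lemma lin_form_add [intro!]: "lin_form s \<phi> \<Longrightarrow> lin_form s \<psi> \<Longrightarrow> lin_form s (\<lambda>x. \<phi> x + \<psi> x)"
  by (simp add: lin_form_def algebra_simps)

lemma lin_form_diff [intro!]: "lin_form s \<phi> \<Longrightarrow> lin_form s \<psi> \<Longrightarrow> lin_form s (\<lambda>x. \<phi> x - \<psi> x)"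
  by (simp add: lin_form_def algebra_simps)

lemma lin_form_sum_list_fun [intro!]:
  "(\<And>y. y \<in> set ys \<Longrightarrow> lin_form s (\<lambda>x. \<Phi> y x)) \<Longrightarrow> lin_form s (\<lambda>x. \<Sum>y\<leftarrow>ys. \<Phi> y x)"
  by (induct ys) (auto simp: lin_form_def algebra_simps)

lemma lin_form_compose:
  "lin_form s \<phi> \<Longrightarrow> (\<And>x y. L (x + y) = L x + L y) \<Longrightarrow> (\<And>c x. L (s' c x) = s c (L x))
    \<Longrightarrow> lin_form s' (\<lambda>x. \<phi> (L x))"
  by (simp add: lin_form_def)

lemma lin_forms_separate:
  assumes vs: "vector_space s" and eq: "\<And>\<phi>. lin_form s \<phi> \<Longrightarrow> \<phi> x = \<phi> y"
  shows "x = y"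
proof (rule ccontr)
  interpret vector_space s by fact
  assume "x \<noteq> y"
  define B where "B = extend_basis {}"
  have B: "independent B" "span B = UNIV"
    unfolding B_def using independent_extend_basis span_extend_basis independent_empty by auto
  obtain b where b: "representation B (x - y) b \<noteq> 0"
    using \<open>x \<noteq> y\<close> sum_nonzero_representation_eq[OF B(1), of "x - y"] B(2) by fastforce
  have lin: "lin_form s (\<lambda>v. representation B v b)"
    using linear_representation[OF B] linear_iff_lin_form[OF vs] by simp
  with b eq[OF lin] show False
    using lin_form_simps(5)[OF lin vs, of x y] by simp
qed

lemma obtain_coordinate_forms:
  assumes vs: "vector_space s"
  obtains R where "\<And>\<beta>. lin_form s (R \<beta>)"
    and "\<And>as. \<exists>L. (\<forall>a\<in>set as. a = (\<Sum>\<beta>\<leftarrow>L. s (R \<beta> a) \<beta>)) \<and> (set as \<subseteq> V \<longrightarrow> set L \<subseteq> V)"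
proof -
  interpret vector_space s by fact
  obtain BV where BV: "BV \<subseteq> V" "independent BV" "V \<subseteq> span BV"
    using maximal_independent_subset[of V] by blast
  define B where "B = extend_basis BV"
  have B: "independent B" "span B = UNIV" "BV \<subseteq> B"
    unfolding B_def using independent_extend_basis[OF BV(2)] span_extend_basis[OF BV(2)]
      extend_basis_superset[OF BV(2)] by auto
  define R where "R \<beta> a = representation B a \<beta>" for \<beta> a
  have lin: "lin_form s (R \<beta>)" for \<beta>
    using linear_representation[OF B(1,2)] linear_iff_lin_form[OF vs] unfolding R_def by simp
  have "\<exists>L. (\<forall>a\<in>set as. a = (\<Sum>\<beta>\<leftarrow>L. s (R \<beta> a) \<beta>)) \<and> (set as \<subseteq> V \<longrightarrow> set L \<subseteq> V)" for as
  proof -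
    define F where "F = (\<Union>a\<in>set as. {\<beta>. R \<beta> a \<noteq> 0})"
    have fin: "finite F" unfolding F_def R_def using finite_representation by auto
    obtain L where L: "set L = F" "distinct L" using finite_distinct_list[OF fin] by blast
    have "a = (\<Sum>\<beta>\<leftarrow>L. s (R \<beta> a) \<beta>)" if a: "a \<in> set as" for a
    proof -
      have "(\<Sum>\<beta>\<leftarrow>L. s (R \<beta> a) \<beta>) = (\<Sum>\<beta>\<in>F. s (R \<beta> a) \<beta>)"
        using L by (simp add: sum_list_distinct_conv_sum_set)
      also have "\<dots> = (\<Sum>\<beta> | R \<beta> a \<noteq> 0. s (R \<beta> a) \<beta>)"
        by (rule sum.mono_neutral_right[OF fin]) (use a in \<open>auto simp: F_def\<close>)
      also have "\<dots> = a"
        unfolding R_def using sum_nonzero_representation_eq[OF B(1)] B(2) by simp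
      finally show ?thesis by simp
    qed
    moreover have "set L \<subseteq> V" if "set as \<subseteq> V"
    proof
      fix \<beta> assume "\<beta> \<in> set L"
      then obtain a where a: "a \<in> set as" "R \<beta> a \<noteq> 0" using L unfolding F_def by auto
      then have "a \<in> span BV" using that BV(3) by auto
      then have "representation B a = representation BV a"
        using representation_extend[OF B(1) _ B(3)] by simp
      then show "\<beta> \<in> V" using a(2) representation_ne_zero BV(1) unfolding R_def by fastforce
    qed
    ultimately show ?thesis by blast
  qed
  with lin that show ?thesis by blast
qed

subsection \<open>Tensors represented by lists\<close>

lemma teq2_refl [simp]: "teq2 s1 s2 t t" by (simp add: teq2_def)
lemma teq2_sym: "teq2 s1 s2 t u \<Longrightarrow> teq2 s1 s2 u t" by (simp add: teq2_def)
lemma teq2_trans: "teq2 s1 s2 t u \<Longrightarrow> teq2 s1 s2 u w \<Longrightarrow> teq2 s1 s2 t w" by (simp add: teq2_def)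
lemma teq3_refl [simp]: "teq3 s1 s2 s3 t t" by (simp add: teq3_def)
lemma teq3_sym: "teq3 s1 s2 s3 t u \<Longrightarrow> teq3 s1 s2 s3 u t" by (simp add: teq3_def)
lemma teq3_trans: "teq3 s1 s2 s3 t u \<Longrightarrow> teq3 s1 s2 s3 u w \<Longrightarrow> teq3 s1 s2 s3 t w"
  by (simp add: teq3_def)

lemma teq2I:
  assumes vs: "vector_space s1" "vector_space s2"
    and "\<And>f. (\<And>y. lin_form s1 (\<lambda>x. f x y)) \<Longrightarrow> (\<And>x. lin_form s2 (\<lambda>y. f x y)) \<Longrightarrow>
      (\<Sum>p\<leftarrow>t. f (fst p) (snd p)) = (\<Sum>p\<leftarrow>u. f (fst p) (snd p))"
  shows "teq2 s1 s2 t u"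
  using assms(3) unfolding teq2_def bilin_def linear_iff_lin_form[OF vs(1)] linear_iff_lin_form[OF vs(2)]
  by auto

lemma teq2D:
  assumes "teq2 s1 s2 t u" and vs: "vector_space s1" "vector_space s2"
    and "\<And>y. lin_form s1 (\<lambda>x. f x y)" "\<And>x. lin_form s2 (\<lambda>y. f x y)"
  shows "(\<Sum>p\<leftarrow>t. f (fst p) (snd p)) = (\<Sum>p\<leftarrow>u. f (fst p) (snd p))"
  using assms unfolding teq2_def bilin_def linear_iff_lin_form[OF vs(1)] linear_iff_lin_form[OF vs(2)]
  by auto

lemma teq3I:
  assumes vs: "vector_space s1" "vector_space s2" "vector_space s3"
    and "\<And>f. (\<And>y z. lin_form s1 (\<lambda>x. f x y z)) \<Longrightarrow> (\<And>x z. lin_form s2 (\<lambda>y. f x y z)) \<Longrightarrow>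
      (\<And>x y. lin_form s3 (\<lambda>z. f x y z)) \<Longrightarrow>
      (\<Sum>p\<leftarrow>t. f (fst p) (fst (snd p)) (snd (snd p))) = (\<Sum>p\<leftarrow>u. f (fst p) (fst (snd p)) (snd (snd p)))"
  shows "teq3 s1 s2 s3 t u"
  using assms(4) unfolding teq3_def trilin_def linear_iff_lin_form[OF vs(1)]
    linear_iff_lin_form[OF vs(2)] linear_iff_lin_form[OF vs(3)] by auto

lemma teq3D:
  assumes "teq3 s1 s2 s3 t u" and vs: "vector_space s1" "vector_space s2" "vector_space s3"
    and "\<And>y z. lin_form s1 (\<lambda>x. f x y z)" "\<And>x z. lin_form s2 (\<lambda>y. f x y z)"
      "\<And>x y. lin_form s3 (\<lambda>z. f x y z)"
  shows "(\<Sum>p\<leftarrow>t. f (fst p) (fst (snd p)) (snd (snd p))) = (\<Sum>p\<leftarrow>u. f (fst p) (fst (snd p)) (snd (snd p)))"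
  using assms unfolding teq3_def trilin_def linear_iff_lin_form[OF vs(1)]
    linear_iff_lin_form[OF vs(2)] linear_iff_lin_form[OF vs(3)] by auto

lemma teq4I:
  assumes vs: "vector_space s1" "vector_space s2" "vector_space s3" "vector_space s4"
    and "\<And>f. (\<And>y z w. lin_form s1 (\<lambda>x. f x y z w)) \<Longrightarrow> (\<And>x z w. lin_form s2 (\<lambda>y. f x y z w)) \<Longrightarrow>
      (\<And>x y w. lin_form s3 (\<lambda>z. f x y z w)) \<Longrightarrow> (\<And>x y z. lin_form s4 (\<lambda>w. f x y z w)) \<Longrightarrow>
      (\<Sum>p\<leftarrow>t. f (fst p) (fst (snd p)) (fst (snd (snd p))) (snd (snd (snd p)))) =
      (\<Sum>p\<leftarrow>u. f (fst p) (fst (snd p)) (fst (snd (snd p))) (snd (snd (snd p))))"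
  shows "teq4 s1 s2 s3 s4 t u"
  using assms(5) unfolding teq4_def quadrilin_def linear_iff_lin_form[OF vs(1)] linear_iff_lin_form[OF vs(2)]
    linear_iff_lin_form[OF vs(3)] linear_iff_lin_form[OF vs(4)] by auto

text \<open>Elimination forms: applied backwards they leave the instance of the equation as the first
  subgoal, and the linearity side conditions after it.\<close>

lemma teq2E:
  assumes "teq2 s1 s2 t u" "vector_space s1" "vector_space s2"
    and "(\<Sum>p\<leftarrow>t. f (fst p) (snd p)) = (\<Sum>p\<leftarrow>u. f (fst p) (snd p)) \<Longrightarrow> P"
    and "\<And>y. lin_form s1 (\<lambda>x. f x y)" "\<And>x. lin_form s2 (\<lambda>y. f x y)"
  shows P
  using assms(4)[OF teq2D[OF assms(1,2,3,5,6)]] .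

lemma teq3E:
  assumes "teq3 s1 s2 s3 t u" "vector_space s1" "vector_space s2" "vector_space s3"
    and "(\<Sum>p\<leftarrow>t. f (fst p) (fst (snd p)) (snd (snd p))) =
      (\<Sum>p\<leftarrow>u. f (fst p) (fst (snd p)) (snd (snd p))) \<Longrightarrow> P"
    and "\<And>y z. lin_form s1 (\<lambda>x. f x y z)" "\<And>x z. lin_form s2 (\<lambda>y. f x y z)"
      "\<And>x y. lin_form s3 (\<lambda>z. f x y z)"
  shows P
  using assms(5)[OF teq3D[OF assms(1,2,3,4,6,7,8)]] .

lemma teq4D:
  assumes "teq4 s1 s2 s3 s4 t u" and vs: "vector_space s1" "vector_space s2" "vector_space s3" "vector_space s4"
    and "\<And>y z w. lin_form s1 (\<lambda>x. f x y z w)" "\<And>x z w. lin_form s2 (\<lambda>y. f x y z w)"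
      "\<And>x y w. lin_form s3 (\<lambda>z. f x y z w)" "\<And>x y z. lin_form s4 (\<lambda>w. f x y z w)"
  shows "(\<Sum>p\<leftarrow>t. f (fst p) (fst (snd p)) (fst (snd (snd p))) (snd (snd (snd p)))) =
      (\<Sum>p\<leftarrow>u. f (fst p) (fst (snd p)) (fst (snd (snd p))) (snd (snd (snd p))))"
  using assms unfolding teq4_def quadrilin_def linear_iff_lin_form[OF vs(1)] linear_iff_lin_form[OF vs(2)]
    linear_iff_lin_form[OF vs(3)] linear_iff_lin_form[OF vs(4)] by auto

lemma teq4E:
  assumes "teq4 s1 s2 s3 s4 t u" "vector_space s1" "vector_space s2" "vector_space s3" "vector_space s4"
    and "(\<Sum>p\<leftarrow>t. f (fst p) (fst (snd p)) (fst (snd (snd p))) (snd (snd (snd p)))) =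
      (\<Sum>p\<leftarrow>u. f (fst p) (fst (snd p)) (fst (snd (snd p))) (snd (snd (snd p)))) \<Longrightarrow> P"
    and "\<And>y z w. lin_form s1 (\<lambda>x. f x y z w)" "\<And>x z w. lin_form s2 (\<lambda>y. f x y z w)"
      "\<And>x y w. lin_form s3 (\<lambda>z. f x y z w)" "\<And>x y z. lin_form s4 (\<lambda>w. f x y z w)"
  shows P
  using assms(6)[OF teq4D[OF assms(1-5,7-10)]] .

lemma lin_form_sum_tlin2:
  assumes F: "tlin2 s s1 s2 F" and vs: "vector_space s" "vector_space s1" "vector_space s2"
    and G: "\<And>w. lin_form s1 (\<lambda>u. G (u, w))" "\<And>u. lin_form s2 (\<lambda>w. G (u, w))"
  shows "lin_form s (\<lambda>x. \<Sum>p\<leftarrow>F x. G p)"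
proof -
  have affine: "(\<Sum>p\<leftarrow>F (s c x + y). G p) = c * (\<Sum>p\<leftarrow>F x. G p) + (\<Sum>p\<leftarrow>F y. G p)" for c x y
  proof -
    have "teq2 s1 s2 (F (s c x + y)) (map (\<lambda>(a, b). (s1 c a, b)) (F x) @ F y)"
      using F unfolding tlin2_def by blast
    from teq2D[OF this vs(2,3), of "\<lambda>u w. G (u, w)"] G
    show ?thesis by (simp add: lin_form_def sum_list_const_mult)
  qed
  have zero: "(\<Sum>p\<leftarrow>F 0. G p) = 0"
    using affine[of 1 0 0] vector_space_simps(1)[OF vs(1)]
    by (metis add.right_neutral add_left_cancel mult_1)
  show ?thesis unfolding lin_form_def
    using affine[of 1] affine[of _ _ 0] zero vs(1) by (simp add: vector_space_simps)
qed

lemma teq3_append: "teq3 s1 s2 s3 a b \<Longrightarrow> teq3 s1 s2 s3 c d \<Longrightarrow> teq3 s1 s2 s3 (a @ c) (b @ d)"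
  by (simp add: teq3_def)

lemma teq3_neg3:
  assumes "teq3 s1 s2 s3 a b" "vector_space s1" "vector_space s2" "vector_space s3"
  shows "teq3 s1 s2 s3 (neg3 a) (neg3 b)"
proof (rule teq3I[OF assms(2-4)])
  fix f assume f: "\<And>y z. lin_form s1 (\<lambda>x. f x y z)" "\<And>x z. lin_form s2 (\<lambda>y. f x y z)"
    "\<And>x y. lin_form s3 (\<lambda>z. f x y z)"
  from teq3D[OF assms(1-4) f] show "(\<Sum>p\<leftarrow>neg3 a. f (fst p) (fst (snd p)) (snd (snd p)))
      = (\<Sum>p\<leftarrow>neg3 b. f (fst p) (fst (snd p)) (snd (snd p)))"
    by (simp add: neg3_def lin_form_simps(4)[OF f(1) assms(2)] sum_list_map_uminus)
qed

lemma Omega2M_append: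
  assumes "t \<in> Omega2M s M" "t' \<in> Omega2M s M"
  shows "t @ t' \<in> Omega2M s M"
proof -
  obtain xs ys where xs: "\<forall>(\<xi>, \<eta>) \<in> set xs. \<xi> \<in> Omega1M s M \<and> \<eta> \<in> Omega1M s M"
      "teq3 s s s t (concat (map (\<lambda>(\<xi>, \<eta>). mult11 \<xi> \<eta>) xs))"
    and ys: "\<forall>(\<xi>, \<eta>) \<in> set ys. \<xi> \<in> Omega1M s M \<and> \<eta> \<in> Omega1M s M"
      "teq3 s s s t' (concat (map (\<lambda>(\<xi>, \<eta>). mult11 \<xi> \<eta>) ys))"
    using assms unfolding Omega2M_def by blast
  from teq3_append[OF xs(2) ys(2)] xs(1) ys(1) show ?thesis
    unfolding Omega2M_def mem_Collect_eq by (intro exI[of _ "xs @ ys"]) auto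
qed

lemma Omega2M_teq3: "teq3 s s s t t' \<Longrightarrow> t' \<in> Omega2M s M \<Longrightarrow> t \<in> Omega2M s M"
  unfolding Omega2M_def by (blast intro: teq3_trans)

lemma d1_teq2:
  assumes "teq2 s s w u" "vector_space s"
  shows "teq3 s s s (d1 w) (d1 u)"
proof (rule teq3I[OF assms(2) assms(2) assms(2)])
  fix f assume f: "\<And>y z. lin_form s (\<lambda>x. f x y z)" "\<And>x z. lin_form s (\<lambda>y. f x y z)"
    "\<And>x y. lin_form s (\<lambda>z. f x y z)"
  note fe = lin_form_simps[OF f(1) assms(2)] lin_form_simps[OF f(2) assms(2)] lin_form_simps[OF f(3) assms(2)]
  show "(\<Sum>p\<leftarrow>d1 w. f (fst p) (fst (snd p)) (snd (snd p))) = (\<Sum>p\<leftarrow>d1 u. f (fst p) (fst (snd p)) (snd (snd p)))"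
    by (rule teq2E[OF assms(1) assms(2) assms(2), of "\<lambda>a b. f 1 a b + f (- a) 1 b + f a b 1"])
      (simp_all add: d1_def lin_form_def fe algebra_simps)
qed

text \<open>Since \<open>\<Sum> a b = 0\<close>, \<open>u\<close> is the 1-form \<open>\<Sum> a db\<close>, and \<open>d(\<Sum> a db) = \<Sum> da db\<close>.\<close>

lemma d1_in_Omega1:
  assumes "in_Omega1 u" "vector_space s"
  shows "teq3 s s s (d1 u) (concat [mult11 (dP a) (dP b). (a, b) \<leftarrow> u])"
proof (rule teq3I[OF assms(2) assms(2) assms(2)])
  fix f assume f: "\<And>y z. lin_form s (\<lambda>x. f x y z)" "\<And>x z. lin_form s (\<lambda>y. f x y z)"
    "\<And>x y. lin_form s (\<lambda>z. f x y z)"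
  note fe = lin_form_simps[OF f(1) assms(2)] lin_form_simps[OF f(2) assms(2)] lin_form_simps[OF f(3) assms(2)]
  have "(\<Sum>x\<leftarrow>u. f 1 (fst x * snd x) 1) = 0"
    using assms(1) lin_form_sum_list[OF f(2) assms(2), of 1 "\<lambda>x. fst x * snd x" u 1, symmetric]
    by (simp add: in_Omega1_def fe)
  then show "(\<Sum>p\<leftarrow>d1 u. f (fst p) (fst (snd p)) (snd (snd p)))
      = (\<Sum>p\<leftarrow>concat [mult11 (dP a) (dP b). (a, b) \<leftarrow> u]. f (fst p) (fst (snd p)) (snd (snd p)))"
    by (simp add: d1_def dP_def mult11_def fe sum_list_addf sum_list_subtractf sum_list_map_uminus)
qed

locale hopf =
  fixes sH :: "'k::field \<Rightarrow> 'h::ring_1 \<Rightarrow> 'h"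
    and \<Delta> :: "'h \<Rightarrow> ('h \<times> 'h) list" and \<epsilon> :: "'h \<Rightarrow> 'k" and S :: "'h \<Rightarrow> 'h"
  assumes hopf: "hopf_algebra sH \<Delta> \<epsilon> S"
begin

lemma vsH: "vector_space sH"
  using hopf by (simp add: hopf_algebra_def k_algebra_def)

lemma scaleH_mult: "sH c a * b = sH c (a * b)" "a * sH c b = sH c (a * b)"
  using hopf unfolding hopf_algebra_def k_algebra_def by metis+

lemma Delta_tlin2: "tlin2 sH sH sH \<Delta>"
  using hopf by (simp add: hopf_algebra_def)

lemma Delta_mult: "teq2 sH sH (\<Delta> (g * h)) (mult2 (\<Delta> g) (\<Delta> h))"
  using hopf by (simp add: hopf_algebra_def)

lemma Delta_one: "teq2 sH sH (\<Delta> 1) [(1, 1)]"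
  using hopf by (simp add: hopf_algebra_def)

lemma Delta_coassoc: "teq3 sH sH sH (Delta3 \<Delta> h) [(a, b, c). (a, y) \<leftarrow> \<Delta> h, (b, c) \<leftarrow> \<Delta> y]"
  using hopf by (simp add: hopf_algebra_def)

lemma counit_lin_form: "lin_form sH \<epsilon>"
  using hopf vsH by (simp add: hopf_algebra_def linear_iff_lin_form)

lemmas counit_simps = lin_form_simps[OF counit_lin_form vsH]

lemma counit_one: "\<epsilon> 1 = 1"
  using hopf by (simp add: hopf_algebra_def)

lemma counit_mult: "\<epsilon> (g * h) = \<epsilon> g * \<epsilon> h"
  using hopf by (simp add: hopf_algebra_def)

lemma counit_left: "(\<Sum>p\<leftarrow>\<Delta> h. sH (\<epsilon> (fst p)) (snd p)) = h"
  using hopf by (simp add: hopf_algebra_def)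

lemma counit_right: "(\<Sum>p\<leftarrow>\<Delta> h. sH (\<epsilon> (snd p)) (fst p)) = h"
  using hopf by (simp add: hopf_algebra_def)

lemma antipode_left: "(\<Sum>p\<leftarrow>\<Delta> h. S (fst p) * snd p) = sH (\<epsilon> h) 1"
  using hopf by (simp add: hopf_algebra_def)

lemma antipode_right: "(\<Sum>p\<leftarrow>\<Delta> h. fst p * S (snd p)) = sH (\<epsilon> h) 1"
  using hopf by (simp add: hopf_algebra_def)

lemma antipode_bij: "bij S"
  using hopf by (simp add: hopf_algebra_def)

lemma antipode_add: "S (x + y) = S x + S y" and antipode_scale: "S (sH c x) = sH c (S x)"
  using hopf by (auto simp: hopf_algebra_def Vector_Spaces.linear_def module_hom_def module_hom_axioms_def)

lemma counit_left_lin_form: "lin_form sH \<phi> \<Longrightarrow> (\<Sum>p\<leftarrow>\<Delta> h. \<epsilon> (fst p) * \<phi> (snd p)) = \<phi> h"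
  using arg_cong[OF counit_left, of \<phi> h] by (simp add: lin_form_sum_list[OF _ vsH] lin_form_simps[OF _ vsH])

lemma counit_right_lin_form: "lin_form sH \<phi> \<Longrightarrow> (\<Sum>p\<leftarrow>\<Delta> h. \<epsilon> (snd p) * \<phi> (fst p)) = \<phi> h"
  using arg_cong[OF counit_right, of \<phi> h] by (simp add: lin_form_sum_list[OF _ vsH] lin_form_simps[OF _ vsH])

lemma lin_form_sum_Delta:
  "(\<And>w. lin_form sH (\<lambda>u. G (u, w))) \<Longrightarrow> (\<And>u. lin_form sH (\<lambda>w. G (u, w)))
    \<Longrightarrow> lin_form sH (\<lambda>x. \<Sum>p\<leftarrow>\<Delta> x. G p)"
  by (rule lin_form_sum_tlin2[OF Delta_tlin2 vsH vsH vsH])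

lemma lin_form_sum_Delta_antipode:
  "(\<And>w. lin_form sH (\<lambda>u. G (u, w))) \<Longrightarrow> (\<And>u. lin_form sH (\<lambda>w. G (u, w)))
    \<Longrightarrow> lin_form sH (\<lambda>x. \<Sum>p\<leftarrow>\<Delta> (S x). G p)"
  by (rule lin_form_compose[OF lin_form_sum_Delta]) (auto simp: antipode_add antipode_scale)

lemmas lin_form_H_intros = lin_form_sum_list_fun lin_form_sum_Delta lin_form_sum_Delta_antipode

subsection \<open>The antipode is an anti-coalgebra map\<close>

lemma Delta_conv_flipped_antipode:
  assumes g1: "\<And>y. lin_form sH (\<lambda>x. g x y)" and g2: "\<And>x. lin_form sH (\<lambda>y. g x y)"
  shows "(\<Sum>p\<leftarrow>\<Delta> h. \<Sum>q\<leftarrow>\<Delta> (fst p). \<Sum>r\<leftarrow>\<Delta> (snd p). g (fst q * S (snd r)) (snd q * S (fst r)))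
     = \<epsilon> h * g 1 1"
proof -
  note ge = lin_form_simps[OF g1 vsH] lin_form_simps[OF g2 vsH]
  have "(\<Sum>p\<leftarrow>\<Delta> h. \<Sum>q\<leftarrow>\<Delta> (fst p). \<Sum>r\<leftarrow>\<Delta> (snd p). g (fst q * S (snd r)) (snd q * S (fst r)))
     = (\<Sum>p\<leftarrow>\<Delta> h. \<Sum>q\<leftarrow>\<Delta> (snd p). \<Sum>r\<leftarrow>\<Delta> (snd q). g (fst p * S (snd r)) (fst q * S (fst r)))"
    apply (rule teq3E[OF Delta_coassoc vsH vsH vsH,
          of "\<lambda>a b c. \<Sum>r\<leftarrow>\<Delta> c. g (a * S (snd r)) (b * S (fst r))" h])
    by (simp add: Delta3_def)
      ((intro lin_form_H_intros)?; simp add: lin_form_def ge antipode_add antipode_scale scaleH_mult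
        distrib_left distrib_right)+
  also have "\<dots> = (\<Sum>p\<leftarrow>\<Delta> h. \<Sum>q\<leftarrow>\<Delta> (snd p). \<Sum>r\<leftarrow>\<Delta> (fst q). g (fst p * S (snd q)) (fst r * S (snd r)))"
  proof -
    have "(\<Sum>q\<leftarrow>\<Delta> z. \<Sum>r\<leftarrow>\<Delta> (snd q). g (u * S (snd r)) (fst q * S (fst r)))
       = (\<Sum>q\<leftarrow>\<Delta> z. \<Sum>r\<leftarrow>\<Delta> (fst q). g (u * S (snd q)) (fst r * S (snd r)))" for u z
      apply (rule teq3E[OF teq3_sym[OF Delta_coassoc] vsH vsH vsH, of "\<lambda>a b c. g (u * S c) (a * S b)" z])
      by (simp add: Delta3_def)
        (simp_all add: lin_form_def ge antipode_add antipode_scale scaleH_mult distrib_left distrib_right)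
    then show ?thesis by simp
  qed
  also have "\<dots> = (\<Sum>p\<leftarrow>\<Delta> h. \<Sum>q\<leftarrow>\<Delta> (snd p). \<epsilon> (fst q) * g (fst p * S (snd q)) 1)"
    using arg_cong[OF antipode_right, of "g _"] by (simp add: lin_form_sum_list[OF g2 vsH] ge)
  also have "\<dots> = (\<Sum>p\<leftarrow>\<Delta> h. g (fst p * S (snd p)) 1)"
  proof -
    have L: "lin_form sH (\<lambda>y. g (a * S y) 1)" for a
      by (simp add: lin_form_def ge antipode_add antipode_scale scaleH_mult distrib_left)
    show ?thesis by (simp add: counit_left_lin_form[OF L])
  qed
  also have "\<dots> = \<epsilon> h * g 1 1"
    using arg_cong[OF antipode_right, of "\<lambda>x. g x 1"] by (simp add: lin_form_sum_list[OF g1 vsH] ge)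
  finally show ?thesis .
qed

lemma Delta_antipode_conv_Delta:
  assumes g1: "\<And>y. lin_form sH (\<lambda>x. g x y)" and g2: "\<And>x. lin_form sH (\<lambda>y. g x y)"
  shows "(\<Sum>q\<leftarrow>\<Delta> h. \<Sum>a\<leftarrow>\<Delta> (S (fst q)). \<Sum>b\<leftarrow>\<Delta> (snd q). g (fst a * fst b) (snd a * snd b))
     = \<epsilon> h * g 1 1"
proof -
  note ge = lin_form_simps[OF g1 vsH] lin_form_simps[OF g2 vsH]
  have L: "lin_form sH (\<lambda>x. \<Sum>p\<leftarrow>\<Delta> x. g (fst p) (snd p))"
    using g1 g2 by (intro lin_form_H_intros) auto
  have "(\<Sum>a\<leftarrow>\<Delta> (S u). \<Sum>b\<leftarrow>\<Delta> w. g (fst a * fst b) (snd a * snd b)) = (\<Sum>p\<leftarrow>\<Delta> (S u * w). g (fst p) (snd p))"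
    for u w
    by (rule teq2E[OF Delta_mult vsH vsH, of g "S u" w]) (simp_all add: mult2_def g1 g2)
  then have "(\<Sum>q\<leftarrow>\<Delta> h. \<Sum>a\<leftarrow>\<Delta> (S (fst q)). \<Sum>b\<leftarrow>\<Delta> (snd q). g (fst a * fst b) (snd a * snd b))
      = (\<Sum>p\<leftarrow>\<Delta> (\<Sum>q\<leftarrow>\<Delta> h. S (fst q) * snd q). g (fst p) (snd p))"
    by (simp add: lin_form_sum_list[OF L vsH])
  also have "\<dots> = \<epsilon> h * g 1 1"
    using lin_form_simps(2)[OF L vsH, of "\<epsilon> h" 1] teq2D[OF Delta_one vsH vsH, of g, OF g1 g2]
    by (simp add: antipode_left)
  finally show ?thesis .
qed

text \<open>Both sides of the claim are convolution inverses of \<open>\<Delta>\<close>: \<open>\<Delta>(S h) = \<Delta>(S h\<^sub>1) \<Delta>(h\<^sub>2) S(h\<^sub>4) \<otimes> S(h\<^sub>3)\<close>,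
  and this contracts to \<open>S(h\<^sub>2) \<otimes> S(h\<^sub>1)\<close> as well.\<close>

lemma antipode_anticomult: "teq2 sH sH (\<Delta> (S h)) [(S b, S a). (a, b) \<leftarrow> \<Delta> h]"
proof (rule teq2I[OF vsH vsH])
  fix f assume f1: "\<And>y. lin_form sH (\<lambda>x. f x y)" and f2: "\<And>x. lin_form sH (\<lambda>y. f x y)"
  note fe = lin_form_simps[OF f1 vsH] lin_form_simps[OF f2 vsH]
  define T where "T x y z = (\<Sum>a\<leftarrow>\<Delta> (S x). \<Sum>b\<leftarrow>\<Delta> y. \<Sum>c\<leftarrow>\<Delta> z.
     f (fst a * (fst b * S (snd c))) (snd a * (snd b * S (fst c))))" for x y z
  have T_lin: "lin_form sH (\<lambda>x. T x y z)" "lin_form sH (\<lambda>y. T x y z)" "lin_form sH (\<lambda>z. T x y z)" for x y z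
    unfolding T_def by ((intro lin_form_H_intros)?; simp add: lin_form_def fe antipode_add antipode_scale
        scaleH_mult distrib_left distrib_right)+
  have flipped_contract: "(\<Sum>q\<leftarrow>\<Delta> y. \<Sum>a\<leftarrow>L. \<Sum>b\<leftarrow>\<Delta> (fst q). \<Sum>c\<leftarrow>\<Delta> (snd q).
      f (fst a * (fst b * S (snd c))) (snd a * (snd b * S (fst c)))) = (\<Sum>a\<leftarrow>L. \<epsilon> y * f (fst a) (snd a))"
    for y L
    apply (subst sum_list_map_swap)
    apply (rule sum_list_map_cong)
    apply (rule Delta_conv_flipped_antipode[of "\<lambda>u w. f (fst _ * u) (snd _ * w)" y, simplified])
    by (simp_all add: lin_form_def fe distrib_left scaleH_mult)
  have antipode_contract: "(\<Sum>q\<leftarrow>\<Delta> x. \<Sum>a\<leftarrow>\<Delta> (S (fst q)). \<Sum>b\<leftarrow>\<Delta> (snd q).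
      f (fst a * (fst b * x1)) (snd a * (snd b * x2))) = \<epsilon> x * f x1 x2" for x x1 x2
    using Delta_antipode_conv_Delta[of "\<lambda>u w. f (u * x1) (w * x2)" x]
    by (simp add: mult.assoc lin_form_def fe distrib_right scaleH_mult)
  have swap: "(\<Sum>q\<leftarrow>\<Delta> x. \<Sum>a\<leftarrow>\<Delta> (S (fst q)). \<Sum>b\<leftarrow>\<Delta> (snd q). \<Sum>c\<leftarrow>L. G q a b c)
      = (\<Sum>c\<leftarrow>L. \<Sum>q\<leftarrow>\<Delta> x. \<Sum>a\<leftarrow>\<Delta> (S (fst q)). \<Sum>b\<leftarrow>\<Delta> (snd q). (G q a b c :: 'k))" for x L G
    by (simp only: sum_list_map_swap[where ys=L])
  have lin_Delta_S: "lin_form sH (\<lambda>x. \<Sum>a\<leftarrow>\<Delta> (S x). f (fst a) (snd a))"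
    by (intro lin_form_H_intros; simp add: f1 f2)
  have lin_flip: "lin_form sH (\<lambda>x. \<Sum>c\<leftarrow>\<Delta> x. f (S (snd c)) (S (fst c)))"
    by ((intro lin_form_H_intros)?; simp add: lin_form_def fe antipode_add antipode_scale)
  have "(\<Sum>p\<leftarrow>\<Delta> h. \<Sum>q\<leftarrow>\<Delta> (snd p). T (fst p) (fst q) (snd q))
      = (\<Sum>p\<leftarrow>\<Delta> h. \<epsilon> (snd p) * (\<Sum>a\<leftarrow>\<Delta> (S (fst p)). f (fst a) (snd a)))"
    unfolding T_def by (simp only: flipped_contract sum_list_const_mult)
  also have "\<dots> = (\<Sum>p\<leftarrow>\<Delta> (S h). f (fst p) (snd p))"
    by (rule counit_right_lin_form[OF lin_Delta_S])
  finally have via_Delta_S: "(\<Sum>p\<leftarrow>\<Delta> h. \<Sum>q\<leftarrow>\<Delta> (snd p). T (fst p) (fst q) (snd q))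
      = (\<Sum>p\<leftarrow>\<Delta> (S h). f (fst p) (snd p))" .
  have "(\<Sum>p\<leftarrow>\<Delta> h. \<Sum>q\<leftarrow>\<Delta> (fst p). T (fst q) (snd q) (snd p))
      = (\<Sum>p\<leftarrow>\<Delta> h. \<epsilon> (fst p) * (\<Sum>c\<leftarrow>\<Delta> (snd p). f (S (snd c)) (S (fst c))))"
    unfolding T_def by (simp only: swap antipode_contract sum_list_const_mult)
  also have "\<dots> = (\<Sum>c\<leftarrow>\<Delta> h. f (S (snd c)) (S (fst c)))"
    by (rule counit_left_lin_form[OF lin_flip])
  finally have via_flip: "(\<Sum>p\<leftarrow>\<Delta> h. \<Sum>q\<leftarrow>\<Delta> (fst p). T (fst q) (snd q) (snd p))
      = (\<Sum>c\<leftarrow>\<Delta> h. f (S (snd c)) (S (fst c)))" .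
  have "(\<Sum>p\<leftarrow>\<Delta> h. \<Sum>q\<leftarrow>\<Delta> (fst p). T (fst q) (snd q) (snd p))
      = (\<Sum>p\<leftarrow>\<Delta> h. \<Sum>q\<leftarrow>\<Delta> (snd p). T (fst p) (fst q) (snd q))"
    by (rule teq3E[OF Delta_coassoc vsH vsH vsH, of T h]) (simp_all add: Delta3_def T_lin)
  with via_Delta_S via_flip show "(\<Sum>p\<leftarrow>\<Delta> (S h). f (fst p) (snd p)) = (\<Sum>p\<leftarrow>[(S b, S a). (a, b) \<leftarrow> \<Delta> h]. f (fst p) (snd p))"
    by simp
qed

lemma counit_antipode: "\<epsilon> (S h) = \<epsilon> h"
proof -
  have L: "lin_form sH (\<lambda>x. \<epsilon> (S x))"
    by (rule lin_form_compose[OF counit_lin_form]) (auto simp: antipode_add antipode_scale)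
  have "\<epsilon> (S h) = (\<Sum>p\<leftarrow>\<Delta> h. \<epsilon> (snd p) * \<epsilon> (S (fst p)))"
    by (rule counit_right_lin_form[OF L, symmetric])
  also have "\<dots> = \<epsilon> (\<Sum>p\<leftarrow>\<Delta> h. S (fst p) * snd p)"
    by (simp add: lin_form_sum_list[OF counit_lin_form vsH] counit_mult mult.commute)
  also have "\<dots> = \<epsilon> h" by (simp add: antipode_left counit_simps counit_one)
  finally show ?thesis .
qed

definition Sinv :: "'h \<Rightarrow> 'h" where "Sinv = inv S"

lemma antipode_Sinv [simp]: "S (Sinv x) = x" and Sinv_antipode [simp]: "Sinv (S x) = x"
  using antipode_bij unfolding Sinv_def by (auto simp: bij_def surj_f_inv_f inv_f_f)

lemma Sinv_add: "Sinv (x + y) = Sinv x + Sinv y"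
  by (metis antipode_Sinv Sinv_antipode antipode_add)

lemma Sinv_scale: "Sinv (sH c x) = sH c (Sinv x)"
  by (metis antipode_Sinv Sinv_antipode antipode_scale)

lemma counit_Sinv: "\<epsilon> (Sinv h) = \<epsilon> h"
  by (metis antipode_Sinv counit_antipode)

lemma lin_form_sum_Delta_Sinv:
  "(\<And>w. lin_form sH (\<lambda>u. G (u, w))) \<Longrightarrow> (\<And>u. lin_form sH (\<lambda>w. G (u, w)))
    \<Longrightarrow> lin_form sH (\<lambda>x. \<Sum>p\<leftarrow>\<Delta> (Sinv x). G p)"
  by (rule lin_form_compose[OF lin_form_sum_Delta]) (auto simp: Sinv_add Sinv_scale)

lemmas lin_form_Hopf_intros = lin_form_H_intros lin_form_sum_Delta_Sinv

lemma Sinv_anticomult: "teq2 sH sH (\<Delta> (Sinv h)) [(Sinv b, Sinv a). (a, b) \<leftarrow> \<Delta> h]"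
proof (rule teq2I[OF vsH vsH])
  fix f assume f1: "\<And>y. lin_form sH (\<lambda>x. f x y)" and f2: "\<And>x. lin_form sH (\<lambda>y. f x y)"
  have "(\<Sum>p\<leftarrow>\<Delta> (S (Sinv h)). f (Sinv (snd p)) (Sinv (fst p))) = (\<Sum>p\<leftarrow>\<Delta> (Sinv h). f (fst p) (snd p))"
    by (rule teq2E[OF antipode_anticomult vsH vsH, of "\<lambda>x y. f (Sinv y) (Sinv x)" "Sinv h"])
      (simp_all add: lin_form_def lin_form_simps[OF f1 vsH] lin_form_simps[OF f2 vsH] Sinv_add Sinv_scale)
  then show "(\<Sum>p\<leftarrow>\<Delta> (Sinv h). f (fst p) (snd p)) = (\<Sum>p\<leftarrow>[(Sinv b, Sinv a). (a, b) \<leftarrow> \<Delta> h]. f (fst p) (snd p))"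
    by simp
qed

text \<open>\<open>S\<^sup>-\<^sup>1\<close> is the antipode of the co-opposite Hopf algebra.\<close>

lemma cop_antipode_right: "(\<Sum>p\<leftarrow>\<Delta> h. snd p * Sinv (fst p)) = sH (\<epsilon> h) 1"
proof (rule lin_forms_separate[OF vsH])
  fix \<phi> assume L: "lin_form sH \<phi>"
  obtain x where h: "h = S x" by (metis antipode_Sinv)
  have "(\<Sum>p\<leftarrow>\<Delta> (S x). \<phi> (snd p * Sinv (fst p))) = (\<Sum>p\<leftarrow>\<Delta> x. \<phi> (S (fst p) * snd p))"
    by (rule teq2E[OF antipode_anticomult vsH vsH, of "\<lambda>x y. \<phi> (y * Sinv x)" x])
      (simp_all add: lin_form_def lin_form_simps[OF L vsH] Sinv_add Sinv_scale distrib_left distrib_right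
        scaleH_mult)
  then show "\<phi> (\<Sum>p\<leftarrow>\<Delta> h. snd p * Sinv (fst p)) = \<phi> (sH (\<epsilon> h) 1)"
    by (simp add: h lin_form_sum_list[OF L vsH, symmetric] antipode_left counit_antipode)
qed

lemma cop_antipode_left: "(\<Sum>p\<leftarrow>\<Delta> h. Sinv (snd p) * fst p) = sH (\<epsilon> h) 1"
proof (rule lin_forms_separate[OF vsH])
  fix \<phi> assume L: "lin_form sH \<phi>"
  obtain x where h: "h = S x" by (metis antipode_Sinv)
  have "(\<Sum>p\<leftarrow>\<Delta> (S x). \<phi> (Sinv (snd p) * fst p)) = (\<Sum>p\<leftarrow>\<Delta> x. \<phi> (fst p * S (snd p)))"
    by (rule teq2E[OF antipode_anticomult vsH vsH, of "\<lambda>x y. \<phi> (Sinv y * x)" x])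
      (simp_all add: lin_form_def lin_form_simps[OF L vsH] Sinv_add Sinv_scale distrib_left distrib_right
        scaleH_mult)
  then show "\<phi> (\<Sum>p\<leftarrow>\<Delta> h. Sinv (snd p) * fst p) = \<phi> (sH (\<epsilon> h) 1)"
    by (simp add: h lin_form_sum_list[OF L vsH, symmetric] antipode_right counit_antipode)
qed

lemma Delta3_Sinv:
  assumes T1: "\<And>y z. lin_form sH (\<lambda>x. T x y z)" and T2: "\<And>x z. lin_form sH (\<lambda>y. T x y z)"
    and T3: "\<And>x y. lin_form sH (\<lambda>z. T x y z)"
  shows "(\<Sum>p\<leftarrow>Delta3 \<Delta> (Sinv g). T (fst p) (fst (snd p)) (snd (snd p)))
       = (\<Sum>q\<leftarrow>\<Delta> g. \<Sum>r\<leftarrow>\<Delta> (snd q). T (Sinv (snd r)) (Sinv (fst r)) (Sinv (fst q)))"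
proof -
  note te = lin_form_simps[OF T1 vsH] lin_form_simps[OF T2 vsH] lin_form_simps[OF T3 vsH]
  have flip: "(\<Sum>r\<leftarrow>\<Delta> (Sinv y). T (fst r) (snd r) c) = (\<Sum>r\<leftarrow>\<Delta> y. T (Sinv (snd r)) (Sinv (fst r)) c)"
    for y c
    by (rule teq2E[OF Sinv_anticomult vsH vsH, of "\<lambda>a b. T a b c" y]) (simp_all add: lin_form_def te)
  have "(\<Sum>p\<leftarrow>Delta3 \<Delta> (Sinv g). T (fst p) (fst (snd p)) (snd (snd p)))
      = (\<Sum>q\<leftarrow>\<Delta> (Sinv g). \<Sum>r\<leftarrow>\<Delta> (fst q). T (fst r) (snd r) (snd q))"
    by (simp add: Delta3_def)
  also have "\<dots> = (\<Sum>q\<leftarrow>\<Delta> g. \<Sum>r\<leftarrow>\<Delta> (Sinv (snd q)). T (fst r) (snd r) (Sinv (fst q)))"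
    by (rule teq2E[OF Sinv_anticomult vsH vsH, of "\<lambda>x c. \<Sum>r\<leftarrow>\<Delta> x. T (fst r) (snd r) c" g])
      ((intro lin_form_Hopf_intros)?; simp add: lin_form_def te)+
  finally show ?thesis by (simp add: flip)
qed

lemma Delta_antipode_cancel_first:
  assumes T1: "\<And>y z. lin_form sH (\<lambda>x. T x y z)" and T2: "\<And>x z. lin_form sH (\<lambda>y. T x y z)"
    and T3: "\<And>x y. lin_form sH (\<lambda>z. T x y z)"
  shows "(\<Sum>q\<leftarrow>\<Delta> h. \<Sum>r\<leftarrow>\<Delta> (snd q). \<Sum>s\<leftarrow>\<Delta> (fst r). T (fst q * S (fst s)) (snd s) (snd r))
       = (\<Sum>q\<leftarrow>\<Delta> h. T 1 (fst q) (snd q))"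
proof -
  note te = lin_form_simps[OF T1 vsH] lin_form_simps[OF T2 vsH] lin_form_simps[OF T3 vsH]
  have inner: "(\<Sum>r\<leftarrow>\<Delta> w. \<Sum>s\<leftarrow>\<Delta> (snd r). T (fst r * S (fst s)) (snd s) c)
      = (\<Sum>u\<leftarrow>\<Delta> w. \<Sum>s\<leftarrow>\<Delta> (fst u). T (fst s * S (snd s)) (snd u) c)" for w c
    by (rule teq3E[OF teq3_sym[OF Delta_coassoc] vsH vsH vsH, of "\<lambda>a b c'. T (a * S b) c' c" w])
      (simp_all add: Delta3_def lin_form_def te antipode_add antipode_scale scaleH_mult distrib_left
        distrib_right)
  have contract: "(\<Sum>s\<leftarrow>\<Delta> x. T (fst s * S (snd s)) y c) = \<epsilon> x * T 1 y c" for x y c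
    using arg_cong[OF antipode_right, of "\<lambda>a. T a y c" x] by (simp add: lin_form_sum_list[OF T1 vsH] te)
  have "(\<Sum>q\<leftarrow>\<Delta> h. \<Sum>r\<leftarrow>\<Delta> (snd q). \<Sum>s\<leftarrow>\<Delta> (fst r). T (fst q * S (fst s)) (snd s) (snd r))
      = (\<Sum>q\<leftarrow>\<Delta> h. \<Sum>r\<leftarrow>\<Delta> (fst q). \<Sum>s\<leftarrow>\<Delta> (snd r). T (fst r * S (fst s)) (snd s) (snd q))"
    by (rule teq3E[OF teq3_sym[OF Delta_coassoc] vsH vsH vsH,
          of "\<lambda>a b c. \<Sum>s\<leftarrow>\<Delta> b. T (a * S (fst s)) (snd s) c" h])
      (simp add: Delta3_def, ((intro lin_form_Hopf_intros)?; simp add: lin_form_def te antipode_add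
        antipode_scale scaleH_mult distrib_left distrib_right)+)
  also have "\<dots> = (\<Sum>q\<leftarrow>\<Delta> h. \<Sum>u\<leftarrow>\<Delta> (fst q). \<epsilon> (fst u) * T 1 (snd u) (snd q))"
    by (simp add: inner contract)
  also have "\<dots> = (\<Sum>q\<leftarrow>\<Delta> h. T 1 (fst q) (snd q))"
    by (simp add: counit_left_lin_form[OF T2])
  finally show ?thesis .
qed

end

locale hopf_comodules = hopf sH \<Delta> \<epsilon> S
  for sH :: "'k::field \<Rightarrow> 'h::ring_1 \<Rightarrow> 'h" and \<Delta> \<epsilon> S +
  fixes sP :: "'k \<Rightarrow> 'p::ring_1 \<Rightarrow> 'p" and \<delta>P :: "'p \<Rightarrow> ('p \<times> 'h) list"
    and sV :: "'k \<Rightarrow> 'v::ab_group_add \<Rightarrow> 'v" and \<delta>V :: "'v \<Rightarrow> ('v \<times> 'h) list"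
  assumes comodule_P: "right_comodule sP sH \<Delta> \<epsilon> \<delta>P"
    and comodule_V: "right_comodule sV sH \<Delta> \<epsilon> \<delta>V"
begin

abbreviation "E \<equiv> Esec sP sH sV \<delta>P \<delta>V"

lemma vsP: "vector_space sP"
  using comodule_P by (simp add: right_comodule_def)

lemma vsV: "vector_space sV"
  using comodule_V by (simp add: right_comodule_def)

lemma deltaP_tlin2: "tlin2 sP sP sH \<delta>P"
  using comodule_P by (simp add: right_comodule_def)

lemma deltaP_coassoc:
  "teq3 sP sH sH [(a, b, c). (x, c) \<leftarrow> \<delta>P p, (a, b) \<leftarrow> \<delta>P x] [(a, b, c). (a, y) \<leftarrow> \<delta>P p, (b, c) \<leftarrow> \<Delta> y]"
  using comodule_P by (simp add: right_comodule_def)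

lemma deltaP_counit: "(\<Sum>q\<leftarrow>\<delta>P p. sP (\<epsilon> (snd q)) (fst q)) = p"
  using comodule_P by (simp add: right_comodule_def)

lemma deltaV_tlin2: "tlin2 sV sV sH \<delta>V"
  using comodule_V by (simp add: right_comodule_def)

lemma deltaV_coassoc:
  "teq3 sV sH sH [(a, b, c). (x, c) \<leftarrow> \<delta>V v, (a, b) \<leftarrow> \<delta>V x] [(a, b, c). (a, y) \<leftarrow> \<delta>V v, (b, c) \<leftarrow> \<Delta> y]"
  using comodule_V by (simp add: right_comodule_def)

lemma deltaV_counit: "(\<Sum>q\<leftarrow>\<delta>V v. sV (\<epsilon> (snd q)) (fst q)) = v"
  using comodule_V by (simp add: right_comodule_def)

lemma deltaV_counit_lin_form: "lin_form sV \<phi> \<Longrightarrow> (\<Sum>q\<leftarrow>\<delta>V v. \<epsilon> (snd q) * \<phi> (fst q)) = \<phi> v"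
  using arg_cong[OF deltaV_counit, of \<phi> v]
  by (simp add: lin_form_sum_list[OF _ vsV] lin_form_simps[OF _ vsV])

lemma lin_form_sum_deltaP:
  "(\<And>w. lin_form sP (\<lambda>u. G (u, w))) \<Longrightarrow> (\<And>u. lin_form sH (\<lambda>w. G (u, w)))
    \<Longrightarrow> lin_form sP (\<lambda>x. \<Sum>p\<leftarrow>\<delta>P x. G p)"
  by (rule lin_form_sum_tlin2[OF deltaP_tlin2 vsP vsP vsH])

lemma lin_form_sum_deltaV:
  "(\<And>w. lin_form sV (\<lambda>u. G (u, w))) \<Longrightarrow> (\<And>u. lin_form sH (\<lambda>w. G (u, w)))
    \<Longrightarrow> lin_form sV (\<lambda>x. \<Sum>p\<leftarrow>\<delta>V x. G p)"
  by (rule lin_form_sum_tlin2[OF deltaV_tlin2 vsV vsV vsH])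

lemmas lin_form_comodule_intros = lin_form_Hopf_intros lin_form_sum_deltaP lin_form_sum_deltaV

lemma Esec_transfer_coaction:
  assumes t: "t \<in> E"
    and G1: "\<And>v h. lin_form sP (\<lambda>p. G p v h)" and G2: "\<And>p h. lin_form sV (\<lambda>v. G p v h)"
    and G3: "\<And>p v. lin_form sH (\<lambda>h. G p v h)"
  shows "(\<Sum>x\<leftarrow>t. \<Sum>q\<leftarrow>\<delta>P (fst x). G (fst q) (snd x) (snd q))
       = (\<Sum>x\<leftarrow>t. \<Sum>q\<leftarrow>\<delta>V (snd x). G (fst x) (fst q) (Sinv (snd q)))"
proof -
  note ge = lin_form_simps[OF G1 vsP] lin_form_simps[OF G2 vsV] lin_form_simps[OF G3 vsH]
  have undo: "(\<Sum>q\<leftarrow>\<delta>V v. \<Sum>r\<leftarrow>\<delta>V (fst q). G p (fst r) (h * (snd q * Sinv (snd r)))) = G p v h"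
    for p v h
  proof -
    have "(\<Sum>q\<leftarrow>\<delta>V v. \<Sum>r\<leftarrow>\<delta>V (fst q). G p (fst r) (h * (snd q * Sinv (snd r))))
        = (\<Sum>q\<leftarrow>\<delta>V v. \<Sum>r\<leftarrow>\<Delta> (snd q). G p (fst q) (h * (snd r * Sinv (fst r))))"
      by (rule teq3E[OF deltaV_coassoc vsV vsH vsH, of "\<lambda>a b c. G p a (h * (c * Sinv b))" v])
        (simp_all add: lin_form_def ge Sinv_add Sinv_scale scaleH_mult distrib_left distrib_right)
    also have "\<dots> = (\<Sum>q\<leftarrow>\<delta>V v. \<epsilon> (snd q) * G p (fst q) h)"
      using arg_cong[OF cop_antipode_right, of "\<lambda>x. G p _ (h * x)"]
      by (simp add: sum_list_const_mult[symmetric] lin_form_sum_list[OF G3 vsH] scaleH_mult ge)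
    also have "\<dots> = G p v h" by (rule deltaV_counit_lin_form[OF G2])
    finally show ?thesis .
  qed
  have "teq3 sP sV sH [(p', v', h * g). (p, v) \<leftarrow> t, (p', h) \<leftarrow> \<delta>P p, (v', g) \<leftarrow> \<delta>V v]
      [(p, v, 1). (p, v) \<leftarrow> t]"
    using t by (simp add: Esec_def)
  then show ?thesis
    by (rule teq3E[OF _ vsP vsV vsH, where f="\<lambda>p v h. \<Sum>r\<leftarrow>\<delta>V v. G p (fst r) (h * Sinv (snd r))"])
      (simp add: undo mult.assoc,
       ((auto intro!: lin_form_comodule_intros)?; simp add: lin_form_def ge Sinv_add Sinv_scale scaleH_mult
         distrib_left distrib_right)+)
qed

lemma deltaV_cop_antipode_cancel:
  assumes K1: "\<And>w g. lin_form sH (\<lambda>h. K w g h)" and K2: "\<And>w h. lin_form sH (\<lambda>g. K w g h)"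
    and K3: "\<And>g h. lin_form sV (\<lambda>w. K w g h)"
  shows "(\<Sum>p\<leftarrow>\<delta>V v. \<Sum>r\<leftarrow>\<delta>V (fst p). \<Sum>q\<leftarrow>\<Delta> (snd p). K (fst r) (snd q) (Sinv (fst q) * snd r))
    = (\<Sum>p\<leftarrow>\<delta>V v. K (fst p) (snd p) 1)"
proof -
  note ke = lin_form_simps[OF K1 vsH] lin_form_simps[OF K2 vsH] lin_form_simps[OF K3 vsV]
  have contract: "(\<Sum>q'\<leftarrow>\<Delta> y. \<Sum>q\<leftarrow>\<Delta> (snd q'). K w (snd q) (Sinv (fst q) * fst q')) = K w y 1" for w y
  proof -
    have "(\<Sum>q'\<leftarrow>\<Delta> y. \<Sum>q\<leftarrow>\<Delta> (snd q'). K w (snd q) (Sinv (fst q) * fst q'))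
        = (\<Sum>x\<leftarrow>\<Delta> y. \<Sum>s\<leftarrow>\<Delta> (fst x). K w (snd x) (Sinv (snd s) * fst s))"
      by (rule teq3E[OF teq3_sym[OF Delta_coassoc] vsH vsH vsH, of "\<lambda>g' g1 g2. K w g2 (Sinv g1 * g')" y])
        (simp_all add: Delta3_def lin_form_def ke scaleH_mult Sinv_add Sinv_scale distrib_left distrib_right)
    also have "\<dots> = (\<Sum>x\<leftarrow>\<Delta> y. \<epsilon> (fst x) * K w (snd x) 1)"
      using arg_cong[OF cop_antipode_left, of "K w _"]
      by (simp add: lin_form_sum_list[OF K1 vsH, symmetric] ke)
    also have "\<dots> = K w y 1" by (rule counit_left_lin_form[OF K2])
    finally show ?thesis .
  qed
  have "(\<Sum>p\<leftarrow>\<delta>V v. \<Sum>r\<leftarrow>\<delta>V (fst p). \<Sum>q\<leftarrow>\<Delta> (snd p). K (fst r) (snd q) (Sinv (fst q) * snd r))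
      = (\<Sum>p\<leftarrow>\<delta>V v. \<Sum>q'\<leftarrow>\<Delta> (snd p). \<Sum>q\<leftarrow>\<Delta> (snd q'). K (fst p) (snd q) (Sinv (fst q) * fst q'))"
    by (rule teq3E[OF deltaV_coassoc vsV vsH vsH, of "\<lambda>w g' g. \<Sum>q\<leftarrow>\<Delta> g. K w (snd q) (Sinv (fst q) * g')" v])
      (simp, ((auto intro!: lin_form_comodule_intros)?; simp add: lin_form_def ke scaleH_mult Sinv_add
        Sinv_scale distrib_left distrib_right)+)
  then show ?thesis by (simp add: contract)
qed

definition P_tensor_E :: "('p \<times> 'p \<times> 'v) list \<Rightarrow> bool" where
  "P_tensor_E X \<longleftrightarrow> teq4 sP sP sV sH [(a, b', w', g * g'). (a, b, w) \<leftarrow> X, (b', g) \<leftarrow> \<delta>P b, (w', g') \<leftarrow> \<delta>V w]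
     [(a, b, w, 1). (a, b, w) \<leftarrow> X]"

lemma P_tensor_E_teq3:
  assumes "teq3 sP sP sV X Y" "P_tensor_E Y"
  shows "P_tensor_E X"
  unfolding P_tensor_E_def
proof (rule teq4I[OF vsP vsP vsV vsH])
  fix F :: "'p \<Rightarrow> 'p \<Rightarrow> 'v \<Rightarrow> 'h \<Rightarrow> 'k"
  assume F: "\<And>y z w. lin_form sP (\<lambda>x. F x y z w)" "\<And>x z w. lin_form sP (\<lambda>y. F x y z w)"
    "\<And>x y w. lin_form sV (\<lambda>z. F x y z w)" "\<And>x y z. lin_form sH (\<lambda>w. F x y z w)"
  note Fe = lin_form_simps[OF F(1) vsP] lin_form_simps[OF F(2) vsP] lin_form_simps[OF F(3) vsV]
    lin_form_simps[OF F(4) vsH]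
  have "(\<Sum>x\<leftarrow>X. \<Sum>q\<leftarrow>\<delta>P (fst (snd x)). \<Sum>r\<leftarrow>\<delta>V (snd (snd x)). F (fst x) (fst q) (fst r) (snd q * snd r))
      = (\<Sum>x\<leftarrow>Y. \<Sum>q\<leftarrow>\<delta>P (fst (snd x)). \<Sum>r\<leftarrow>\<delta>V (snd (snd x)). F (fst x) (fst q) (fst r) (snd q * snd r))"
    by (rule teq3D[OF assms(1) vsP vsP vsV])
      ((auto intro!: lin_form_comodule_intros)?; simp add: lin_form_def Fe scaleH_mult distrib_right
        distrib_left)+
  moreover have "(\<Sum>x\<leftarrow>X. F (fst x) (fst (snd x)) (snd (snd x)) 1) = (\<Sum>x\<leftarrow>Y. F (fst x) (fst (snd x)) (snd (snd x)) 1)"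
    by (rule teq3D[OF assms(1) vsP vsP vsV]) (simp_all add: F)
  moreover note teq4D[OF assms(2)[unfolded P_tensor_E_def] vsP vsP vsV vsH F]
  ultimately show "(\<Sum>p\<leftarrow>[(a, b', w', g * g'). (a, b, w) \<leftarrow> X, (b', g) \<leftarrow> \<delta>P b, (w', g') \<leftarrow> \<delta>V w].
      F (fst p) (fst (snd p)) (fst (snd (snd p))) (snd (snd (snd p))))
    = (\<Sum>p\<leftarrow>[(a, b, w, 1). (a, b, w) \<leftarrow> X]. F (fst p) (fst (snd p)) (fst (snd (snd p))) (snd (snd (snd p))))"
    by simp
qed

lemma P_tensor_E_slice:
  assumes X: "P_tensor_E X" and \<phi>: "lin_form sP \<phi>"
  shows "map (\<lambda>x. (sP (\<phi> (fst x)) (fst (snd x)), snd (snd x))) X \<in> E"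
  unfolding Esec_def mem_Collect_eq
proof (rule teq3I[OF vsP vsV vsH])
  fix G :: "'p \<Rightarrow> 'v \<Rightarrow> 'h \<Rightarrow> 'k"
  assume G1: "\<And>y z. lin_form sP (\<lambda>x. G x y z)" and G2: "\<And>x z. lin_form sV (\<lambda>y. G x y z)"
    and G3: "\<And>x y. lin_form sH (\<lambda>z. G x y z)"
  note Ge = lin_form_simps[OF G1 vsP] lin_form_simps[OF G2 vsV] lin_form_simps[OF G3 vsH]
  have L: "lin_form sP (\<lambda>p. \<Sum>q\<leftarrow>\<delta>P p. \<Sum>r\<leftarrow>\<delta>V v. G (fst q) (fst r) (snd q * snd r))" for v
    by ((auto intro!: lin_form_comodule_intros)?; simp add: lin_form_def Ge scaleH_mult distrib_right)
  have "(\<Sum>x\<leftarrow>X. \<phi> (fst x) * (\<Sum>q\<leftarrow>\<delta>P (fst (snd x)). \<Sum>r\<leftarrow>\<delta>V (snd (snd x)). G (fst q) (fst r) (snd q * snd r)))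
      = (\<Sum>x\<leftarrow>X. \<phi> (fst x) * G (fst (snd x)) (snd (snd x)) 1)"
    by (rule teq4E[OF X[unfolded P_tensor_E_def] vsP vsP vsV vsH, of "\<lambda>y1 y2 v h. \<phi> y1 * G y2 v h"])
      (simp add: sum_list_const_mult, simp_all add: lin_form_def lin_form_simps[OF \<phi> vsP] distrib_right Ge
        distrib_left)
  then show "(\<Sum>x\<leftarrow>[(p', v', h * g). (p, v) \<leftarrow> map (\<lambda>x. (sP (\<phi> (fst x)) (fst (snd x)), snd (snd x))) X,
        (p', h) \<leftarrow> \<delta>P p, (v', g) \<leftarrow> \<delta>V v]. G (fst x) (fst (snd x)) (snd (snd x)))
    = (\<Sum>x\<leftarrow>[(p, v, 1). (p, v) \<leftarrow> map (\<lambda>x. (sP (\<phi> (fst x)) (fst (snd x)), snd (snd x))) X].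
        G (fst x) (fst (snd x)) (snd (snd x)))"
    by (simp add: lin_form_simps(2)[OF L vsP] Ge)
qed

text \<open>Expanding the first legs of an element of \<open>P \<otimes> (P \<otimes> V)\<^sup>H\<close> in a basis (adapted to a subspace
  containing them) writes it as \<open>\<Sum>\<^sub>\<beta> \<beta> \<otimes> e\<^sub>\<beta>\<close> with invariant \<open>e\<^sub>\<beta>\<close>.\<close>

lemma P_tensor_E_decompose:
  assumes X: "P_tensor_E X" and V: "fst ` set X \<subseteq> V"
  obtains L Xs where "set L \<subseteq> V" "\<forall>\<beta>. Xs \<beta> \<in> E"
    "\<And>K. (\<And>y v. lin_form sP (\<lambda>x. K x y v)) \<Longrightarrow> (\<And>x v. lin_form sP (\<lambda>y. K x y v)) \<Longrightarrow>
      (\<Sum>x\<leftarrow>X. K (fst x) (fst (snd x)) (snd (snd x))) = (\<Sum>\<beta>\<leftarrow>L. \<Sum>x\<leftarrow>Xs \<beta>. K \<beta> (fst x) (snd x))"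
proof -
  obtain R where R: "\<And>\<beta>. lin_form sP (R \<beta>)"
    and coords: "\<And>as. \<exists>L. (\<forall>a\<in>set as. a = (\<Sum>\<beta>\<leftarrow>L. sP (R \<beta> a) \<beta>)) \<and> (set as \<subseteq> V \<longrightarrow> set L \<subseteq> V)"
    using obtain_coordinate_forms[OF vsP] by blast
  obtain L where L: "\<forall>a\<in>fst ` set X. a = (\<Sum>\<beta>\<leftarrow>L. sP (R \<beta> a) \<beta>)" "set L \<subseteq> V"
    using coords[of "map fst X"] V by auto
  define Xs where "Xs \<beta> = map (\<lambda>x. (sP (R \<beta> (fst x)) (fst (snd x)), snd (snd x))) X" for \<beta>
  have "(\<Sum>x\<leftarrow>X. K (fst x) (fst (snd x)) (snd (snd x))) = (\<Sum>\<beta>\<leftarrow>L. \<Sum>x\<leftarrow>Xs \<beta>. K \<beta> (fst x) (snd x))"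
    if K1: "\<And>y v. lin_form sP (\<lambda>x. K x y v)" and K2: "\<And>x v. lin_form sP (\<lambda>y. K x y v)" for K
  proof -
    have expand: "K (fst x) (fst (snd x)) (snd (snd x))
        = (\<Sum>\<beta>\<leftarrow>L. K \<beta> (sP (R \<beta> (fst x)) (fst (snd x))) (snd (snd x)))" if "x \<in> set X" for x
      using arg_cong[OF bspec[OF L(1)], of _ "\<lambda>a. K a (fst (snd x)) (snd (snd x))"] that
      by (simp add: lin_form_sum_list[OF K1 vsP] lin_form_simps(2)[OF K1 vsP] lin_form_simps(2)[OF K2 vsP])
    have "(\<Sum>x\<leftarrow>X. K (fst x) (fst (snd x)) (snd (snd x)))
        = (\<Sum>x\<leftarrow>X. \<Sum>\<beta>\<leftarrow>L. K \<beta> (sP (R \<beta> (fst x)) (fst (snd x))) (snd (snd x)))"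
      by (rule sum_list_map_cong) (rule expand)
    also have "\<dots> = (\<Sum>\<beta>\<leftarrow>L. \<Sum>x\<leftarrow>X. K \<beta> (sP (R \<beta> (fst x)) (fst (snd x))) (snd (snd x)))"
      by (rule sum_list_map_swap)
    finally show ?thesis unfolding Xs_def by simp
  qed
  moreover have "Xs \<beta> \<in> E" for \<beta>
    unfolding Xs_def by (rule P_tensor_E_slice[OF X R])
  ultimately show ?thesis using L(2) that by blast
qed

end

locale frame_connection = hopf_comodules sH \<Delta> \<epsilon> S sP \<delta>P sV \<delta>V
  for sH :: "'k::field \<Rightarrow> 'h::ring_1 \<Rightarrow> 'h" and \<Delta> \<epsilon> S
    and sP :: "'k \<Rightarrow> 'p::ring_1 \<Rightarrow> 'p" and \<delta>P and sV :: "'k \<Rightarrow> 'v::ab_group_add \<Rightarrow> 'v" and \<delta>V +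
  fixes \<theta> :: "'v \<Rightarrow> ('p \<times> 'p) list" and \<omega> :: "'h \<Rightarrow> ('p \<times> 'p) list"
  assumes frame: "frame_resolution sP sH sV \<Delta> \<epsilon> S \<delta>P \<delta>V \<theta>"
    and conn: "connection sP sH \<Delta> \<epsilon> S \<delta>P \<omega>"
    and left_strong: "left_strong sP sH \<delta>P \<omega>"
begin

abbreviation "M \<equiv> coinv sP sH \<delta>P"

lemma principal_bundle: "quantum_principal_bundle sP sH \<Delta> \<epsilon> S \<delta>P"
  using frame by (simp add: frame_resolution_def)

lemma comodule_algebra_P: "right_comodule_algebra sP sH \<Delta> \<epsilon> \<delta>P"
  using principal_bundle by (simp add: quantum_principal_bundle_def)

lemma scaleP_mult: "sP c a * b = sP c (a * b)" "a * sP c b = sP c (a * b)"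
  using comodule_algebra_P unfolding right_comodule_algebra_def k_algebra_def by metis+

lemma deltaP_mult: "teq2 sP sH (\<delta>P (p * q)) (mult2 (\<delta>P p) (\<delta>P q))"
  using comodule_algebra_P by (simp add: right_comodule_algebra_def)

lemma deltaP_one: "teq2 sP sH (\<delta>P 1) [(1, 1)]"
  using comodule_algebra_P by (simp add: right_comodule_algebra_def)

lemma can_map_surj: "\<exists>t. teq2 sP sH (can_map \<delta>P t) u"
  using principal_bundle by (simp add: quantum_principal_bundle_def)

lemma theta_rst1: "rst1 sP sH sV \<delta>P \<delta>V \<theta>"
  using frame by (simp add: frame_resolution_def)

lemma theta_tlin2: "tlin2 sV sP sP \<theta>"
  using theta_rst1 by (simp add: rst1_def)

lemma theta_equivariant:
  "teq3 sP sP sH (coact2 \<delta>P (\<theta> v)) [(a, b, h). (w, h) \<leftarrow> \<delta>V v, (a, b) \<leftarrow> \<theta> w]"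
  using theta_rst1 by (simp add: rst1_def)

lemma s_theta_Omega1M: "t \<in> E \<Longrightarrow> s_theta \<theta> t \<in> Omega1M sP M"
  using frame by (simp add: frame_resolution_def)

lemma s_theta_inj: "t \<in> E \<Longrightarrow> u \<in> E \<Longrightarrow> teq2 sP sP (s_theta \<theta> t) (s_theta \<theta> u) \<Longrightarrow> teq2 sP sV t u"
  using frame by (simp add: frame_resolution_def)

lemma omega_tlin2: "tlin2 sH sP sP \<omega>"
  using conn by (simp add: connection_def)

lemma omega_Omega1: "(\<Sum>a\<leftarrow>\<omega> h. fst a * snd a) = 0"
  using conn by (simp add: connection_def in_Omega1_def)

lemma omega_one: "teq2 sP sP (\<omega> 1) []"
  using conn by (simp add: connection_def)

lemma omega_equivariant:
  "teq3 sP sP sH (coact2 \<delta>P (\<omega> h)) [(a, b, S x * z). (x, y, z) \<leftarrow> Delta3 \<Delta> h, (a, b) \<leftarrow> \<omega> y]"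
  using conn by (simp add: connection_def)

lemma lin_form_sum_theta:
  "(\<And>w. lin_form sP (\<lambda>u. G (u, w))) \<Longrightarrow> (\<And>u. lin_form sP (\<lambda>w. G (u, w)))
    \<Longrightarrow> lin_form sV (\<lambda>x. \<Sum>p\<leftarrow>\<theta> x. G p)"
  by (rule lin_form_sum_tlin2[OF theta_tlin2 vsV vsP vsP])

lemma lin_form_sum_omega:
  "(\<And>w. lin_form sP (\<lambda>u. G (u, w))) \<Longrightarrow> (\<And>u. lin_form sP (\<lambda>w. G (u, w)))
    \<Longrightarrow> lin_form sH (\<lambda>x. \<Sum>p\<leftarrow>\<omega> x. G p)"
  by (rule lin_form_sum_tlin2[OF omega_tlin2 vsH vsP vsP])

lemma lin_form_sum_omega_Sinv:
  "(\<And>w. lin_form sP (\<lambda>u. G (u, w))) \<Longrightarrow> (\<And>u. lin_form sP (\<lambda>w. G (u, w)))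
    \<Longrightarrow> lin_form sH (\<lambda>x. \<Sum>p\<leftarrow>\<omega> (Sinv x). G p)"
  by (rule lin_form_compose[OF lin_form_sum_omega]) (auto simp: Sinv_add Sinv_scale)

lemmas lin_form_intros =
  lin_form_comodule_intros lin_form_sum_theta lin_form_sum_omega lin_form_sum_omega_Sinv

subsection \<open>The torsion formula\<close>

abbreviation "Nabla \<equiv> nabla sP sH sV \<delta>P \<delta>V \<theta> \<omega>"
abbreviation "Tor \<equiv> torsion sP sH sV \<delta>P \<delta>V \<theta> \<omega>"
abbreviation "Dbar \<equiv> Dbar_theta S \<delta>V \<theta> \<omega>"

definition s_theta_inv :: "('p \<times> 'p) list \<Rightarrow> ('p \<times> 'v) list" where
  "s_theta_inv w = (SOME t. t \<in> E \<and> teq2 sP sP (s_theta \<theta> t) w)"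

lemma s_theta_inv:
  assumes "t \<in> E" "teq2 sP sP (s_theta \<theta> t) w"
  shows "s_theta_inv w \<in> E" "teq2 sP sP (s_theta \<theta> (s_theta_inv w)) w" "teq2 sP sV (s_theta_inv w) t"
proof -
  have *: "s_theta_inv w \<in> E \<and> teq2 sP sP (s_theta \<theta> (s_theta_inv w)) w"
    unfolding s_theta_inv_def by (rule someI[of _ t]) (use assms in simp)
  then show "s_theta_inv w \<in> E" "teq2 sP sP (s_theta \<theta> (s_theta_inv w)) w" by simp_all
  from * assms show "teq2 sP sV (s_theta_inv w) t"
    by (meson s_theta_inj teq2_sym teq2_trans)
qed

lemma torsion_s_theta:
  assumes e: "e \<in> E"
  shows "teq3 sP sP sP (Tor (s_theta \<theta> e))
                 (concat (map (\<lambda>(p, v). lmul3 p (Dbar v)) e))"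
proof (rule teq3I[OF vsP vsP vsP])
  fix f assume f1: "\<And>y z. lin_form sP (\<lambda>x. f x y z)" and f2: "\<And>x z. lin_form sP (\<lambda>y. f x y z)"
    and f3: "\<And>x y. lin_form sP (\<lambda>z. f x y z)"
  note fe = lin_form_simps[OF f1 vsP] lin_form_simps[OF f2 vsP] lin_form_simps[OF f3 vsP]
  define t where "t = s_theta_inv (s_theta \<theta> e)"
  have t: "teq2 sP sV t e" using s_theta_inv(3)[OF e] unfolding t_def by simp
  have "(\<Sum>x\<leftarrow>t. \<Sum>a\<leftarrow>\<theta> (snd x). f (fst x) (fst a) (snd a))
      = (\<Sum>x\<leftarrow>e. \<Sum>a\<leftarrow>\<theta> (snd x). f (fst x) (fst a) (snd a))"
    by (rule teq2E[OF t vsP vsV, of "\<lambda>p v. \<Sum>a\<leftarrow>\<theta> v. f p (fst a) (snd a)"])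
      (simp, ((auto intro!: lin_form_intros)?; simp add: lin_form_def fe)+)
  moreover have "(\<Sum>x\<leftarrow>t. \<Sum>q\<leftarrow>\<delta>P (fst x). \<Sum>a\<leftarrow>\<omega> (snd q). \<Sum>b\<leftarrow>\<theta> (snd x).
        f (fst q * fst a) (snd a * fst b) (snd b))
      = (\<Sum>x\<leftarrow>e. \<Sum>q\<leftarrow>\<delta>P (fst x). \<Sum>a\<leftarrow>\<omega> (snd q). \<Sum>b\<leftarrow>\<theta> (snd x).
        f (fst q * fst a) (snd a * fst b) (snd b))"
    by (rule teq2E[OF t vsP vsV,
          of "\<lambda>p v. \<Sum>q\<leftarrow>\<delta>P p. \<Sum>a\<leftarrow>\<omega> (snd q). \<Sum>b\<leftarrow>\<theta> v. f (fst q * fst a) (snd a * fst b) (snd b)"])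
      (simp, ((auto intro!: lin_form_intros)?; simp add: lin_form_def fe scaleP_mult distrib_left distrib_right)+)
  moreover have "(\<Sum>x\<leftarrow>e. \<Sum>q\<leftarrow>\<delta>P (fst x). \<Sum>a\<leftarrow>\<omega> (snd q). \<Sum>b\<leftarrow>\<theta> (snd x).
        f (fst q * fst a) (snd a * fst b) (snd b))
      = (\<Sum>x\<leftarrow>e. \<Sum>q\<leftarrow>\<delta>V (snd x). \<Sum>a\<leftarrow>\<omega> (Sinv (snd q)). \<Sum>b\<leftarrow>\<theta> (fst q).
        f (fst x * fst a) (snd a * fst b) (snd b))"
    by (rule Esec_transfer_coaction[OF e,
          of "\<lambda>p v h. \<Sum>a\<leftarrow>\<omega> h. \<Sum>b\<leftarrow>\<theta> v. f (p * fst a) (snd a * fst b) (snd b)"])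
      ((auto intro!: lin_form_intros)?; simp add: lin_form_def fe scaleP_mult distrib_left distrib_right)+
  ultimately show "(\<Sum>p\<leftarrow>Tor (s_theta \<theta> e). f (fst p) (fst (snd p)) (snd (snd p))) =
      (\<Sum>p\<leftarrow>concat (map (\<lambda>(p, v). lmul3 p (Dbar v)) e). f (fst p) (fst (snd p)) (snd (snd p)))"
    unfolding torsion_def nabla_def Let_def s_theta_inv_def[symmetric] t_def[symmetric]
    by (simp add: d1_def neg3_def s_theta_def lmul2_def lmul3_def mult11_def Dbar_theta_def
        Sinv_def[symmetric] fe sum_list_addf sum_list_subtractf sum_list_map_uminus)
qed

lemma sum_Dbar:
  "(\<Sum>p\<leftarrow>Dbar v. f (fst p) (fst (snd p)) (snd (snd p))) =
   (\<Sum>a\<leftarrow>\<theta> v. f 1 (fst a) (snd a)) + ((\<Sum>a\<leftarrow>\<theta> v. f (- fst a) 1 (snd a)) +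
   ((\<Sum>a\<leftarrow>\<theta> v. f (fst a) (snd a) 1) +
   (\<Sum>q\<leftarrow>\<delta>V v. \<Sum>a\<leftarrow>\<omega> (Sinv (snd q)). \<Sum>b\<leftarrow>\<theta> (fst q). f (fst a) (snd a * fst b) (snd b))))"
  by (simp add: Dbar_theta_def mult11_def Sinv_def[symmetric] sum_list_addf)

lemma lin_form_sum_Dbar:
  assumes f1: "\<And>y z. lin_form sP (\<lambda>x. f x y z)" and f2: "\<And>x z. lin_form sP (\<lambda>y. f x y z)"
    and f3: "\<And>x y. lin_form sP (\<lambda>z. f x y z)"
  shows "lin_form sV (\<lambda>v. \<Sum>p\<leftarrow>Dbar v. f (fst p) (fst (snd p)) (snd (snd p)))"
  unfolding sum_Dbar
  by ((auto intro!: lin_form_intros)?; simp add: lin_form_def lin_form_simps[OF f1 vsP]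
      lin_form_simps[OF f2 vsP] lin_form_simps[OF f3 vsP] scaleP_mult distrib_left distrib_right)

lemma Dbar_tlin3: "tlin3 sV sP sP sP Dbar"
  unfolding tlin3_def
proof (intro allI, rule teq3I[OF vsP vsP vsP])
  fix c x y f assume f1: "\<And>y z. lin_form sP (\<lambda>x. f x y z)" and f2: "\<And>x z. lin_form sP (\<lambda>y. f x y z)"
    and f3: "\<And>x y. lin_form sP (\<lambda>z. f x y z)"
  note L = lin_form_sum_Dbar[OF f1 f2 f3]
  show "(\<Sum>p\<leftarrow>Dbar (sV c x + y). f (fst p) (fst (snd p)) (snd (snd p))) =
    (\<Sum>p\<leftarrow>map (\<lambda>(a, b, d). (sP c a, b, d)) (Dbar x) @ Dbar y. f (fst p) (fst (snd p)) (snd (snd p)))"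
    using lin_form_simps(1,2)[OF L vsV] by (simp add: lin_form_simps[OF f1 vsP] sum_list_const_mult)
qed

subsection \<open>Equivariance of \<open>D\<theta>\<close>\<close>

definition coact3_test :: "('p \<Rightarrow> 'p \<Rightarrow> 'p \<Rightarrow> 'h \<Rightarrow> 'k) \<Rightarrow> 'p \<Rightarrow> 'p \<Rightarrow> 'p \<Rightarrow> 'k" where
  "coact3_test f x y z =
    (\<Sum>a\<leftarrow>\<delta>P x. \<Sum>b\<leftarrow>\<delta>P y. \<Sum>c\<leftarrow>\<delta>P z. f (fst a) (fst b) (fst c) (snd a * snd b * snd c))"

lemma theta_equivariant_sum:
  assumes "\<And>y h. lin_form sP (\<lambda>x. F x y h)" "\<And>x h. lin_form sP (\<lambda>y. F x y h)"
    "\<And>x y. lin_form sH (\<lambda>h. F x y h)"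
  shows "(\<Sum>a\<leftarrow>\<theta> v. \<Sum>b\<leftarrow>\<delta>P (fst a). \<Sum>c\<leftarrow>\<delta>P (snd a). F (fst b) (fst c) (snd b * snd c))
     = (\<Sum>q\<leftarrow>\<delta>V v. \<Sum>a\<leftarrow>\<theta> (fst q). F (fst a) (snd a) (snd q))"
  by (rule teq3E[OF theta_equivariant vsP vsP vsH, of F v]) (simp_all add: coact2_def assms)

context
  fixes f :: "'p \<Rightarrow> 'p \<Rightarrow> 'p \<Rightarrow> 'h \<Rightarrow> 'k"
  assumes f1: "\<And>y z w. lin_form sP (\<lambda>x. f x y z w)" and f2: "\<And>x z w. lin_form sP (\<lambda>y. f x y z w)"
    and f3: "\<And>x y w. lin_form sP (\<lambda>z. f x y z w)" and f4: "\<And>x y z. lin_form sH (\<lambda>w. f x y z w)"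
begin

lemmas fe = lin_form_simps[OF f1 vsP] lin_form_simps[OF f2 vsP] lin_form_simps[OF f3 vsP]
  lin_form_simps[OF f4 vsH]

lemma lin_form_coact3_test:
  "lin_form sP (\<lambda>x. coact3_test f x y z)" "lin_form sP (\<lambda>y. coact3_test f x y z)"
  "lin_form sP (\<lambda>z. coact3_test f x y z)"
  unfolding coact3_test_def
  by ((auto intro!: lin_form_intros)?; simp add: lin_form_def fe scaleH_mult distrib_left distrib_right)+

lemma coact3_test_one_left: "coact3_test f 1 y z = (\<Sum>b\<leftarrow>\<delta>P y. \<Sum>c\<leftarrow>\<delta>P z. f 1 (fst b) (fst c) (snd b * snd c))"
  unfolding coact3_test_def
  by (rule teq2E[OF deltaP_one vsP vsH,
        of "\<lambda>a h. \<Sum>b\<leftarrow>\<delta>P y. \<Sum>c\<leftarrow>\<delta>P z. f a (fst b) (fst c) (h * snd b * snd c)"])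
    (simp, ((auto intro!: lin_form_intros)?; simp add: lin_form_def fe scaleH_mult distrib_left distrib_right)+)

lemma coact3_test_one_mid: "coact3_test f x 1 z = (\<Sum>a\<leftarrow>\<delta>P x. \<Sum>c\<leftarrow>\<delta>P z. f (fst a) 1 (fst c) (snd a * snd c))"
proof -
  have "(\<Sum>b\<leftarrow>\<delta>P 1. \<Sum>c\<leftarrow>\<delta>P z. f u (fst b) (fst c) (m * snd b * snd c))
      = (\<Sum>c\<leftarrow>\<delta>P z. f u 1 (fst c) (m * snd c))" for u m
    by (rule teq2E[OF deltaP_one vsP vsH, of "\<lambda>b h. \<Sum>c\<leftarrow>\<delta>P z. f u b (fst c) (m * h * snd c)"])
      (simp, ((auto intro!: lin_form_intros)?; simp add: lin_form_def fe scaleH_mult distrib_left distrib_right)+)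
  then show ?thesis unfolding coact3_test_def by simp
qed

lemma coact3_test_one_right: "coact3_test f x y 1 = (\<Sum>a\<leftarrow>\<delta>P x. \<Sum>b\<leftarrow>\<delta>P y. f (fst a) (fst b) 1 (snd a * snd b))"
proof -
  have "(\<Sum>c\<leftarrow>\<delta>P 1. f u v (fst c) (m * snd c)) = f u v 1 m" for u v m
    by (rule teq2E[OF deltaP_one vsP vsH, of "\<lambda>c h. f u v c (m * h)"])
      (simp_all add: lin_form_def fe scaleH_mult distrib_left distrib_right)
  then show ?thesis unfolding coact3_test_def by simp
qed

lemma coact3_test_d_theta:
  "(\<Sum>a\<leftarrow>\<theta> v. coact3_test f 1 (fst a) (snd a)) = (\<Sum>q\<leftarrow>\<delta>V v. \<Sum>a\<leftarrow>\<theta> (fst q). f 1 (fst a) (snd a) (snd q))"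
  "(\<Sum>a\<leftarrow>\<theta> v. coact3_test f (- fst a) 1 (snd a))
    = (\<Sum>q\<leftarrow>\<delta>V v. \<Sum>a\<leftarrow>\<theta> (fst q). f (- fst a) 1 (snd a) (snd q))"
  "(\<Sum>a\<leftarrow>\<theta> v. coact3_test f (fst a) (snd a) 1) = (\<Sum>q\<leftarrow>\<delta>V v. \<Sum>a\<leftarrow>\<theta> (fst q). f (fst a) (snd a) 1 (snd q))"
proof -
  show "(\<Sum>a\<leftarrow>\<theta> v. coact3_test f 1 (fst a) (snd a))
      = (\<Sum>q\<leftarrow>\<delta>V v. \<Sum>a\<leftarrow>\<theta> (fst q). f 1 (fst a) (snd a) (snd q))"
    unfolding coact3_test_one_left by (rule theta_equivariant_sum) (simp_all add: lin_form_def fe)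
  have "coact3_test f (- x) 1 z = - coact3_test f x 1 z" for x z
    using lin_form_simps(4)[OF lin_form_coact3_test(1) vsP] .
  moreover have "(\<Sum>a\<leftarrow>\<theta> v. coact3_test f (fst a) 1 (snd a))
      = (\<Sum>q\<leftarrow>\<delta>V v. \<Sum>a\<leftarrow>\<theta> (fst q). f (fst a) 1 (snd a) (snd q))"
    unfolding coact3_test_one_mid by (rule theta_equivariant_sum) (simp_all add: lin_form_def fe)
  ultimately show "(\<Sum>a\<leftarrow>\<theta> v. coact3_test f (- fst a) 1 (snd a))
      = (\<Sum>q\<leftarrow>\<delta>V v. \<Sum>a\<leftarrow>\<theta> (fst q). f (- fst a) 1 (snd a) (snd q))"
    by (simp add: fe sum_list_map_uminus)
  show "(\<Sum>a\<leftarrow>\<theta> v. coact3_test f (fst a) (snd a) 1)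
      = (\<Sum>q\<leftarrow>\<delta>V v. \<Sum>a\<leftarrow>\<theta> (fst q). f (fst a) (snd a) 1 (snd q))"
    unfolding coact3_test_one_right by (rule theta_equivariant_sum) (simp_all add: lin_form_def fe)
qed

lemma coact3_test_mult_mid:
  "coact3_test f \<alpha> (\<beta> * \<gamma>) \<zeta> = (\<Sum>x\<leftarrow>\<delta>P \<alpha>. \<Sum>y1\<leftarrow>\<delta>P \<beta>. \<Sum>y2\<leftarrow>\<delta>P \<gamma>. \<Sum>z\<leftarrow>\<delta>P \<zeta>.
     f (fst x) (fst y1 * fst y2) (fst z) (snd x * (snd y1 * (snd y2 * snd z))))"
proof -
  have "(\<Sum>y\<leftarrow>\<delta>P (\<beta> * \<gamma>). \<Sum>z\<leftarrow>\<delta>P \<zeta>. f u (fst y) (fst z) (m * snd y * snd z)) =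
     (\<Sum>y1\<leftarrow>\<delta>P \<beta>. \<Sum>y2\<leftarrow>\<delta>P \<gamma>. \<Sum>z\<leftarrow>\<delta>P \<zeta>. f u (fst y1 * fst y2) (fst z) (m * (snd y1 * (snd y2 * snd z))))"
    for u m
    by (rule teq2E[OF deltaP_mult vsP vsH, of "\<lambda>b h. \<Sum>z\<leftarrow>\<delta>P \<zeta>. f u b (fst z) (m * h * snd z)" \<beta> \<gamma>])
      (simp add: mult2_def mult.assoc, ((auto intro!: lin_form_intros)?; simp add: lin_form_def fe
        scaleH_mult distrib_left distrib_right)+)
  then show ?thesis unfolding coact3_test_def by simp
qed

lemma coact3_test_omega_Sinv_theta:
  "(\<Sum>a\<leftarrow>\<omega> (Sinv g). \<Sum>b\<leftarrow>\<theta> w. coact3_test f (fst a) (snd a * fst b) (snd b)) =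
   (\<Sum>q\<leftarrow>\<Delta> g. \<Sum>r'\<leftarrow>\<Delta> (snd q). \<Sum>a\<leftarrow>\<omega> (Sinv (fst r')). \<Sum>r\<leftarrow>\<delta>V w. \<Sum>b\<leftarrow>\<theta> (fst r).
     f (fst a) (snd a * fst b) (snd b) (snd r' * (Sinv (fst q) * snd r)))"
proof -
  have theta: "(\<Sum>b\<leftarrow>\<theta> w. \<Sum>y2\<leftarrow>\<delta>P (fst b). \<Sum>z\<leftarrow>\<delta>P (snd b).
      f \<alpha> (\<beta> * fst y2) (fst z) (M1 * (M2 * (snd y2 * snd z))))
    = (\<Sum>r\<leftarrow>\<delta>V w. \<Sum>b\<leftarrow>\<theta> (fst r). f \<alpha> (\<beta> * fst b) (snd b) (M1 * (M2 * snd r)))" for \<alpha> \<beta> M1 M2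
    by (rule theta_equivariant_sum[of "\<lambda>u z m. f \<alpha> (\<beta> * u) z (M1 * (M2 * m))"])
      (simp_all add: lin_form_def fe scaleH_mult scaleP_mult distrib_left distrib_right)
  have "(\<Sum>a\<leftarrow>\<omega> (Sinv g). \<Sum>b\<leftarrow>\<theta> w. coact3_test f (fst a) (snd a * fst b) (snd b)) =
     (\<Sum>a\<leftarrow>\<omega> (Sinv g). \<Sum>x\<leftarrow>\<delta>P (fst a). \<Sum>y1\<leftarrow>\<delta>P (snd a). \<Sum>b\<leftarrow>\<theta> w. \<Sum>y2\<leftarrow>\<delta>P (fst b).
      \<Sum>z\<leftarrow>\<delta>P (snd b). f (fst x) (fst y1 * fst y2) (fst z) (snd x * (snd y1 * (snd y2 * snd z))))"
    unfolding coact3_test_mult_mid by (simp only: sum_list_map_swap[where xs="\<theta> w"])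
  also have "\<dots> = (\<Sum>p\<leftarrow>Delta3 \<Delta> (Sinv g). \<Sum>a\<leftarrow>\<omega> (fst (snd p)). \<Sum>b\<leftarrow>\<theta> w. \<Sum>y2\<leftarrow>\<delta>P (fst b).
      \<Sum>z\<leftarrow>\<delta>P (snd b). f (fst a) (snd a * fst y2) (fst z) (S (fst p) * (snd (snd p) * (snd y2 * snd z))))"
    by (rule teq3E[OF omega_equivariant vsP vsP vsH, of "\<lambda>x y1 m. \<Sum>b\<leftarrow>\<theta> w. \<Sum>y2\<leftarrow>\<delta>P (fst b).
        \<Sum>z\<leftarrow>\<delta>P (snd b). f x (y1 * fst y2) (fst z) (m * (snd y2 * snd z))" "Sinv g"])
      (simp add: coact2_def mult.assoc, ((auto intro!: lin_form_intros)?; simp add: lin_form_def fe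
        scaleH_mult scaleP_mult distrib_left distrib_right)+)
  also have "\<dots> = (\<Sum>p\<leftarrow>Delta3 \<Delta> (Sinv g). \<Sum>a\<leftarrow>\<omega> (fst (snd p)). \<Sum>r\<leftarrow>\<delta>V w. \<Sum>b\<leftarrow>\<theta> (fst r).
      f (fst a) (snd a * fst b) (snd b) (S (fst p) * (snd (snd p) * snd r)))"
    by (simp add: theta mult.assoc)
  also have "\<dots> = (\<Sum>q\<leftarrow>\<Delta> g. \<Sum>r'\<leftarrow>\<Delta> (snd q). \<Sum>a\<leftarrow>\<omega> (Sinv (fst r')). \<Sum>r\<leftarrow>\<delta>V w. \<Sum>b\<leftarrow>\<theta> (fst r).
     f (fst a) (snd a * fst b) (snd b) (snd r' * (Sinv (fst q) * snd r)))"
  proof -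
    define T where "T x0 y0 z0 = (\<Sum>a\<leftarrow>\<omega> y0. \<Sum>r\<leftarrow>\<delta>V w. \<Sum>b\<leftarrow>\<theta> (fst r).
        f (fst a) (snd a * fst b) (snd b) (S x0 * (z0 * snd r)))" for x0 y0 z0
    have "lin_form sH (\<lambda>x. T x y z)" "lin_form sH (\<lambda>y. T x y z)" "lin_form sH (\<lambda>z. T x y z)" for x y z
      unfolding T_def by ((auto intro!: lin_form_intros)?; simp add: lin_form_def fe scaleH_mult scaleP_mult
          antipode_add antipode_scale distrib_left distrib_right)+
    from Delta3_Sinv[OF this, of g] show ?thesis by (simp add: T_def)
  qed
  finally show ?thesis .
qed

lemma coact3_test_omega_theta:
  "(\<Sum>q\<leftarrow>\<delta>V v. \<Sum>a\<leftarrow>\<omega> (Sinv (snd q)). \<Sum>b\<leftarrow>\<theta> (fst q). coact3_test f (fst a) (snd a * fst b) (snd b))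
    = (\<Sum>q\<leftarrow>\<delta>V v. \<Sum>r\<leftarrow>\<delta>V (fst q). \<Sum>a\<leftarrow>\<omega> (Sinv (snd r)). \<Sum>b\<leftarrow>\<theta> (fst r).
        f (fst a) (snd a * fst b) (snd b) (snd q))"
proof -
  define K where "K w g h = (\<Sum>r'\<leftarrow>\<Delta> g. \<Sum>a\<leftarrow>\<omega> (Sinv (fst r')). \<Sum>b\<leftarrow>\<theta> w.
      f (fst a) (snd a * fst b) (snd b) (snd r' * h))" for w g h
  have K_lin: "lin_form sH (\<lambda>h. K w g h)" "lin_form sH (\<lambda>g. K w g h)" "lin_form sV (\<lambda>w. K w g h)" for w g h
    unfolding K_def by ((auto intro!: lin_form_intros)?; simp add: lin_form_def fe scaleH_mult scaleP_mult
        distrib_left distrib_right)+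
  have swap: "(\<Sum>q\<leftarrow>\<Delta> g. \<Sum>r'\<leftarrow>\<Delta> (snd q). \<Sum>a\<leftarrow>\<omega> (Sinv (fst r')). \<Sum>r\<leftarrow>\<delta>V w. X q r' a r) =
     (\<Sum>r\<leftarrow>\<delta>V w. \<Sum>q\<leftarrow>\<Delta> g. \<Sum>r'\<leftarrow>\<Delta> (snd q). \<Sum>a\<leftarrow>\<omega> (Sinv (fst r')). (X q r' a r :: 'k))" for g w X
    by (simp only: sum_list_map_swap[where ys="\<delta>V w"])
  have "(\<Sum>q\<leftarrow>\<delta>V v. \<Sum>a\<leftarrow>\<omega> (Sinv (snd q)). \<Sum>b\<leftarrow>\<theta> (fst q). coact3_test f (fst a) (snd a * fst b) (snd b))
      = (\<Sum>p\<leftarrow>\<delta>V v. \<Sum>r\<leftarrow>\<delta>V (fst p). \<Sum>q\<leftarrow>\<Delta> (snd p). K (fst r) (snd q) (Sinv (fst q) * snd r))"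
    unfolding coact3_test_omega_Sinv_theta swap K_def by simp
  also have "\<dots> = (\<Sum>p\<leftarrow>\<delta>V v. K (fst p) (snd p) 1)"
    by (rule deltaV_cop_antipode_cancel[OF K_lin])
  also have "\<dots> = (\<Sum>q\<leftarrow>\<delta>V v. \<Sum>r\<leftarrow>\<delta>V (fst q). \<Sum>a\<leftarrow>\<omega> (Sinv (snd r)). \<Sum>b\<leftarrow>\<theta> (fst r).
      f (fst a) (snd a * fst b) (snd b) (snd q))"
    unfolding K_def
    by (rule teq3E[OF teq3_sym[OF deltaV_coassoc] vsV vsH vsH,
          of "\<lambda>w g h. \<Sum>a\<leftarrow>\<omega> (Sinv g). \<Sum>b\<leftarrow>\<theta> w. f (fst a) (snd a * fst b) (snd b) h" v])
      (simp, ((auto intro!: lin_form_intros)?; simp add: lin_form_def fe scaleH_mult scaleP_mult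
        distrib_left distrib_right)+)
  finally show ?thesis .
qed

end

lemma Dbar_equivariant:
  "teq4 sP sP sP sH (coact3 \<delta>P (Dbar v)) [(a, b, c, h). (w, h) \<leftarrow> \<delta>V v, (a, b, c) \<leftarrow> Dbar w]"
proof (rule teq4I[OF vsP vsP vsP vsH])
  fix f :: "'p \<Rightarrow> 'p \<Rightarrow> 'p \<Rightarrow> 'h \<Rightarrow> 'k"
  assume f: "\<And>y z w. lin_form sP (\<lambda>x. f x y z w)" "\<And>x z w. lin_form sP (\<lambda>y. f x y z w)"
    "\<And>x y w. lin_form sP (\<lambda>z. f x y z w)" "\<And>x y z. lin_form sH (\<lambda>w. f x y z w)"
  have "(\<Sum>p\<leftarrow>coact3 \<delta>P (Dbar v). f (fst p) (fst (snd p)) (fst (snd (snd p))) (snd (snd (snd p))))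
     = (\<Sum>p\<leftarrow>Dbar v. coact3_test f (fst p) (fst (snd p)) (snd (snd p)))"
    unfolding coact3_test_def by (simp add: coact3_def)
  also have "\<dots> = (\<Sum>p\<leftarrow>[(a, b, c, h). (w, h) \<leftarrow> \<delta>V v, (a, b, c) \<leftarrow> Dbar w].
      f (fst p) (fst (snd p)) (fst (snd (snd p))) (snd (snd (snd p))))"
    unfolding sum_Dbar coact3_test_d_theta[OF f] coact3_test_omega_theta[OF f]
    by (simp add: sum_Dbar[where f="\<lambda>x y z. f x y z _"] sum_list_addf)
  finally show "(\<Sum>p\<leftarrow>coact3 \<delta>P (Dbar v). f (fst p) (fst (snd p)) (fst (snd (snd p))) (snd (snd (snd p))))
     = (\<Sum>p\<leftarrow>[(a, b, c, h). (w, h) \<leftarrow> \<delta>V v, (a, b, c) \<leftarrow> Dbar w].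
      f (fst p) (fst (snd p)) (fst (snd (snd p))) (snd (snd (snd p))))" .
qed

subsection \<open>The horizontal part of \<open>dp\<close>\<close>

definition hor_d :: "'p \<Rightarrow> ('p \<times> 'p) list" where
  "hor_d p = dP p @ neg2 (Pi_omega \<delta>P \<omega> (dP p))"

lemma sum_hor_d:
  assumes g1: "\<And>y. lin_form sP (\<lambda>x. g x y)" and g2: "\<And>x. lin_form sP (\<lambda>y. g x y)"
  shows "(\<Sum>a\<leftarrow>hor_d p. g (fst a) (snd a))
    = g 1 p + g (- p) 1 - (\<Sum>q\<leftarrow>\<delta>P p. \<Sum>a\<leftarrow>\<omega> (snd q). g (fst q * fst a) (snd a))"
proof -
  note ge = lin_form_simps[OF g1 vsP] lin_form_simps[OF g2 vsP]
  have "(\<Sum>q\<leftarrow>\<delta>P 1. \<Sum>a\<leftarrow>\<omega> (snd q). g (p * (fst q * fst a)) (snd a)) = 0"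
  proof (rule teq2E[OF deltaP_one vsP vsH, of "\<lambda>x h. \<Sum>a\<leftarrow>\<omega> h. g (p * (x * fst a)) (snd a)"])
    show "(\<Sum>q\<leftarrow>\<delta>P 1. \<Sum>a\<leftarrow>\<omega> (snd q). g (p * (fst q * fst a)) (snd a)) = 0"
      if "(\<Sum>q\<leftarrow>\<delta>P 1. \<Sum>a\<leftarrow>\<omega> (snd q). g (p * (fst q * fst a)) (snd a))
        = (\<Sum>q\<leftarrow>[(1, 1)]. \<Sum>a\<leftarrow>\<omega> (snd q). g (p * (fst q * fst a)) (snd a))"
      using that teq2D[OF omega_one vsP vsP, of "\<lambda>x y. g (p * x) y"]
      by (simp add: lin_form_def ge scaleP_mult distrib_left)
  qed ((auto intro!: lin_form_intros)?; simp add: lin_form_def ge scaleP_mult distrib_left distrib_right)+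
  then show ?thesis
    unfolding hor_d_def by (simp add: dP_def neg2_def Pi_omega_def lmul2_def ge sum_list_map_uminus mult.assoc)
qed

lemma lin_form_sum_hor_d:
  assumes g1: "\<And>y. lin_form sP (\<lambda>x. g x y)" and g2: "\<And>x. lin_form sP (\<lambda>y. g x y)"
  shows "lin_form sP (\<lambda>p. \<Sum>a\<leftarrow>hor_d p. g (fst a) (snd a))"
  unfolding sum_hor_d[OF g1 g2]
  by ((auto intro!: lin_form_intros)?; simp add: lin_form_def lin_form_simps[OF g1 vsP]
      lin_form_simps[OF g2 vsP] scaleP_mult distrib_left distrib_right)

lemma hor_d_Omega1: "(\<Sum>a\<leftarrow>hor_d p. fst a * snd a) = 0"
proof -
  have "(\<Sum>a\<leftarrow>\<omega> h. - (c * fst a) * snd a) = 0" for c h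
    using omega_Omega1[of h] by (simp add: mult.assoc sum_list_const_mult sum_list_map_uminus)
  then show ?thesis
    unfolding hor_d_def by (simp add: dP_def neg2_def Pi_omega_def lmul2_def del: mult_minus_left)
qed

context
  fixes F :: "'p \<Rightarrow> 'p \<Rightarrow> 'h \<Rightarrow> 'k"
  assumes F1: "\<And>y z. lin_form sP (\<lambda>x. F x y z)" and F2: "\<And>x z. lin_form sP (\<lambda>y. F x y z)"
    and F3: "\<And>x y. lin_form sH (\<lambda>z. F x y z)"
begin

lemma omega_equivariant_sum:
  "(\<Sum>a\<leftarrow>\<omega> h. \<Sum>x\<leftarrow>\<delta>P (fst a). \<Sum>b\<leftarrow>\<delta>P (snd a). F (c * fst x) (fst b) (m * (snd x * snd b)))
    = (\<Sum>d\<leftarrow>Delta3 \<Delta> h. \<Sum>a\<leftarrow>\<omega> (fst (snd d)). F (c * fst a) (snd a) (m * (S (fst d) * snd (snd d))))"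
  by (rule teq3E[OF omega_equivariant vsP vsP vsH, of "\<lambda>x y k. F (c * x) y (m * k)" h])
    (simp_all add: coact2_def lin_form_def lin_form_simps[OF F1 vsP] lin_form_simps[OF F2 vsP]
      lin_form_simps[OF F3 vsH] scaleH_mult scaleP_mult distrib_left distrib_right)

lemma omega_Delta3_antipode_cancel:
  "(\<Sum>r\<leftarrow>\<Delta> y. \<Sum>d\<leftarrow>Delta3 \<Delta> (snd r). \<Sum>a\<leftarrow>\<omega> (fst (snd d)).
      F (c * fst a) (snd a) (fst r * (S (fst d) * snd (snd d))))
    = (\<Sum>r\<leftarrow>\<Delta> y. \<Sum>a\<leftarrow>\<omega> (fst r). F (c * fst a) (snd a) (snd r))"
proof -
  define T where "T m y0 z0 = (\<Sum>a\<leftarrow>\<omega> y0. F (c * fst a) (snd a) (m * z0))" for m y0 z0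
  have "lin_form sH (\<lambda>x. T x y z)" "lin_form sH (\<lambda>y. T x y z)" "lin_form sH (\<lambda>z. T x y z)" for x y z
    unfolding T_def by ((auto intro!: lin_form_intros)?; simp add: lin_form_def lin_form_simps[OF F1 vsP]
        lin_form_simps[OF F2 vsP] lin_form_simps[OF F3 vsH] scaleH_mult scaleP_mult distrib_left
        distrib_right)+
  from Delta_antipode_cancel_first[OF this, of y] show ?thesis
    by (simp add: T_def Delta3_def mult.assoc)
qed

lemma omega_lift_equivariant:
  "(\<Sum>q\<leftarrow>\<delta>P p. \<Sum>a\<leftarrow>\<omega> (snd q). \<Sum>x\<leftarrow>\<delta>P (fst q * fst a). \<Sum>b\<leftarrow>\<delta>P (snd a).
      F (fst x) (fst b) (snd x * snd b))
    = (\<Sum>q\<leftarrow>\<delta>P p. \<Sum>x1\<leftarrow>\<delta>P (fst q). \<Sum>a\<leftarrow>\<omega> (snd x1). F (fst x1 * fst a) (snd a) (snd q))"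
proof -
  note Fe = lin_form_simps[OF F1 vsP] lin_form_simps[OF F2 vsP] lin_form_simps[OF F3 vsH]
  have mult: "(\<Sum>x\<leftarrow>\<delta>P (u * v). \<Sum>b\<leftarrow>\<delta>P w. F (fst x) (fst b) (snd x * snd b)) =
      (\<Sum>x1\<leftarrow>\<delta>P u. \<Sum>x2\<leftarrow>\<delta>P v. \<Sum>b\<leftarrow>\<delta>P w. F (fst x1 * fst x2) (fst b) (snd x1 * (snd x2 * snd b)))"
    for u v w
    by (rule teq2E[OF deltaP_mult vsP vsH, of "\<lambda>y h. \<Sum>b\<leftarrow>\<delta>P w. F y (fst b) (h * snd b)" u v])
      (simp add: mult2_def mult.assoc, ((auto intro!: lin_form_intros)?; simp add: lin_form_def Fe
        scaleH_mult distrib_left distrib_right)+)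
  have swap: "(\<Sum>a\<leftarrow>\<omega> h. \<Sum>x1\<leftarrow>\<delta>P u. X a x1) = (\<Sum>x1\<leftarrow>\<delta>P u. \<Sum>a\<leftarrow>\<omega> h. (X a x1 :: 'k))" for h u X
    by (rule sum_list_map_swap)
  have "(\<Sum>q\<leftarrow>\<delta>P p. \<Sum>a\<leftarrow>\<omega> (snd q). \<Sum>x\<leftarrow>\<delta>P (fst q * fst a). \<Sum>b\<leftarrow>\<delta>P (snd a).
      F (fst x) (fst b) (snd x * snd b))
    = (\<Sum>q\<leftarrow>\<delta>P p. \<Sum>x1\<leftarrow>\<delta>P (fst q). \<Sum>d\<leftarrow>Delta3 \<Delta> (snd q). \<Sum>a\<leftarrow>\<omega> (fst (snd d)).
      F (fst x1 * fst a) (snd a) (snd x1 * (S (fst d) * snd (snd d))))"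
    unfolding mult swap omega_equivariant_sum ..
  also have "\<dots> = (\<Sum>q\<leftarrow>\<delta>P p. \<Sum>r\<leftarrow>\<Delta> (snd q). \<Sum>d\<leftarrow>Delta3 \<Delta> (snd r). \<Sum>a\<leftarrow>\<omega> (fst (snd d)).
      F (fst q * fst a) (snd a) (fst r * (S (fst d) * snd (snd d))))"
    by (rule teq3E[OF deltaP_coassoc vsP vsH vsH, of "\<lambda>x1 k1 k. \<Sum>d\<leftarrow>Delta3 \<Delta> k. \<Sum>a\<leftarrow>\<omega> (fst (snd d)).
        F (x1 * fst a) (snd a) (k1 * (S (fst d) * snd (snd d)))" p])
      (simp, ((auto intro!: lin_form_intros simp: Delta3_def)?; simp add: lin_form_def Fe scaleH_mult
        scaleP_mult antipode_add antipode_scale distrib_left distrib_right)+)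
  also have "\<dots> = (\<Sum>q\<leftarrow>\<delta>P p. \<Sum>r\<leftarrow>\<Delta> (snd q). \<Sum>a\<leftarrow>\<omega> (fst r). F (fst q * fst a) (snd a) (snd r))"
    by (simp add: omega_Delta3_antipode_cancel)
  also have "\<dots> = (\<Sum>q\<leftarrow>\<delta>P p. \<Sum>x1\<leftarrow>\<delta>P (fst q). \<Sum>a\<leftarrow>\<omega> (snd x1). F (fst x1 * fst a) (snd a) (snd q))"
    by (rule teq3E[OF teq3_sym[OF deltaP_coassoc] vsP vsH vsH,
          of "\<lambda>x1 w z0. \<Sum>a\<leftarrow>\<omega> w. F (x1 * fst a) (snd a) z0" p])
      (simp, ((auto intro!: lin_form_intros)?; simp add: lin_form_def Fe scaleH_mult scaleP_mult
        distrib_left distrib_right)+)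
  finally show ?thesis .
qed

end

lemma hor_d_equivariant:
  "teq3 sP sP sH (coact2 \<delta>P (hor_d p)) [(y1, y2, g). (p', g) \<leftarrow> \<delta>P p, (y1, y2) \<leftarrow> hor_d p']"
proof (rule teq3I[OF vsP vsP vsH])
  fix F :: "'p \<Rightarrow> 'p \<Rightarrow> 'h \<Rightarrow> 'k"
  assume F1: "\<And>y z. lin_form sP (\<lambda>x. F x y z)" and F2: "\<And>x z. lin_form sP (\<lambda>y. F x y z)"
    and F3: "\<And>x y. lin_form sH (\<lambda>z. F x y z)"
  note Fe = lin_form_simps[OF F1 vsP] lin_form_simps[OF F2 vsP] lin_form_simps[OF F3 vsH]
  define G where "G y1 y2 = (\<Sum>a\<leftarrow>\<delta>P y1. \<Sum>b\<leftarrow>\<delta>P y2. F (fst a) (fst b) (snd a * snd b))" for y1 y2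
  have G_lin: "lin_form sP (\<lambda>x. G x y)" "lin_form sP (\<lambda>y. G x y)" for x y
    unfolding G_def by ((auto intro!: lin_form_intros)?; simp add: lin_form_def Fe scaleH_mult
        distrib_left distrib_right)+
  have G_one_left: "G 1 y = (\<Sum>b\<leftarrow>\<delta>P y. F 1 (fst b) (snd b))" for y
    unfolding G_def
    by (rule teq2E[OF deltaP_one vsP vsH, of "\<lambda>x h. \<Sum>b\<leftarrow>\<delta>P y. F x (fst b) (h * snd b)"])
      (simp, ((auto intro!: lin_form_intros)?; simp add: lin_form_def Fe scaleH_mult distrib_left
        distrib_right)+)
  have "(\<Sum>b\<leftarrow>\<delta>P 1. F u (fst b) (m * snd b)) = F u 1 m" for u m
    by (rule teq2E[OF deltaP_one vsP vsH, of "\<lambda>y h. F u y (m * h)"])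
      (simp_all add: lin_form_def Fe scaleH_mult distrib_left distrib_right)
  then have G_one_right: "G x 1 = (\<Sum>a\<leftarrow>\<delta>P x. F (fst a) 1 (snd a))" for x
    unfolding G_def by simp
  have lin_right: "lin_form sP (\<lambda>x. \<Sum>a\<leftarrow>\<delta>P x. F (fst a) 1 (snd a))"
    by ((auto intro!: lin_form_intros)?; simp add: lin_form_def Fe)
  have "(\<Sum>a\<leftarrow>hor_d y. F (fst a) (snd a) g) = F 1 y g + F (- y) 1 g
      - (\<Sum>x1\<leftarrow>\<delta>P y. \<Sum>a\<leftarrow>\<omega> (snd x1). F (fst x1 * fst a) (snd a) g)" for y g
    by (rule sum_hor_d) (simp_all add: F1 F2)
  then have rhs: "(\<Sum>x\<leftarrow>[(y1, y2, g). (p', g) \<leftarrow> \<delta>P p, (y1, y2) \<leftarrow> hor_d p']. F (fst x) (fst (snd x)) (snd (snd x)))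
    = (\<Sum>q\<leftarrow>\<delta>P p. F 1 (fst q) (snd q) + F (- fst q) 1 (snd q) -
        (\<Sum>x1\<leftarrow>\<delta>P (fst q). \<Sum>a\<leftarrow>\<omega> (snd x1). F (fst x1 * fst a) (snd a) (snd q)))"
    by simp
  have "(\<Sum>x\<leftarrow>coact2 \<delta>P (hor_d p). F (fst x) (fst (snd x)) (snd (snd x))) = (\<Sum>a\<leftarrow>hor_d p. G (fst a) (snd a))"
    by (simp add: coact2_def G_def)
  then show "(\<Sum>x\<leftarrow>coact2 \<delta>P (hor_d p). F (fst x) (fst (snd x)) (snd (snd x))) =
     (\<Sum>x\<leftarrow>[(y1, y2, g). (p', g) \<leftarrow> \<delta>P p, (y1, y2) \<leftarrow> hor_d p']. F (fst x) (fst (snd x)) (snd (snd x)))"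
    unfolding rhs sum_hor_d[OF G_lin] G_one_left G_one_right lin_form_simps(4)[OF lin_right vsP]
    by (simp add: G_def omega_lift_equivariant[OF F1 F2 F3] sum_list_addf sum_list_subtractf Fe
        sum_list_map_uminus)
qed

lemma Omega1M_P_first_legs_coinv:
  assumes "t \<in> Omega1M_P sP M"
  obtains W where "teq2 sP sP t W" "\<forall>x\<in>set W. fst x \<in> M"
proof -
  obtain xs where xs: "\<forall>(\<xi>, q)\<in>set xs. \<xi> \<in> Omega1M sP M"
    "teq2 sP sP t (concat (map (\<lambda>(\<xi>, q). rmul2 \<xi> q) xs))"
    using assms unfolding Omega1M_P_def by blast
  define U where "U \<xi> = (SOME u. teq2 sP sP \<xi> u \<and> (\<forall>(a, b)\<in>set u. a \<in> M \<and> b \<in> M))" for \<xi>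
  have U: "teq2 sP sP \<xi> (U \<xi>) \<and> (\<forall>(a, b)\<in>set (U \<xi>). a \<in> M \<and> b \<in> M)" if "\<xi> \<in> Omega1M sP M" for \<xi>
    unfolding U_def by (rule someI_ex) (use that in \<open>auto simp: Omega1M_def\<close>)
  define W where "W = concat (map (\<lambda>(\<xi>, q). rmul2 (U \<xi>) q) xs)"
  have "teq2 sP sP (concat (map (\<lambda>(\<xi>, q). rmul2 \<xi> q) xs)) W"
  proof (rule teq2I[OF vsP vsP])
    fix f assume f1: "\<And>y. lin_form sP (\<lambda>x. f x y)" and f2: "\<And>x. lin_form sP (\<lambda>y. f x y)"
    have U_sum: "(\<Sum>a\<leftarrow>fst x. f (fst a) (snd a * snd x)) = (\<Sum>a\<leftarrow>U (fst x). f (fst a) (snd a * snd x))"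
      if "x \<in> set xs" for x
      by (rule teq2E[of _ _ "fst x" "U (fst x)", OF _ vsP vsP, of "\<lambda>a b. f a (b * snd x)"])
        (use U that xs(1) in fastforce, simp_all add: lin_form_def lin_form_simps[OF f1 vsP]
          lin_form_simps[OF f2 vsP] scaleP_mult distrib_right)
    show "(\<Sum>p\<leftarrow>concat (map (\<lambda>(\<xi>, q). rmul2 \<xi> q) xs). f (fst p) (snd p)) = (\<Sum>p\<leftarrow>W. f (fst p) (snd p))"
      unfolding W_def rmul2_def by (simp, rule sum_list_map_cong) (simp add: U_sum)
  qed
  moreover have "\<forall>x\<in>set W. fst x \<in> M"
    unfolding W_def rmul2_def using U xs(1) by fastforce
  ultimately show ?thesis using that xs(2) teq2_trans by blast
qed

lemma hor_d_first_legs_coinv: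
  obtains W where "teq2 sP sP (hor_d p) W" "\<forall>x\<in>set W. fst x \<in> M"
  using Omega1M_P_first_legs_coinv left_strong unfolding left_strong_def hor_d_def by blast

lemma colinear_if_first_legs_coinv:
  assumes W: "teq2 sP sP t W" "\<forall>x\<in>set W. fst x \<in> M"
  shows "teq3 sP sP sH [(a, b', g). (a, b) \<leftarrow> t, (b', g) \<leftarrow> \<delta>P b] (coact2 \<delta>P t)"
proof (rule teq3I[OF vsP vsP vsH])
  fix F :: "'p \<Rightarrow> 'p \<Rightarrow> 'h \<Rightarrow> 'k"
  assume F1: "\<And>y z. lin_form sP (\<lambda>x. F x y z)" and F2: "\<And>x z. lin_form sP (\<lambda>y. F x y z)"
    and F3: "\<And>x y. lin_form sH (\<lambda>z. F x y z)"
  note Fe = lin_form_simps[OF F1 vsP] lin_form_simps[OF F2 vsP] lin_form_simps[OF F3 vsH]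
  have last: "(\<Sum>x\<leftarrow>t. \<Sum>b\<leftarrow>\<delta>P (snd x). F (fst x) (fst b) (snd b))
      = (\<Sum>x\<leftarrow>W. \<Sum>b\<leftarrow>\<delta>P (snd x). F (fst x) (fst b) (snd b))"
    by (rule teq2E[OF W(1) vsP vsP, of "\<lambda>a b. \<Sum>b\<leftarrow>\<delta>P b. F a (fst b) (snd b)"])
      (simp, ((auto intro!: lin_form_intros)?; simp add: lin_form_def Fe)+)
  have both: "(\<Sum>x\<leftarrow>t. \<Sum>a\<leftarrow>\<delta>P (fst x). \<Sum>b\<leftarrow>\<delta>P (snd x). F (fst a) (fst b) (snd a * snd b))
      = (\<Sum>x\<leftarrow>W. \<Sum>a\<leftarrow>\<delta>P (fst x). \<Sum>b\<leftarrow>\<delta>P (snd x). F (fst a) (fst b) (snd a * snd b))"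
    by (rule teq2E[OF W(1) vsP vsP, of "\<lambda>a b. \<Sum>a\<leftarrow>\<delta>P a. \<Sum>b\<leftarrow>\<delta>P b. F (fst a) (fst b) (snd a * snd b)"])
      (simp, ((auto intro!: lin_form_intros)?; simp add: lin_form_def Fe scaleH_mult distrib_left
        distrib_right)+)
  have coinv: "(\<Sum>a\<leftarrow>\<delta>P m. \<Sum>b\<leftarrow>\<delta>P y. F (fst a) (fst b) (snd a * snd b)) = (\<Sum>b\<leftarrow>\<delta>P y. F m (fst b) (snd b))"
    if "m \<in> M" for m y
    using that unfolding coinv_def mem_Collect_eq
    by (rule teq2E[OF _ vsP vsH, of _ _ "\<lambda>x h. \<Sum>b\<leftarrow>\<delta>P y. F x (fst b) (h * snd b)"])
      (simp, ((auto intro!: lin_form_intros)?; simp add: lin_form_def Fe scaleH_mult distrib_left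
        distrib_right)+)
  have "(\<Sum>x\<leftarrow>W. \<Sum>a\<leftarrow>\<delta>P (fst x). \<Sum>b\<leftarrow>\<delta>P (snd x). F (fst a) (fst b) (snd a * snd b))
      = (\<Sum>x\<leftarrow>W. \<Sum>b\<leftarrow>\<delta>P (snd x). F (fst x) (fst b) (snd b))"
    by (rule sum_list_map_cong) (use W(2) coinv in simp)
  with last both show "(\<Sum>x\<leftarrow>[(a, b', g). (a, b) \<leftarrow> t, (b', g) \<leftarrow> \<delta>P b]. F (fst x) (fst (snd x)) (snd (snd x))) =
      (\<Sum>x\<leftarrow>coact2 \<delta>P t. F (fst x) (fst (snd x)) (snd (snd x)))"
    by (simp add: coact2_def)
qed

lemma hor_d_colinear:
  "teq3 sP sP sH [(y1, y2', g). (y1, y2) \<leftarrow> hor_d p, (y2', g) \<leftarrow> \<delta>P y2]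
     [(y1, y2, g). (p', g) \<leftarrow> \<delta>P p, (y1, y2) \<leftarrow> hor_d p']"
  by (rule hor_d_first_legs_coinv[of p])
    (blast intro: teq3_trans[OF colinear_if_first_legs_coinv hor_d_equivariant])

definition lift :: "'h \<Rightarrow> ('p \<times> 'p) list" where
  "lift h = \<omega> h @ [(sP (\<epsilon> h) 1, 1)]"

lemma sum_lift: "(\<Sum>x\<leftarrow>lift h. G x) = (\<Sum>x\<leftarrow>\<omega> h. G x) + G (sP (\<epsilon> h) 1, 1)"
  by (simp add: lift_def)

lemma lin_form_sum_lift:
  assumes "\<And>w. lin_form sP (\<lambda>u. G (u, w))" "\<And>u. lin_form sP (\<lambda>w. G (u, w))"
  shows "lin_form sH (\<lambda>h. \<Sum>x\<leftarrow>lift h. G x)"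
  unfolding sum_lift
  by (intro lin_form_add lin_form_sum_omega assms, rule lin_form_compose[OF assms(1)])
    (auto simp: counit_simps vector_space_simps[OF vsP])

lemma lin_form_sum_lift_Sinv:
  assumes "\<And>w. lin_form sP (\<lambda>u. G (u, w))" "\<And>u. lin_form sP (\<lambda>w. G (u, w))"
  shows "lin_form sH (\<lambda>h. \<Sum>x\<leftarrow>lift (Sinv h). G x)"
  by (rule lin_form_compose[OF lin_form_sum_lift[OF assms]]) (auto simp: Sinv_add Sinv_scale)

lemma hor_d_complement:
  assumes g1: "\<And>y. lin_form sP (\<lambda>x. g x y)" and g2: "\<And>x. lin_form sP (\<lambda>y. g x y)"
  shows "g a b - (\<Sum>y\<leftarrow>hor_d b. g (a * fst y) (snd y))
    = (\<Sum>q\<leftarrow>\<delta>P b. \<Sum>w\<leftarrow>lift (snd q). g (a * (fst q * fst w)) (snd w))"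
proof -
  note ge = lin_form_simps[OF g1 vsP] lin_form_simps[OF g2 vsP]
  have "g (a * b) 1 = g (a * (\<Sum>q\<leftarrow>\<delta>P b. sP (\<epsilon> (snd q)) (fst q))) 1"
    by (simp add: deltaP_counit)
  then have counit: "g (a * b) 1 = (\<Sum>q\<leftarrow>\<delta>P b. g (a * sP (\<epsilon> (snd q)) (fst q)) 1)"
    by (simp add: sum_list_const_mult[symmetric] lin_form_sum_list[OF g1 vsP])
  have "(\<Sum>y\<leftarrow>hor_d b. g (a * fst y) (snd y)) = g (a * 1) b + g (a * - b) 1
      - (\<Sum>q\<leftarrow>\<delta>P b. \<Sum>w\<leftarrow>\<omega> (snd q). g (a * (fst q * fst w)) (snd w))"
    by (rule sum_hor_d[of "\<lambda>x y. g (a * x) y" b]) (simp_all add: lin_form_def ge scaleP_mult distrib_left)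
  with counit show ?thesis
    by (simp add: ge sum_list_addf sum_lift scaleP_mult mult.assoc)
qed

lemma can_preimage_sum:
  assumes t: "teq2 sP sH (can_map \<delta>P t) [(1, h)]"
    and "\<And>y. lin_form sP (\<lambda>x. \<Phi> x y)" "\<And>x. lin_form sH (\<lambda>y. \<Phi> x y)"
  shows "(\<Sum>x\<leftarrow>t. \<Sum>q\<leftarrow>\<delta>P (snd x). \<Phi> (fst x * fst q) (snd q)) = \<Phi> 1 h"
  using teq2D[OF t vsP vsH, of \<Phi>] assms(2,3) by (simp add: can_map_def)

lemma sum_lift_can_preimage:
  assumes t: "teq2 sP sH (can_map \<delta>P t) [(1, h)]"
    and g1: "\<And>y. lin_form sP (\<lambda>x. g x y)" and g2: "\<And>x. lin_form sP (\<lambda>y. g x y)"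
  shows "(\<Sum>x\<leftarrow>lift h. g (fst x) (snd x))
    = (\<Sum>x\<leftarrow>t. g (fst x) (snd x) - (\<Sum>y\<leftarrow>hor_d (snd x). g (fst x * fst y) (snd y)))"
proof -
  note ge = lin_form_simps[OF g1 vsP] lin_form_simps[OF g2 vsP]
  have "(\<Sum>x\<leftarrow>t. \<Sum>q\<leftarrow>\<delta>P (snd x). \<Sum>w\<leftarrow>lift (snd q). g (fst x * fst q * fst w) (snd w))
      = (\<Sum>w\<leftarrow>lift h. g (1 * fst w) (snd w))"
    by (rule can_preimage_sum[OF t, of "\<lambda>x k. \<Sum>w\<leftarrow>lift k. g (x * fst w) (snd w)"])
      ((auto intro!: lin_form_intros lin_form_sum_lift)?; simp add: lin_form_def ge scaleP_mult
        distrib_left distrib_right)+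
  then show ?thesis
    by (simp add: hor_d_complement[OF g1 g2] mult.assoc)
qed

lemma lift_colinear:
  "teq3 sP sP sH [(a, b', g). (a, b) \<leftarrow> lift h, (b', g) \<leftarrow> \<delta>P b] [(a, b, c). (x, c) \<leftarrow> \<Delta> h, (a, b) \<leftarrow> lift x]"
proof (rule teq3I[OF vsP vsP vsH])
  fix F :: "'p \<Rightarrow> 'p \<Rightarrow> 'h \<Rightarrow> 'k"
  assume F1: "\<And>y z. lin_form sP (\<lambda>x. F x y z)" and F2: "\<And>x z. lin_form sP (\<lambda>y. F x y z)"
    and F3: "\<And>x y. lin_form sH (\<lambda>z. F x y z)"
  note Fe = lin_form_simps[OF F1 vsP] lin_form_simps[OF F2 vsP] lin_form_simps[OF F3 vsH]
  obtain t where t: "teq2 sP sH (can_map \<delta>P t) [(1, h)]" using can_map_surj by blast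
  define SF where "SF a b = (\<Sum>q\<leftarrow>\<delta>P b. F a (fst q) (snd q))" for a b
  have SF_lin: "lin_form sP (\<lambda>x. SF x y)" "lin_form sP (\<lambda>y. SF x y)" for x y
    unfolding SF_def by ((auto intro!: lin_form_intros)?; simp add: lin_form_def Fe)+
  have colinear: "(\<Sum>y\<leftarrow>hor_d b. SF (a * fst y) (snd y))
      = (\<Sum>q\<leftarrow>\<delta>P b. \<Sum>y\<leftarrow>hor_d (fst q). F (a * fst y) (snd y) (snd q))" for a b
    unfolding SF_def
    by (rule teq3E[OF hor_d_colinear vsP vsP vsH, of "\<lambda>y1 y2 g. F (a * y1) y2 g" b])
      (simp_all add: lin_form_def Fe scaleP_mult distrib_left)
  have coassoc: "(\<Sum>q\<leftarrow>\<delta>P b. \<Sum>r\<leftarrow>\<delta>P (fst q). \<Sum>w\<leftarrow>lift (snd r). F (a * (fst r * fst w)) (snd w) (snd q))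
      = (\<Sum>q\<leftarrow>\<delta>P b. \<Sum>r\<leftarrow>\<Delta> (snd q). \<Sum>w\<leftarrow>lift (fst r). F (a * (fst q * fst w)) (snd w) (snd r))" for a b
    by (rule teq3E[OF deltaP_coassoc vsP vsH vsH, of "\<lambda>x k g. \<Sum>w\<leftarrow>lift k. F (a * (x * fst w)) (snd w) g" b])
      (simp, ((auto intro!: lin_form_intros lin_form_sum_lift)?; simp add: lin_form_def Fe scaleP_mult
        distrib_left distrib_right)+)
  have "(\<Sum>x\<leftarrow>lift h. SF (fst x) (snd x))
      = (\<Sum>x\<leftarrow>t. \<Sum>q\<leftarrow>\<delta>P (snd x). F (fst x) (fst q) (snd q)
          - (\<Sum>y\<leftarrow>hor_d (fst q). F (fst x * fst y) (snd y) (snd q)))"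
    unfolding sum_lift_can_preimage[OF t SF_lin] colinear by (simp add: SF_def sum_list_subtractf)
  also have "\<dots> = (\<Sum>x\<leftarrow>t. \<Sum>q\<leftarrow>\<delta>P (snd x). \<Sum>r\<leftarrow>\<Delta> (snd q). \<Sum>w\<leftarrow>lift (fst r).
      F (fst x * (fst q * fst w)) (snd w) (snd r))"
    by (simp add: hor_d_complement[of "\<lambda>x y. F x y _"] F1 F2 coassoc)
  also have "\<dots> = (\<Sum>r\<leftarrow>\<Delta> h. \<Sum>w\<leftarrow>lift (fst r). F (1 * fst w) (snd w) (snd r))"
  proof -
    have "lin_form sP (\<lambda>x. \<Sum>r\<leftarrow>\<Delta> y. \<Sum>w\<leftarrow>lift (fst r). F (x * fst w) (snd w) (snd r))"
      "lin_form sH (\<lambda>y. \<Sum>r\<leftarrow>\<Delta> y. \<Sum>w\<leftarrow>lift (fst r). F (x * fst w) (snd w) (snd r))" for x y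
      by ((auto intro!: lin_form_intros lin_form_sum_lift)?; simp add: lin_form_def Fe scaleP_mult
          distrib_left distrib_right)+
    from can_preimage_sum[OF t this] show ?thesis by (simp add: mult.assoc)
  qed
  finally show "(\<Sum>x\<leftarrow>[(a, b', g). (a, b) \<leftarrow> lift h, (b', g) \<leftarrow> \<delta>P b]. F (fst x) (fst (snd x)) (snd (snd x)))
    = (\<Sum>x\<leftarrow>[(a, b, c). (x, c) \<leftarrow> \<Delta> h, (a, b) \<leftarrow> lift x]. F (fst x) (fst (snd x)) (snd (snd x)))"
    by (simp add: SF_def)
qed

definition unit_lift :: "'v \<Rightarrow> ('p \<times> 'p \<times> 'v) list" where
  "unit_lift v = [(a, b, w). (w, g) \<leftarrow> \<delta>V v, (a, b) \<leftarrow> lift (Sinv g)]"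

lemma unit_lift_mult: "teq2 sP sV [(a * b, w). (a, b, w) \<leftarrow> unit_lift v] [(1, v)]"
proof (rule teq2I[OF vsP vsV])
  fix \<Phi> :: "'p \<Rightarrow> 'v \<Rightarrow> 'k"
  assume \<Phi>1: "\<And>y. lin_form sP (\<lambda>x. \<Phi> x y)" and \<Phi>2: "\<And>x. lin_form sV (\<lambda>y. \<Phi> x y)"
  note pe = lin_form_simps[OF \<Phi>1 vsP] lin_form_simps[OF \<Phi>2 vsV]
  have omega: "(\<Sum>a\<leftarrow>\<omega> h. \<Phi> (fst a * snd a) w) = 0" for h w
    using lin_form_sum_list[OF \<Phi>1 vsP, of "\<lambda>a. fst a * snd a" "\<omega> h" w, symmetric] omega_Omega1[of h]
    by (simp add: pe)
  have "(\<Sum>p\<leftarrow>[(a * b, w). (a, b, w) \<leftarrow> unit_lift v]. \<Phi> (fst p) (snd p))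
      = (\<Sum>q\<leftarrow>\<delta>V v. \<epsilon> (snd q) * \<Phi> 1 (fst q))"
    by (simp add: unit_lift_def sum_lift omega counit_Sinv pe)
  also have "\<dots> = \<Phi> 1 v" by (rule deltaV_counit_lin_form[OF \<Phi>2])
  finally show "(\<Sum>p\<leftarrow>[(a * b, w). (a, b, w) \<leftarrow> unit_lift v]. \<Phi> (fst p) (snd p)) = (\<Sum>p\<leftarrow>[(1, v)]. \<Phi> (fst p) (snd p))"
    by simp
qed

lemma unit_lift_P_tensor_E: "P_tensor_E (unit_lift v)"
  unfolding P_tensor_E_def
proof (rule teq4I[OF vsP vsP vsV vsH])
  fix F :: "'p \<Rightarrow> 'p \<Rightarrow> 'v \<Rightarrow> 'h \<Rightarrow> 'k"
  assume F1: "\<And>y z w. lin_form sP (\<lambda>x. F x y z w)" and F2: "\<And>x z w. lin_form sP (\<lambda>y. F x y z w)"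
    and F3: "\<And>x y w. lin_form sV (\<lambda>z. F x y z w)" and F4: "\<And>x y z. lin_form sH (\<lambda>w. F x y z w)"
  note Fe = lin_form_simps[OF F1 vsP] lin_form_simps[OF F2 vsP] lin_form_simps[OF F3 vsV]
    lin_form_simps[OF F4 vsH]
  define K where "K w g m = (\<Sum>x\<leftarrow>lift (Sinv g). F (fst x) (snd x) w m)" for w g m
  have K_lin: "lin_form sH (\<lambda>m. K w g m)" "lin_form sH (\<lambda>g. K w g m)" "lin_form sV (\<lambda>w. K w g m)" for w g m
    unfolding K_def
    by ((auto intro!: lin_form_intros lin_form_sum_lift_Sinv)?; simp add: lin_form_def Fe F1 F2)+
  have "(\<Sum>x\<leftarrow>lift (Sinv g). \<Sum>q\<leftarrow>\<delta>P (snd x). \<Sum>r\<leftarrow>\<delta>V w. F (fst x) (fst q) (fst r) (snd q * snd r))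
     = (\<Sum>c\<leftarrow>\<Delta> (Sinv g). \<Sum>x\<leftarrow>lift (fst c). \<Sum>r\<leftarrow>\<delta>V w. F (fst x) (snd x) (fst r) (snd c * snd r))" for g w
    by (rule teq3E[OF lift_colinear vsP vsP vsH, of "\<lambda>a b h. \<Sum>r\<leftarrow>\<delta>V w. F a b (fst r) (h * snd r)" "Sinv g"])
      (simp, ((auto intro!: lin_form_intros)?; simp add: lin_form_def Fe scaleH_mult distrib_right)+)
  also have "\<dots> g w = (\<Sum>q\<leftarrow>\<Delta> g. \<Sum>x\<leftarrow>lift (Sinv (snd q)). \<Sum>r\<leftarrow>\<delta>V w.
      F (fst x) (snd x) (fst r) (Sinv (fst q) * snd r))" for g w
    by (rule teq2E[OF Sinv_anticomult vsH vsH,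
          of "\<lambda>y c. \<Sum>x\<leftarrow>lift y. \<Sum>r\<leftarrow>\<delta>V w. F (fst x) (snd x) (fst r) (c * snd r)" g])
      (simp, ((auto intro!: lin_form_intros lin_form_sum_lift)?; simp add: lin_form_def Fe scaleH_mult
        distrib_right)+)
  also have "\<dots> g w = (\<Sum>q\<leftarrow>\<Delta> g. \<Sum>r\<leftarrow>\<delta>V w. K (fst r) (snd q) (Sinv (fst q) * snd r))" for g w
    unfolding K_def by (simp only: sum_list_map_swap[where ys="\<delta>V w"])
  finally have "(\<Sum>p\<leftarrow>[(a, b', w', g * g'). (a, b, w) \<leftarrow> unit_lift v, (b', g) \<leftarrow> \<delta>P b, (w', g') \<leftarrow> \<delta>V w].
      F (fst p) (fst (snd p)) (fst (snd (snd p))) (snd (snd (snd p))))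
    = (\<Sum>p\<leftarrow>\<delta>V v. \<Sum>r\<leftarrow>\<delta>V (fst p). \<Sum>q\<leftarrow>\<Delta> (snd p). K (fst r) (snd q) (Sinv (fst q) * snd r))"
    by (simp add: unit_lift_def sum_list_map_swap[where xs="\<Delta> _"])
  also have "\<dots> = (\<Sum>p\<leftarrow>\<delta>V v. K (fst p) (snd p) 1)"
    by (rule deltaV_cop_antipode_cancel[OF K_lin])
  finally show "(\<Sum>p\<leftarrow>[(a, b', w', g * g'). (a, b, w) \<leftarrow> unit_lift v, (b', g) \<leftarrow> \<delta>P b, (w', g') \<leftarrow> \<delta>V w].
      F (fst p) (fst (snd p)) (fst (snd (snd p))) (snd (snd (snd p))))
    = (\<Sum>p\<leftarrow>[(a, b, w, 1). (a, b, w) \<leftarrow> unit_lift v]. F (fst p) (fst (snd p)) (fst (snd (snd p))) (snd (snd (snd p))))"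
    by (simp add: unit_lift_def K_def)
qed

subsection \<open>The torsion takes values in \<open>\<Omega>\<^sup>2 M\<close>\<close>

lemma one_coinv: "1 \<in> M"
  using deltaP_one by (simp add: coinv_def)

lemma uminus_coinv:
  assumes "a \<in> M"
  shows "- a \<in> M"
proof -
  have a: "teq2 sP sH (\<delta>P a) [(a, 1)]" using assms by (simp add: coinv_def)
  have "teq2 sP sH (\<delta>P (- a)) [(- a, 1)]"
  proof (rule teq2I[OF vsP vsH])
    fix g assume g1: "\<And>y. lin_form sP (\<lambda>x. g x y)" and g2: "\<And>x. lin_form sH (\<lambda>y. g x y)"
    have "lin_form sP (\<lambda>x. \<Sum>q\<leftarrow>\<delta>P x. g (fst q) (snd q))"
      using g1 g2 by (intro lin_form_intros) auto
    from lin_form_simps(4)[OF this vsP, of a] teq2D[OF a vsP vsH g1 g2]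
    show "(\<Sum>q\<leftarrow>\<delta>P (- a). g (fst q) (snd q)) = (\<Sum>q\<leftarrow>[(- a, 1)]. g (fst q) (snd q))"
      using lin_form_simps(4)[OF g1 vsP] by simp
  qed
  then show ?thesis by (simp add: coinv_def)
qed

lemma dP_Omega1M: "a \<in> M \<Longrightarrow> dP a \<in> Omega1M sP M"
  unfolding Omega1M_def in_Omega1_def dP_def using one_coinv uminus_coinv
  by (auto intro!: exI[of _ "[(1, a), (- a, 1)]"])

lemma in_Omega1_teq2: "teq2 sP sP t u \<Longrightarrow> in_Omega1 t \<longleftrightarrow> in_Omega1 u"
proof -
  assume tu: "teq2 sP sP t u"
  have "(\<Sum>x\<leftarrow>t. fst x * snd x) = (\<Sum>x\<leftarrow>u. fst x * snd x)"
  proof (rule lin_forms_separate[OF vsP])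
    fix \<phi> assume L: "lin_form sP \<phi>"
    show "\<phi> (\<Sum>x\<leftarrow>t. fst x * snd x) = \<phi> (\<Sum>x\<leftarrow>u. fst x * snd x)"
      using teq2D[OF tu vsP vsP, of "\<lambda>a b. \<phi> (a * b)"]
      by (simp add: lin_form_sum_list[OF L vsP] lin_form_def lin_form_simps[OF L vsP] scaleP_mult
          distrib_left distrib_right)
  qed
  then show ?thesis by (simp add: in_Omega1_def)
qed

lemma d1_Omega1M:
  assumes "w \<in> Omega1M sP M"
  shows "d1 w \<in> Omega2M sP M"
proof -
  obtain u where u: "teq2 sP sP w u" "\<forall>(a, b)\<in>set u. a \<in> M \<and> b \<in> M" "in_Omega1 w"
    using assms unfolding Omega1M_def by auto
  have "teq3 sP sP sP (d1 w) (concat [mult11 (dP a) (dP b). (a, b) \<leftarrow> u])"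
    using teq3_trans[OF d1_teq2[OF u(1) vsP] d1_in_Omega1[OF _ vsP]] in_Omega1_teq2[OF u(1)] u(3) by blast
  moreover have "concat [mult11 (dP a) (dP b). (a, b) \<leftarrow> u] \<in> Omega2M sP M"
  proof -
    have "\<forall>(\<xi>, \<eta>)\<in>set [(dP a, dP b). (a, b) \<leftarrow> u]. \<xi> \<in> Omega1M sP M \<and> \<eta> \<in> Omega1M sP M"
      using u(2) dP_Omega1M by fastforce
    then show ?thesis
      unfolding Omega2M_def mem_Collect_eq by (intro exI[of _ "[(dP a, dP b). (a, b) \<leftarrow> u]"]) simp
  qed
  ultimately show ?thesis by (rule Omega2M_teq3)
qed

definition hor_d_family :: "('p \<times> 'v) list \<Rightarrow> ('p \<times> 'p \<times> 'v) list" where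
  "hor_d_family t = [(y1, y2, v). (p, v) \<leftarrow> t, (y1, y2) \<leftarrow> hor_d p]"

lemma hor_d_family_P_tensor_E:
  assumes t: "t \<in> E"
  shows "P_tensor_E (hor_d_family t)"
  unfolding P_tensor_E_def
proof (rule teq4I[OF vsP vsP vsV vsH])
  fix F :: "'p \<Rightarrow> 'p \<Rightarrow> 'v \<Rightarrow> 'h \<Rightarrow> 'k"
  assume F1: "\<And>y z w. lin_form sP (\<lambda>x. F x y z w)" and F2: "\<And>x z w. lin_form sP (\<lambda>y. F x y z w)"
    and F3: "\<And>x y w. lin_form sV (\<lambda>z. F x y z w)" and F4: "\<And>x y z. lin_form sH (\<lambda>w. F x y z w)"
  note Fe = lin_form_simps[OF F1 vsP] lin_form_simps[OF F2 vsP] lin_form_simps[OF F3 vsV]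
    lin_form_simps[OF F4 vsH]
  have colinear: "(\<Sum>y\<leftarrow>hor_d p. \<Sum>q\<leftarrow>\<delta>P (snd y). \<Sum>r\<leftarrow>\<delta>V v. F (fst y) (fst q) (fst r) (snd q * snd r))
      = (\<Sum>r\<leftarrow>\<delta>V v. \<Sum>q\<leftarrow>\<delta>P p. \<Sum>y\<leftarrow>hor_d (fst q). F (fst y) (snd y) (fst r) (snd q * snd r))" for p v
  proof -
    have "(\<Sum>y\<leftarrow>hor_d p. \<Sum>q\<leftarrow>\<delta>P (snd y). \<Sum>r\<leftarrow>\<delta>V v. F (fst y) (fst q) (fst r) (snd q * snd r))
        = (\<Sum>q\<leftarrow>\<delta>P p. \<Sum>y\<leftarrow>hor_d (fst q). \<Sum>r\<leftarrow>\<delta>V v. F (fst y) (snd y) (fst r) (snd q * snd r))"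
      by (rule teq3E[OF hor_d_colinear vsP vsP vsH, of "\<lambda>y1 y2 h. \<Sum>r\<leftarrow>\<delta>V v. F y1 y2 (fst r) (h * snd r)" p])
        (simp, ((auto intro!: lin_form_intros)?; simp add: lin_form_def Fe scaleH_mult distrib_right)+)
    then show ?thesis by (simp add: sum_list_map_swap[where ys="\<delta>V v"])
  qed
  have "(\<Sum>x\<leftarrow>t. \<Sum>q\<leftarrow>\<delta>P (fst x). \<Sum>r\<leftarrow>\<delta>V (snd x). \<Sum>y\<leftarrow>hor_d (fst q). F (fst y) (snd y) (fst r) (snd q * snd r))
      = (\<Sum>x\<leftarrow>t. \<Sum>y\<leftarrow>hor_d (fst x). F (fst y) (snd y) (snd x) 1)"
    using t unfolding Esec_def mem_Collect_eq
    by (rule teq3E[OF _ vsP vsV vsH, where f="\<lambda>p v m. \<Sum>y\<leftarrow>hor_d p. F (fst y) (snd y) v m"])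
      (simp, rule lin_form_sum_hor_d, simp_all add: F1 F2,
       ((auto intro!: lin_form_intros)?; simp add: lin_form_def Fe)+)
  then show "(\<Sum>p\<leftarrow>[(a, b', w', g * g'). (a, b, w) \<leftarrow> hor_d_family t, (b', g) \<leftarrow> \<delta>P b, (w', g') \<leftarrow> \<delta>V w].
      F (fst p) (fst (snd p)) (fst (snd (snd p))) (snd (snd (snd p))))
    = (\<Sum>p\<leftarrow>[(a, b, w, 1). (a, b, w) \<leftarrow> hor_d_family t].
      F (fst p) (fst (snd p)) (fst (snd (snd p))) (snd (snd (snd p))))"
    by (simp add: hor_d_family_def colinear sum_list_map_swap[where xs="\<delta>V _"])
qed

lemma hor_d_family_coinv_legs:
  obtains X where "teq3 sP sP sV (hor_d_family t) X" "fst ` set X \<subseteq> M"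
proof -
  define W where "W p = (SOME W. teq2 sP sP (hor_d p) W \<and> (\<forall>x\<in>set W. fst x \<in> M))" for p
  have W: "teq2 sP sP (hor_d p) (W p) \<and> (\<forall>x\<in>set (W p). fst x \<in> M)" for p
    unfolding W_def by (rule someI_ex) (meson hor_d_first_legs_coinv)
  have "teq3 sP sP sV (hor_d_family t) [(y1, y2, v). (p, v) \<leftarrow> t, (y1, y2) \<leftarrow> W p]"
  proof (rule teq3I[OF vsP vsP vsV])
    fix G assume G: "\<And>y z. lin_form sP (\<lambda>x. G x y z)" "\<And>x z. lin_form sP (\<lambda>y. G x y z)"
      "\<And>x y. lin_form sV (\<lambda>z. G x y z)"
    show "(\<Sum>x\<leftarrow>hor_d_family t. G (fst x) (fst (snd x)) (snd (snd x)))
      = (\<Sum>x\<leftarrow>[(y1, y2, v). (p, v) \<leftarrow> t, (y1, y2) \<leftarrow> W p]. G (fst x) (fst (snd x)) (snd (snd x)))"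
      unfolding hor_d_family_def
      using teq2D[OF conjunct1[OF W] vsP vsP, of "\<lambda>a b. G a b _", OF G(1,2)] by simp
  qed
  moreover have "fst ` set [(y1, y2, v). (p, v) \<leftarrow> t, (y1, y2) \<leftarrow> W p] \<subseteq> M"
    using W by fastforce
  ultimately show ?thesis by (rule that)
qed

lemma hor_d_family_decompose:
  assumes t: "t \<in> E"
  obtains L Xs where "set L \<subseteq> M" "\<forall>\<beta>. Xs \<beta> \<in> E"
    "\<And>K. (\<And>y v. lin_form sP (\<lambda>x. K x y v)) \<Longrightarrow> (\<And>x v. lin_form sP (\<lambda>y. K x y v)) \<Longrightarrow>
      (\<And>x y. lin_form sV (\<lambda>v. K x y v)) \<Longrightarrow>
      (\<Sum>x\<leftarrow>hor_d_family t. K (fst x) (fst (snd x)) (snd (snd x))) = (\<Sum>\<beta>\<leftarrow>L. \<Sum>x\<leftarrow>Xs \<beta>. K \<beta> (fst x) (snd x))"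
proof -
  obtain X where X: "teq3 sP sP sV (hor_d_family t) X" "fst ` set X \<subseteq> M"
    by (rule hor_d_family_coinv_legs)
  have "P_tensor_E X"
    using P_tensor_E_teq3[OF teq3_sym[OF X(1)] hor_d_family_P_tensor_E[OF t]] .
  then obtain L Xs where L: "set L \<subseteq> M" and Xs: "\<forall>\<beta>. Xs \<beta> \<in> E"
    and decompose: "\<And>K. (\<And>y v. lin_form sP (\<lambda>x. K x y v)) \<Longrightarrow> (\<And>x v. lin_form sP (\<lambda>y. K x y v)) \<Longrightarrow>
      (\<Sum>x\<leftarrow>X. K (fst x) (fst (snd x)) (snd (snd x))) = (\<Sum>\<beta>\<leftarrow>L. \<Sum>x\<leftarrow>Xs \<beta>. K \<beta> (fst x) (snd x))"
    by (rule P_tensor_E_decompose[OF _ X(2)]) (rule that, assumption+, blast)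
  show ?thesis
  proof (rule that[OF L Xs])
    fix K :: "'p \<Rightarrow> 'p \<Rightarrow> 'v \<Rightarrow> 'k"
    assume "\<And>y v. lin_form sP (\<lambda>x. K x y v)" "\<And>x v. lin_form sP (\<lambda>y. K x y v)"
      "\<And>x y. lin_form sV (\<lambda>v. K x y v)"
    then show "(\<Sum>x\<leftarrow>hor_d_family t. K (fst x) (fst (snd x)) (snd (snd x)))
      = (\<Sum>\<beta>\<leftarrow>L. \<Sum>x\<leftarrow>Xs \<beta>. K \<beta> (fst x) (snd x))"
      using teq3D[OF X(1) vsP vsP vsV, of K] decompose[of K] by simp
  qed
qed

lemma neg_hor_d_theta_Omega2M:
  assumes t: "t \<in> E"
  shows "neg3 (concat [mult11 (hor_d p) (\<theta> v). (p, v) \<leftarrow> t]) \<in> Omega2M sP M"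
proof -
  obtain L Xs where L: "set L \<subseteq> M" and Xs: "\<forall>\<beta>. Xs \<beta> \<in> E"
    and X_sum: "\<And>K. (\<And>y v. lin_form sP (\<lambda>x. K x y v)) \<Longrightarrow> (\<And>x v. lin_form sP (\<lambda>y. K x y v)) \<Longrightarrow>
      (\<And>x y. lin_form sV (\<lambda>v. K x y v)) \<Longrightarrow>
      (\<Sum>x\<leftarrow>hor_d_family t. K (fst x) (fst (snd x)) (snd (snd x))) = (\<Sum>\<beta>\<leftarrow>L. \<Sum>x\<leftarrow>Xs \<beta>. K \<beta> (fst x) (snd x))"
    by (rule hor_d_family_decompose[OF t]) (rule that, assumption+, blast)
  have "teq3 sP sP sP (neg3 (concat [mult11 (hor_d p) (\<theta> v). (p, v) \<leftarrow> t]))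
      (concat [mult11 (dP \<beta>) (s_theta \<theta> (Xs \<beta>)). \<beta> \<leftarrow> L])"
  proof (rule teq3I[OF vsP vsP vsP])
    fix f assume f1: "\<And>y z. lin_form sP (\<lambda>x. f x y z)" and f2: "\<And>x z. lin_form sP (\<lambda>y. f x y z)"
      and f3: "\<And>x y. lin_form sP (\<lambda>z. f x y z)"
    note fe = lin_form_simps[OF f1 vsP] lin_form_simps[OF f2 vsP] lin_form_simps[OF f3 vsP]
    define D where "D y1 y2 v = (\<Sum>b\<leftarrow>\<theta> v. f y1 (y2 * fst b) (snd b))" for y1 y2 v
    define C where "C y1 y2 v = (\<Sum>b\<leftarrow>\<theta> v. f 1 (y1 * (y2 * fst b)) (snd b))" for y1 y2 v
    have DC_lin: "lin_form sP (\<lambda>x. D x y v)" "lin_form sP (\<lambda>y. D x y v)" "lin_form sV (\<lambda>v. D x y v)"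
      "lin_form sP (\<lambda>x. C x y v)" "lin_form sP (\<lambda>y. C x y v)" "lin_form sV (\<lambda>v. C x y v)" for x y v
      unfolding D_def C_def by ((auto intro!: lin_form_intros)?; simp add: lin_form_def fe scaleP_mult
          distrib_left distrib_right)+
    have "(\<Sum>y\<leftarrow>hor_d p. C (fst y) (snd y) v) = 0" for p v
      using arg_cong[OF hor_d_Omega1, of "\<lambda>z. \<Sum>b\<leftarrow>\<theta> v. f 1 (z * fst b) (snd b)" p]
      by (simp add: C_def mult.assoc lin_form_sum_list[OF f2 vsP] fe sum_list_mult_const[symmetric]
          sum_list_map_swap[where ys="\<theta> v"])
    then have "(\<Sum>\<beta>\<leftarrow>L. \<Sum>x\<leftarrow>Xs \<beta>. C \<beta> (fst x) (snd x)) = 0"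
      by (simp add: X_sum[of C, OF DC_lin(4-6), symmetric] hor_d_family_def)
    moreover have "(\<Sum>p\<leftarrow>neg3 (concat [mult11 (hor_d p) (\<theta> v). (p, v) \<leftarrow> t]). f (fst p) (fst (snd p)) (snd (snd p)))
        = - (\<Sum>x\<leftarrow>hor_d_family t. D (fst x) (fst (snd x)) (snd (snd x)))"
      by (simp add: hor_d_family_def neg3_def mult11_def D_def fe sum_list_map_uminus)
    moreover note X_sum[of D, OF DC_lin(1-3)]
    ultimately show "(\<Sum>p\<leftarrow>neg3 (concat [mult11 (hor_d p) (\<theta> v). (p, v) \<leftarrow> t]). f (fst p) (fst (snd p)) (snd (snd p)))
        = (\<Sum>p\<leftarrow>concat [mult11 (dP \<beta>) (s_theta \<theta> (Xs \<beta>)). \<beta> \<leftarrow> L]. f (fst p) (fst (snd p)) (snd (snd p)))"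
      by (simp add: mult11_def dP_def s_theta_def lmul2_def C_def D_def fe sum_list_addf
          sum_list_subtractf sum_list_map_uminus)
  qed
  moreover have "concat [mult11 (dP \<beta>) (s_theta \<theta> (Xs \<beta>)). \<beta> \<leftarrow> L] \<in> Omega2M sP M"
    unfolding Omega2M_def using L dP_Omega1M s_theta_Omega1M Xs
    by (auto intro!: exI[of _ "[(dP \<beta>, s_theta \<theta> (Xs \<beta>)). \<beta> \<leftarrow> L]"] simp: subset_iff)
  ultimately show ?thesis by (rule Omega2M_teq3)
qed

lemma nabla_hor_d_theta:
  assumes t: "t \<in> E" "teq2 sP sP (s_theta \<theta> t) w"
  shows "teq3 sP sP sP (Nabla w)
    (concat [mult11 (hor_d p) (\<theta> v). (p, v) \<leftarrow> s_theta_inv w])"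
proof (rule teq3I[OF vsP vsP vsP])
  fix f assume f1: "\<And>y z. lin_form sP (\<lambda>x. f x y z)" and f2: "\<And>x z. lin_form sP (\<lambda>y. f x y z)"
    and f3: "\<And>x y. lin_form sP (\<lambda>z. f x y z)"
  note fe = lin_form_simps[OF f1 vsP] lin_form_simps[OF f2 vsP] lin_form_simps[OF f3 vsP]
  define D where "D y1 y2 v = (\<Sum>b\<leftarrow>\<theta> v. f y1 (y2 * fst b) (snd b))" for y1 y2 v
  have D_lin: "lin_form sP (\<lambda>x. D x y v)" "lin_form sP (\<lambda>y. D x y v)" for x y v
    unfolding D_def by ((auto intro!: lin_form_intros)?; simp add: lin_form_def fe scaleP_mult distrib_right)+
  have "(\<Sum>a\<leftarrow>w. f 1 (fst a) (snd a)) = (\<Sum>x\<leftarrow>s_theta_inv w. \<Sum>b\<leftarrow>\<theta> (snd x). f 1 (fst x * fst b) (snd b))"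
    using teq2D[OF teq2_sym[OF s_theta_inv(2)[OF t]] vsP vsP, of "f 1"] f2 f3
    by (simp add: s_theta_def lmul2_def)
  then show "(\<Sum>p\<leftarrow>Nabla w. f (fst p) (fst (snd p)) (snd (snd p)))
      = (\<Sum>p\<leftarrow>concat [mult11 (hor_d p) (\<theta> v). (p, v) \<leftarrow> s_theta_inv w]. f (fst p) (fst (snd p)) (snd (snd p)))"
    unfolding nabla_def Let_def s_theta_inv_def[symmetric]
    by (simp add: sum_hor_d[OF D_lin, unfolded D_def] mult11_def neg3_def lmul3_def fe sum_list_addf
        sum_list_subtractf sum_list_map_uminus mult.assoc)
qed

lemma torsion_Omega2M:
  assumes e: "e \<in> E"
  shows "Tor (s_theta \<theta> e) \<in> Omega2M sP M"
proof -
  have "s_theta_inv (s_theta \<theta> e) \<in> E" by (rule s_theta_inv(1)[OF e teq2_refl])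
  then have "neg3 (Nabla (s_theta \<theta> e)) \<in> Omega2M sP M"
    using Omega2M_teq3[OF teq3_neg3[OF nabla_hor_d_theta[OF e teq2_refl] vsP vsP vsP]
        neg_hor_d_theta_Omega2M] by blast
  then show ?thesis
    unfolding torsion_def by (intro Omega2M_append d1_Omega1M s_theta_Omega1M[OF e])
qed

subsection \<open>\<open>D\<theta>\<close> takes values in \<open>P \<Omega>\<^sup>2 M\<close>\<close>

lemma Dbar_P_Omega2M: "Dbar v \<in> P_Omega2M sP M"
proof -
  obtain L Zs where "set L \<subseteq> UNIV" and Zs: "\<forall>\<beta>. Zs \<beta> \<in> E"
    and decompose: "\<And>K. (\<And>y v. lin_form sP (\<lambda>x. K x y v)) \<Longrightarrow> (\<And>x v. lin_form sP (\<lambda>y. K x y v)) \<Longrightarrow>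
      (\<Sum>x\<leftarrow>unit_lift v. K (fst x) (fst (snd x)) (snd (snd x))) = (\<Sum>\<beta>\<leftarrow>L. \<Sum>x\<leftarrow>Zs \<beta>. K \<beta> (fst x) (snd x))"
    by (rule P_tensor_E_decompose[OF unit_lift_P_tensor_E[of v] subset_UNIV]) (rule that, assumption+, blast)
  have "teq3 sP sP sP (Dbar v) (concat [lmul3 \<beta> (Tor (s_theta \<theta> (Zs \<beta>))). \<beta> \<leftarrow> L])"
  proof (rule teq3I[OF vsP vsP vsP])
    fix f assume f1: "\<And>y z. lin_form sP (\<lambda>x. f x y z)" and f2: "\<And>x z. lin_form sP (\<lambda>y. f x y z)"
      and f3: "\<And>x y. lin_form sP (\<lambda>z. f x y z)"
    note fe = lin_form_simps[OF f1 vsP] lin_form_simps[OF f2 vsP] lin_form_simps[OF f3 vsP]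
    define \<Phi> where "\<Phi> x w = (\<Sum>c\<leftarrow>Dbar w. f (x * fst c) (fst (snd c)) (snd (snd c)))" for x w
    have \<Phi>1: "lin_form sP (\<lambda>x. \<Phi> x w)" for w
      unfolding \<Phi>_def by ((auto intro!: lin_form_intros)?; simp add: lin_form_def fe scaleP_mult distrib_right)
    have \<Phi>2: "lin_form sV (\<lambda>w. \<Phi> x w)" for x
      unfolding \<Phi>_def by (rule lin_form_sum_Dbar) (simp_all add: lin_form_def fe scaleP_mult distrib_left)
    have slice: "(\<Sum>x\<leftarrow>Zs \<beta>. \<Phi> (\<beta> * fst x) (snd x))
      = (\<Sum>c\<leftarrow>Tor (s_theta \<theta> (Zs \<beta>)). f (\<beta> * fst c) (fst (snd c)) (snd (snd c)))"
      for \<beta>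
      by (rule teq3E[OF teq3_sym[OF torsion_s_theta[OF Zs[rule_format]]] vsP vsP vsP, of "\<lambda>a b c. f (\<beta> * a) b c"])
        (simp add: \<Phi>_def lmul3_def mult.assoc, simp_all add: lin_form_def fe scaleP_mult distrib_left)
    have "(\<Sum>c\<leftarrow>Dbar v. f (fst c) (fst (snd c)) (snd (snd c))) = \<Phi> 1 v" by (simp add: \<Phi>_def)
    also have "\<dots> = (\<Sum>x\<leftarrow>unit_lift v. \<Phi> (fst x * fst (snd x)) (snd (snd x)))"
      using teq2D[OF unit_lift_mult vsP vsV, of \<Phi>, OF \<Phi>1 \<Phi>2] by simp
    also have "\<dots> = (\<Sum>\<beta>\<leftarrow>L. \<Sum>x\<leftarrow>Zs \<beta>. \<Phi> (\<beta> * fst x) (snd x))"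
      by (rule decompose[of "\<lambda>a b w. \<Phi> (a * b) w"])
        (simp_all add: lin_form_def lin_form_simps[OF \<Phi>1 vsP] scaleP_mult distrib_left distrib_right)
    finally show "(\<Sum>c\<leftarrow>Dbar v. f (fst c) (fst (snd c)) (snd (snd c)))
      = (\<Sum>c\<leftarrow>concat [lmul3 \<beta> (Tor (s_theta \<theta> (Zs \<beta>))). \<beta> \<leftarrow> L].
          f (fst c) (fst (snd c)) (snd (snd c)))"
      by (simp add: slice lmul3_def)
  qed
  then show ?thesis
    unfolding P_Omega2M_def using torsion_Omega2M Zs
    by (auto intro!: exI[of _ "[(\<beta>, Tor (s_theta \<theta> (Zs \<beta>))). \<beta> \<leftarrow> L]"])
qed

lemma Dbar_rst2: "rst2 sP sH sV \<delta>P \<delta>V Dbar"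
  unfolding rst2_def using Dbar_tlin3 Dbar_equivariant Dbar_P_Omega2M by blast

end

theorem proposition3p5:
  fixes sP :: "'k::field \<Rightarrow> 'p::ring_1 \<Rightarrow> 'p"
    and sH :: "'k \<Rightarrow> 'h::ring_1 \<Rightarrow> 'h"
    and sV :: "'k \<Rightarrow> 'v::ab_group_add \<Rightarrow> 'v"
    and \<Delta> :: "'h \<Rightarrow> ('h \<times> 'h) list" and \<epsilon> :: "'h \<Rightarrow> 'k" and S :: "'h \<Rightarrow> 'h"
    and \<delta>P :: "'p \<Rightarrow> ('p \<times> 'h) list" and \<delta>V :: "'v \<Rightarrow> ('v \<times> 'h) list"
    and \<theta> :: "'v \<Rightarrow> ('p \<times> 'p) list" and \<omega> :: "'h \<Rightarrow> ('p \<times> 'p) list"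
  assumes "frame_resolution sP sH sV \<Delta> \<epsilon> S \<delta>P \<delta>V \<theta>"
    and "connection sP sH \<Delta> \<epsilon> S \<delta>P \<omega>"
    and "left_strong sP sH \<delta>P \<omega>"
  shows "rst2 sP sH sV \<delta>P \<delta>V (Dbar_theta S \<delta>V \<theta> \<omega>) \<and>
         (\<forall>t \<in> Esec sP sH sV \<delta>P \<delta>V.
            teq3 sP sP sP (torsion sP sH sV \<delta>P \<delta>V \<theta> \<omega> (s_theta \<theta> t))
                 (concat (map (\<lambda>(p, v). lmul3 p (Dbar_theta S \<delta>V \<theta> \<omega> v)) t)))"
proof -
  interpret frame_connection sH \<Delta> \<epsilon> S sP \<delta>P sV \<delta>V \<theta> \<omega>
    using assms by unfold_locales (auto simp: frame_resolution_def quantum_principal_bundle_def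
        right_comodule_algebra_def)
  show ?thesis using Dbar_rst2 torsion_s_theta by blast
qed

end
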